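(* Consider any concurrent run of the Block-STM algorithm (described in the context) on a block of $n$ transactions. Assume that every thread keeps taking steps until it joins, and that $\mathtt{VM.execute}$ is wait-free (every invocation completes within finitely many steps of the invoking thread). Then all threads eventually join (return from $\mathtt{run}$).
   Context: Model: threads perform atomic operations that appear to take place in a single global order; locks protect per-transaction status and dependency sets. Problem. A block is a sequence of transactions $tx_0,\dots,tx_{n-1}$ ($n=\mathtt{BLOCK.size()}$), each a deterministic program reading and writing memory locations. Shared state. MVMemory: a map $\mathit{data}$ from $(\text{location},\text{txn index})$ to (incarnation number, value) or a marker ESTIMATE; arrays $\mathit{last\_written\_locations}[j]$, $\mathit{last\_read\_set}[j]$, accessed atomically. A version is $(j,i)$. Scheduler: atomic counters $\mathit{execution\_idx}=0$, $\mathit{validation\_idx}=0$, $\mathit{decrease\_cnt}=0$, $\mathit{num\_active\_tasks}=0$, flag $\mathit{done\_marker}=$false; lock-protected $\mathit{txn\_status}[j]=(\text{incarnation},\text{status})$, initially $(0,\mathtt{READY\_TO\_EXECUTE})$, status $\in\{\mathtt{READY\_TO\_EXECUTE},\mathtt{EXECUTING},\mathtt{EXECUTED},\mathtt{ABORTING}\}$; lock-protected dependency sets $\mathit{txn\_dependency}[j]$, initially empty. MVMemory operations. $\mathtt{read}(p,j)$: largest $k<j$ with an entry $(p,k)$; none: NOT_FOUND; ESTIMATE: READ_ERROR with blocking index $k$; else OK with version and value. $\mathtt{record}((j,i),R,W)$: write $\mathit{data}[(p,j)]:=(i,v)$ for $(p,v)\in W$, remove entries $(p,j)$ of previously written but not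 rewritten locations, update $\mathit{last\_written\_locations}[j]$ and $\mathit{last\_read\_set}[j]:=R$, return whether a new location was written. $\mathtt{convert\_writes\_to\_estimates}(j)$ sets all entries $(p,j)$, $p\in\mathit{last\_written\_locations}[j]$, to ESTIMATE. $\mathtt{validate\_read\_set}(j)$ returns true iff re-reading each recorded location with $\mathtt{read}(p,j)$ gives the same recorded version (NOT_FOUND for $\bot$) and no READ_ERROR. VM.execute($j$) runs $tx_j$ locally, reading own writes, else $\mathtt{read}(p,j)$ (NOT_FOUND: read initial storage, record $(p,\bot)$; OK: record version; READ_ERROR: stop, return blocking index); never writes shared memory. Scheduler. $\mathtt{decrease\_execution\_idx}(t)$/$\mathtt{decrease\_validation\_idx}(t)$: index $:=\min(\text{index},t)$, then increment $\mathit{decrease\_cnt}$. $\mathtt{try\_incarnate}(k)$: if $k<n$ and, under lock, $tx_k$'s status is $\mathtt{READY\_TO\_EXECUTE}$ (incarnation $i$), set $\mathtt{EXECUTING}$, return $(k,i)$; else decrement $\mathit{num\_active\_tasks}$, return none. $\mathtt{next\_task}$: if $\mathit{validation\_idx}<\mathit{execution\_idx}$: if $\mathit{validation\_idx}\ge n$ call check_done, return none; else increment $\mathit{num\_active\_tasks}$, fetch-and-increment $\mathit{validation\_idx}$ obtaining $k$; if $k<n$ and $tx_k$'s status is $\mathtt{EXECUTED}$ (incarnation $i$) return validation task $(k,i)$, else decrement $\mathit{num\_active\_tasks}$. Otherwise: if $\mathit{execution\_idx}\ge n$ call check_done, return none; else increment $\mathit{num\_active\_tasks}$, fetch-and-increment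 $\mathit{execution\_idx}$ obtaining $k$, return $\mathtt{try\_incarnate}(k)$. $\mathtt{check\_done}$: read $c:=\mathit{decrease\_cnt}$, then if $\min(\mathit{execution\_idx},\mathit{validation\_idx})\ge n$, then $\mathit{num\_active\_tasks}=0$, then $\mathit{decrease\_cnt}=c$, set $\mathit{done\_marker}:=$true. Execution task $(k,i)$: run VM.execute($k$). On READ_ERROR with blocking $b$: acquire lock of $\mathit{txn\_dependency}[b]$ and then (while holding it) the status lock of $tx_b$; if $tx_b$'s status is $\mathtt{EXECUTED}$ retry execution; else set $tx_k$'s status $\mathtt{ABORTING}$, add $k$ to $\mathit{txn\_dependency}[b]$, release, decrement $\mathit{num\_active\_tasks}$. Otherwise $w:=\mathtt{record}(\dots)$; set status $\mathtt{EXECUTED}$; swap out $\mathit{txn\_dependency}[k]$, set each dependent $d$ to $(\text{incarnation}+1,\mathtt{READY\_TO\_EXECUTE})$ and if any, $\mathtt{decrease\_execution\_idx}$(min dependent); if $\mathit{validation\_idx}>k$: if $w$, $\mathtt{decrease\_validation\_idx}(k)$, else return validation task $(k,i)$ keeping $\mathit{num\_active\_tasks}$; if no task returned, decrement $\mathit{num\_active\_tasks}$. Validation task $(k,i)$: if $\mathtt{validate\_read\_set}(k)$ fails and under lock $\mathit{txn\_status}[k]=(i,\mathtt{EXECUTED})$, set $\mathtt{ABORTING}$ (aborted). If aborted: convert writes of $k$ to ESTIMATE; $\mathit{txn\_status}[k]:=(i+1,\mathtt{READY\_TO\_EXECUTE})$; $\mathtt{decrease\_validation\_idx}(k+1)$;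 if $\mathit{execution\_idx}>k$ and $\mathtt{try\_incarnate}(k)$ returns a version, return that execution task keeping $\mathit{num\_active\_tasks}$. Otherwise decrement $\mathit{num\_active\_tasks}$. $\mathtt{run}$: while $\mathit{done\_marker}$ is false, perform the task in hand (an execution task may yield a validation task and vice versa) or obtain one via next_task. A thread joins when it returns from $\mathtt{run}$. *)

theory Defs
  imports Main
begin

text \<open>Transactions are deterministic programs, given as a step function on a local
  program state 's: each instruction is a read of a location (continuation depends on
  the value read), a write, or termination.\<close>

datatype ('l, 'v, 's) instr = IRead 'l "'v \<Rightarrow> 's" | IWrite 'l 'v 's | IDone

text \<open>Wait-freedom of VM.execute for a program state: every execution path, whatever
  values the reads return, reaches termination after finitely many instructions.\<close>

inductive wait_free :: "('s \<Rightarrow> ('l, 'v, 's) instr) \<Rightarrow> 's \<Rightarrow> bool" for vstep where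
  wf_done: "vstep s = IDone \<Longrightarrow> wait_free vstep s"
| wf_write: "vstep s = IWrite l v s' \<Longrightarrow> wait_free vstep s' \<Longrightarrow> wait_free vstep s"
| wf_read: "vstep s = IRead l f \<Longrightarrow> (\<forall>v. wait_free vstep (f v)) \<Longrightarrow> wait_free vstep s"

datatype st = READY_TO_EXECUTE | EXECUTING | EXECUTED | ABORTING

datatype 'v entry = EVal nat 'v | ESTIMATE

type_synonym version = "nat \<times> nat"
type_synonym 'l rset = "('l \<times> version option) list"

datatype 'v rres = NOT_FOUND | OK version 'v | READ_ERROR nat

datatype task = ExecTask nat nat | ValTask nat nat

record ('l, 'v) shared =
  data :: "'l \<Rightarrow> nat \<Rightarrow> 'v entry option"
  last_written :: "nat \<Rightarrow> 'l list"
  last_read_set :: "nat \<Rightarrow> 'l rset"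
  execution_idx :: nat
  validation_idx :: nat
  decrease_cnt :: nat
  num_active_tasks :: nat
  done_marker :: bool
  txn_status :: "nat \<Rightarrow> nat \<times> st"
  txn_dependency :: "nat \<Rightarrow> nat set"

definition init_shared :: "('l, 'v) shared" where
  "init_shared = \<lparr> data = (\<lambda>_ _. None), last_written = (\<lambda>_. []),
     last_read_set = (\<lambda>_. []), execution_idx = 0, validation_idx = 0, decrease_cnt = 0,
     num_active_tasks = 0, done_marker = False,
     txn_status = (\<lambda>_. (0, READY_TO_EXECUTE)), txn_dependency = (\<lambda>_. {}) \<rparr>"

definition mv_read :: "('l, 'v) shared \<Rightarrow> 'l \<Rightarrow> nat \<Rightarrow> 'v rres" where
  "mv_read \<sigma> p j =
     (let K = {k. k < j \<and> data \<sigma> p k \<noteq> None} in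
      if K = {} then NOT_FOUND
      else (let k = Max K in
            case the (data \<sigma> p k) of ESTIMATE \<Rightarrow> READ_ERROR k | EVal i v \<Rightarrow> OK (k, i) v))"

definition read_ok :: "('l, 'v) shared \<Rightarrow> nat \<Rightarrow> 'l \<times> version option \<Rightarrow> bool" where
  "read_ok \<sigma> j e = (case mv_read \<sigma> (fst e) j of
      NOT_FOUND \<Rightarrow> snd e = None
    | OK ver _ \<Rightarrow> snd e = Some ver
    | READ_ERROR _ \<Rightarrow> False)"

text \<open>Every
  transition performed by a thread is one atomic operation on shared memory (or a purely
  local step); lock-protected critical sections are single atomic steps.\<close>

datatype ('l, 'v, 's) pc =
    PLoop "task option"  \<comment> \<open>top of the run loop, task in hand\<close>
  | PJoined
  | PDec
  \<comment> \<open>next_task\<close>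
  | PNT0 | PNT1 nat
  | PVB0 | PVB1 | PVB2 | PVB3 nat
  | PEB0 | PEB1 | PEB2 | PTI nat
  \<comment> \<open>check_done\<close>
  | PCD0 | PCD1 nat | PCD2 nat nat | PCD3 nat | PCD4 nat | PCD5
  \<comment> \<open>execution task: VM.execute (VM state, write buffer, written locations, read set)\<close>
  | PExec nat nat 's "'l \<Rightarrow> 'v option" "'l list" "'l rset"
  | PDep nat nat nat
  \<comment> \<open>record\<close>
  | PRW nat nat "('l \<times> 'v) list" "'l rset" "'l list" "('l \<times> 'v) list"
  | PRD nat nat "('l \<times> 'v) list" "'l rset" "'l list" "'l list"
  | PRL nat nat "('l \<times> 'v) list" "'l rset" "'l list"
  | PRR nat nat "'l rset" bool
  \<comment> \<open>finish execution\<close>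
  | PF0 nat nat bool | PF1 nat nat bool | PF2 nat nat bool "nat list" "nat list"
  | PF3 nat nat bool nat | PF4 nat nat bool | PF5 nat nat bool | PF6 nat | PF7
  \<comment> \<open>validation task\<close>
  | PV0 nat nat | PV1 nat nat "'l rset" | PVA nat nat
  | PC0 nat nat | PC1 nat nat "'l list" | PS nat nat
  | PDV nat | PDV2 nat | PVE nat | PVT nat

definition upd_status :: "nat \<Rightarrow> nat \<times> st \<Rightarrow> ('l, 'v) shared \<Rightarrow> ('l, 'v) shared" where
  "upd_status k x \<sigma> = \<sigma>\<lparr>txn_status := (txn_status \<sigma>)(k := x)\<rparr>"

definition upd_data :: "'l \<Rightarrow> nat \<Rightarrow> 'v entry option \<Rightarrow> ('l, 'v) shared \<Rightarrow> ('l, 'v) shared" where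
  "upd_data p k x \<sigma> = \<sigma>\<lparr>data := (data \<sigma>)(p := (data \<sigma> p)(k := x))\<rparr>"

text \<open>One atomic step of a thread.  Parameters: block size n, VM step function vstep,
  initial VM state txn j of transaction j, initial storage init.\<close>

fun tstep :: "nat \<Rightarrow> ('s \<Rightarrow> ('l, 'v, 's) instr) \<Rightarrow> (nat \<Rightarrow> 's) \<Rightarrow> ('l \<Rightarrow> 'v)
      \<Rightarrow> ('l, 'v) shared \<Rightarrow> ('l, 'v, 's) pc \<Rightarrow> ('l, 'v) shared \<times> ('l, 'v, 's) pc" where
  "tstep n vstep txn init \<sigma> PJoined = (\<sigma>, PJoined)"
| "tstep n vstep txn init \<sigma> (PLoop t) =
     (if done_marker \<sigma> then (\<sigma>, PJoined)
      else (case t of None \<Rightarrow> (\<sigma>, PNT0)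
              | Some (ExecTask k i) \<Rightarrow> (\<sigma>, PExec k i (txn k) Map.empty [] [])
              | Some (ValTask k i) \<Rightarrow> (\<sigma>, PV0 k i)))"
| "tstep n vstep txn init \<sigma> PDec =
     (\<sigma>\<lparr>num_active_tasks := num_active_tasks \<sigma> - 1\<rparr>, PLoop None)"
| "tstep n vstep txn init \<sigma> PNT0 = (\<sigma>, PNT1 (validation_idx \<sigma>))"
| "tstep n vstep txn init \<sigma> (PNT1 a) =
     (\<sigma>, if a < execution_idx \<sigma> then PVB0 else PEB0)"
| "tstep n vstep txn init \<sigma> PVB0 = (\<sigma>, if validation_idx \<sigma> \<ge> n then PCD0 else PVB1)"
| "tstep n vstep txn init \<sigma> PVB1 =
     (\<sigma>\<lparr>num_active_tasks := num_active_tasks \<sigma> + 1\<rparr>, PVB2)"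
| "tstep n vstep txn init \<sigma> PVB2 =
     (\<sigma>\<lparr>validation_idx := validation_idx \<sigma> + 1\<rparr>, PVB3 (validation_idx \<sigma>))"
| "tstep n vstep txn init \<sigma> (PVB3 k) =
     (if k < n \<and> snd (txn_status \<sigma> k) = EXECUTED
      then (\<sigma>, PLoop (Some (ValTask k (fst (txn_status \<sigma> k)))))
      else (\<sigma>, PDec))"
| "tstep n vstep txn init \<sigma> PEB0 = (\<sigma>, if execution_idx \<sigma> \<ge> n then PCD0 else PEB1)"
| "tstep n vstep txn init \<sigma> PEB1 =
     (\<sigma>\<lparr>num_active_tasks := num_active_tasks \<sigma> + 1\<rparr>, PEB2)"
| "tstep n vstep txn init \<sigma> PEB2 =
     (\<sigma>\<lparr>execution_idx := execution_idx \<sigma> + 1\<rparr>, PTI (execution_idx \<sigma>))"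
| "tstep n vstep txn init \<sigma> (PTI k) =
     (if k < n \<and> snd (txn_status \<sigma> k) = READY_TO_EXECUTE
      then (upd_status k (fst (txn_status \<sigma> k), EXECUTING) \<sigma>,
            PLoop (Some (ExecTask k (fst (txn_status \<sigma> k)))))
      else (\<sigma>, PDec))"
| "tstep n vstep txn init \<sigma> PCD0 = (\<sigma>, PCD1 (decrease_cnt \<sigma>))"
| "tstep n vstep txn init \<sigma> (PCD1 c) = (\<sigma>, PCD2 c (execution_idx \<sigma>))"
| "tstep n vstep txn init \<sigma> (PCD2 c e) =
     (\<sigma>, if min e (validation_idx \<sigma>) \<ge> n then PCD3 c else PLoop None)"
| "tstep n vstep txn init \<sigma> (PCD3 c) =
     (\<sigma>, if num_active_tasks \<sigma> = 0 then PCD4 c else PLoop None)"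
| "tstep n vstep txn init \<sigma> (PCD4 c) =
     (\<sigma>, if decrease_cnt \<sigma> = c then PCD5 else PLoop None)"
| "tstep n vstep txn init \<sigma> PCD5 = (\<sigma>\<lparr>done_marker := True\<rparr>, PLoop None)"
| "tstep n vstep txn init \<sigma> (PExec k i s wb wl rs) =
     (case vstep s of
        IDone \<Rightarrow> (let W = map (\<lambda>l. (l, the (wb l))) wl in
                  (\<sigma>, PRW k i W rs (last_written \<sigma> k) W))
      | IWrite l v s' \<Rightarrow>
          (\<sigma>, PExec k i s' (wb(l \<mapsto> v)) (if l \<in> set wl then wl else wl @ [l]) rs)
      | IRead l f \<Rightarrow>
          (case wb l of
             Some v \<Rightarrow> (\<sigma>, PExec k i (f v) wb wl rs)
           | None \<Rightarrow> (case mv_read \<sigma> l k of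
                NOT_FOUND \<Rightarrow> (\<sigma>, PExec k i (f (init l)) wb wl (rs @ [(l, None)]))
              | OK ver v \<Rightarrow> (\<sigma>, PExec k i (f v) wb wl (rs @ [(l, Some ver)]))
              | READ_ERROR b \<Rightarrow> (\<sigma>, PDep k i b))))"
| "tstep n vstep txn init \<sigma> (PDep k i b) =
     (if snd (txn_status \<sigma> b) = EXECUTED
      then (\<sigma>, PExec k i (txn k) Map.empty [] [])
      else ((upd_status k (fst (txn_status \<sigma> k), ABORTING) \<sigma>)
              \<lparr>txn_dependency := (txn_dependency \<sigma>)(b := insert k (txn_dependency \<sigma> b))\<rparr>,
            PDec))"
| "tstep n vstep txn init \<sigma> (PRW k i W rs prev todo) =
     (case todo of
        [] \<Rightarrow> (\<sigma>, PRD k i W rs prev (filter (\<lambda>p. p \<notin> fst ` set W) prev))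
      | (p, v) # t \<Rightarrow> (upd_data p k (Some (EVal i v)) \<sigma>, PRW k i W rs prev t))"
| "tstep n vstep txn init \<sigma> (PRD k i W rs prev todo) =
     (case todo of
        [] \<Rightarrow> (\<sigma>, PRL k i W rs prev)
      | p # t \<Rightarrow> (upd_data p k None \<sigma>, PRD k i W rs prev t))"
| "tstep n vstep txn init \<sigma> (PRL k i W rs prev) =
     (\<sigma>\<lparr>last_written := (last_written \<sigma>)(k := map fst W)\<rparr>,
      PRR k i rs (\<exists>p \<in> fst ` set W. p \<notin> set prev))"
| "tstep n vstep txn init \<sigma> (PRR k i rs w) =
     (\<sigma>\<lparr>last_read_set := (last_read_set \<sigma>)(k := rs)\<rparr>, PF0 k i w)"
| "tstep n vstep txn init \<sigma> (PF0 k i w) = (upd_status k (i, EXECUTED) \<sigma>, PF1 k i w)"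
| "tstep n vstep txn init \<sigma> (PF1 k i w) =
     (let D = sorted_list_of_set (txn_dependency \<sigma> k) in
      (\<sigma>\<lparr>txn_dependency := (txn_dependency \<sigma>)(k := {})\<rparr>, PF2 k i w D D))"
| "tstep n vstep txn init \<sigma> (PF2 k i w L Ds) =
     (case L of
        [] \<Rightarrow> (\<sigma>, if Ds = [] then PF5 k i w else PF3 k i w (hd Ds))
      | d # t \<Rightarrow> (upd_status d (fst (txn_status \<sigma> d) + 1, READY_TO_EXECUTE) \<sigma>, PF2 k i w t Ds))"
| "tstep n vstep txn init \<sigma> (PF3 k i w m) =
     (\<sigma>\<lparr>execution_idx := min (execution_idx \<sigma>) m\<rparr>, PF4 k i w)"
| "tstep n vstep txn init \<sigma> (PF4 k i w) =
     (\<sigma>\<lparr>decrease_cnt := decrease_cnt \<sigma> + 1\<rparr>, PF5 k i w)"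
| "tstep n vstep txn init \<sigma> (PF5 k i w) =
     (\<sigma>, if validation_idx \<sigma> > k then (if w then PF6 k else PLoop (Some (ValTask k i)))
         else PDec)"
| "tstep n vstep txn init \<sigma> (PF6 k) =
     (\<sigma>\<lparr>validation_idx := min (validation_idx \<sigma>) k\<rparr>, PF7)"
| "tstep n vstep txn init \<sigma> PF7 = (\<sigma>\<lparr>decrease_cnt := decrease_cnt \<sigma> + 1\<rparr>, PDec)"
| "tstep n vstep txn init \<sigma> (PV0 k i) = (\<sigma>, PV1 k i (last_read_set \<sigma> k))"
| "tstep n vstep txn init \<sigma> (PV1 k i RS) =
     (case RS of
        [] \<Rightarrow> (\<sigma>, PDec)
      | e # t \<Rightarrow> (\<sigma>, if read_ok \<sigma> k e then PV1 k i t else PVA k i))"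
| "tstep n vstep txn init \<sigma> (PVA k i) =
     (if txn_status \<sigma> k = (i, EXECUTED)
      then (upd_status k (i, ABORTING) \<sigma>, PC0 k i)
      else (\<sigma>, PDec))"
| "tstep n vstep txn init \<sigma> (PC0 k i) = (\<sigma>, PC1 k i (last_written \<sigma> k))"
| "tstep n vstep txn init \<sigma> (PC1 k i L) =
     (case L of
        [] \<Rightarrow> (\<sigma>, PS k i)
      | p # t \<Rightarrow> (upd_data p k (Some ESTIMATE) \<sigma>, PC1 k i t))"
| "tstep n vstep txn init \<sigma> (PS k i) =
     (upd_status k (i + 1, READY_TO_EXECUTE) \<sigma>, PDV k)"
| "tstep n vstep txn init \<sigma> (PDV k) =
     (\<sigma>\<lparr>validation_idx := min (validation_idx \<sigma>) (k + 1)\<rparr>, PDV2 k)"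
| "tstep n vstep txn init \<sigma> (PDV2 k) =
     (\<sigma>\<lparr>decrease_cnt := decrease_cnt \<sigma> + 1\<rparr>, PVE k)"
| "tstep n vstep txn init \<sigma> (PVE k) = (\<sigma>, if execution_idx \<sigma> > k then PVT k else PDec)"
| "tstep n vstep txn init \<sigma> (PVT k) =
     (if k < n \<and> snd (txn_status \<sigma> k) = READY_TO_EXECUTE
      then (upd_status k (fst (txn_status \<sigma> k), EXECUTING) \<sigma>,
            PLoop (Some (ExecTask k (fst (txn_status \<sigma> k)))))
      else (\<sigma>, PDec))"

type_synonym ('l, 'v, 's) gstate = "('l, 'v) shared \<times> (nat \<Rightarrow> ('l, 'v, 's) pc)"

definition gstep :: "nat \<Rightarrow> ('s \<Rightarrow> ('l, 'v, 's) instr) \<Rightarrow> (nat \<Rightarrow> 's) \<Rightarrow> ('l \<Rightarrow> 'v)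
      \<Rightarrow> nat \<Rightarrow> ('l, 'v, 's) gstate \<Rightarrow> ('l, 'v, 's) gstate" where
  "gstep n vstep txn init t g =
     (let (\<sigma>', p') = tstep n vstep txn init (fst g) (snd g t) in (\<sigma>', (snd g)(t := p')))"

definition init_gstate :: "('l, 'v, 's) gstate" where
  "init_gstate = (init_shared, (\<lambda>_. PLoop None))"

text \<open>A run with m threads (ids 0..<m): an infinite sequence of global states where in
  step s thread sched s performs one atomic step (a joined thread just stutters).\<close>

definition is_run :: "nat \<Rightarrow> ('s \<Rightarrow> ('l, 'v, 's) instr) \<Rightarrow> (nat \<Rightarrow> 's) \<Rightarrow> ('l \<Rightarrow> 'v)
      \<Rightarrow> nat \<Rightarrow> (nat \<Rightarrow> ('l, 'v, 's) gstate) \<Rightarrow> (nat \<Rightarrow> nat) \<Rightarrow> bool" where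
  "is_run n vstep txn init m \<rho> sched \<longleftrightarrow>
     \<rho> 0 = init_gstate \<and>
     (\<forall>s. sched s < m \<and> \<rho> (Suc s) = gstep n vstep txn init (sched s) (\<rho> s))"

definition joined :: "('l, 'v, 's) gstate \<Rightarrow> nat \<Rightarrow> bool" where
  "joined g t \<longleftrightarrow> snd g t = PJoined"

definition fair :: "nat \<Rightarrow> (nat \<Rightarrow> ('l, 'v, 's) gstate) \<Rightarrow> (nat \<Rightarrow> nat) \<Rightarrow> bool" where
  "fair m \<rho> sched \<longleftrightarrow>
     (\<forall>t < m. \<forall>s. \<not> joined (\<rho> s) t \<longrightarrow> (\<exists>s' \<ge> s. sched s' = t))"

end

theory Submission
  imports Defs
begin

(* Every reachable state satisfies a family of invariants: statuses only move along
   READY_TO_EXECUTE -> EXECUTING -> EXECUTED -> ABORTING -> READY_TO_EXECUTE of the next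
   incarnation, possibly skipping EXECUTED; every ABORTING transaction has exactly one owner (a
   dependency set, a thread about to resume it, or the validation that aborted it);
   num_active_tasks counts the threads holding a task; and a READY_TO_EXECUTE transaction below
   execution_idx has a thread that will lower execution_idx or incarnate it.

   Suppose done_marker is never set.  By induction on j, eventually all transactions below j are
   EXECUTED forever with fixed entries in MVMemory.  Then j reads a fixed snapshot, so from its next
   incarnation on it always validates; its status code is monotone and bounded, hence eventually
   constant.  That final status can be neither EXECUTING (VM.execute is wait-free), nor ABORTING
   (its owner resets it), nor READY_TO_EXECUTE (execution_idx comes back to j and j is incarnated).
   For j = n all statuses are frozen; then the indices and decrease_cnt freeze, no task stays
   active, and thread 0 completes check_done, a contradiction.  Once done_marker is set, each
   thread incarnates at most one more transaction, so the statuses freeze again and every thread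
   returns to the top of its loop and joins. *)

section \<open>Program-counter views and status bookkeeping\<close>

type_synonym ('l, 'v, 's) pcs = "nat \<Rightarrow> ('l, 'v, 's) pc"

fun exec_task :: "('l, 'v, 's) pc \<Rightarrow> (nat \<times> nat) option" where
  "exec_task (PLoop (Some (ExecTask k i))) = Some (k, i)"
| "exec_task (PExec k i _ _ _ _) = Some (k, i)"
| "exec_task (PDep k i _) = Some (k, i)"
| "exec_task (PRW k i _ _ _ _) = Some (k, i)"
| "exec_task (PRD k i _ _ _ _) = Some (k, i)"
| "exec_task (PRL k i _ _ _) = Some (k, i)"
| "exec_task (PRR k i _ _) = Some (k, i)"
| "exec_task (PF0 k i _) = Some (k, i)"
| "exec_task _ = None"

fun validation_task :: "('l, 'v, 's) pc \<Rightarrow> (nat \<times> nat) option" where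
  "validation_task (PLoop (Some (ValTask k i))) = Some (k, i)"
| "validation_task (PV0 k i) = Some (k, i)"
| "validation_task (PV1 k i _) = Some (k, i)"
| "validation_task (PVA k i) = Some (k, i)"
| "validation_task _ = None"

fun abort_task :: "('l, 'v, 's) pc \<Rightarrow> (nat \<times> nat) option" where
  "abort_task (PC0 k i) = Some (k, i)"
| "abort_task (PC1 k i _) = Some (k, i)"
| "abort_task (PS k i) = Some (k, i)"
| "abort_task _ = None"

fun finish_task :: "('l, 'v, 's) pc \<Rightarrow> (nat \<times> nat) option" where
  "finish_task (PF1 k i _) = Some (k, i)"
| "finish_task (PF2 k i _ _ _) = Some (k, i)"
| "finish_task (PF3 k i _ _) = Some (k, i)"
| "finish_task (PF4 k i _) = Some (k, i)"
| "finish_task (PF5 k i _) = Some (k, i)"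
| "finish_task _ = None"

fun resume_list :: "('l, 'v, 's) pc \<Rightarrow> nat set" where
  "resume_list (PF2 _ _ _ L _) = set L"
| "resume_list _ = {}"

fun recording_txn :: "('l, 'v, 's) pc \<Rightarrow> nat option" where
  "recording_txn (PRW k _ _ _ _ _) = Some k"
| "recording_txn (PRD k _ _ _ _ _) = Some k"
| "recording_txn (PRL k _ _ _ _) = Some k"
| "recording_txn _ = None"

text \<open>The program points between incrementing and decrementing num_active_tasks.\<close>

fun holds_task :: "('l, 'v, 's) pc \<Rightarrow> bool" where
  "holds_task (PLoop None) = False"
| "holds_task PJoined = False"
| "holds_task PNT0 = False"
| "holds_task (PNT1 _) = False"
| "holds_task PVB0 = False"
| "holds_task PVB1 = False"
| "holds_task PEB0 = False"
| "holds_task PEB1 = False"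
| "holds_task PCD0 = False"
| "holds_task (PCD1 _) = False"
| "holds_task (PCD2 _ _) = False"
| "holds_task (PCD3 _) = False"
| "holds_task (PCD4 _) = False"
| "holds_task PCD5 = False"
| "holds_task _ = True"

definition status_step :: "nat \<times> st \<Rightarrow> nat \<times> st \<Rightarrow> bool" where
  "status_step x y \<longleftrightarrow>
     (snd x = READY_TO_EXECUTE \<and> y = (fst x, EXECUTING))
   \<or> (snd x = EXECUTING \<and> (y = (fst x, EXECUTED) \<or> y = (fst x, ABORTING)))
   \<or> (snd x = EXECUTED \<and> y = (fst x, ABORTING))
   \<or> (snd x = ABORTING \<and> y = (fst x + 1, READY_TO_EXECUTE))"

text \<open>status_code strictly increases and status_potential strictly decreases along every
  status_step, except that a new incarnation (ABORTING to READY_TO_EXECUTE) resets the potential.\<close>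

fun status_rank :: "st \<Rightarrow> nat" where
  "status_rank READY_TO_EXECUTE = 0"
| "status_rank EXECUTING = 1"
| "status_rank EXECUTED = 2"
| "status_rank ABORTING = 3"

definition status_code :: "nat \<times> st \<Rightarrow> nat" where
  "status_code x = 4 * fst x + status_rank (snd x)"

fun status_potential :: "st \<Rightarrow> nat" where
  "status_potential READY_TO_EXECUTE = 0"
| "status_potential ABORTING = 1"
| "status_potential EXECUTED = 2"
| "status_potential EXECUTING = 3"

lemma status_step_code_less: "status_step x y \<Longrightarrow> status_code x < status_code y"
  by (cases x; cases y; auto simp: status_step_def status_code_def)

lemma status_code_inj:
  assumes "status_code x = status_code y"
  shows "x = y"
proof -
  obtain a b c d where "x = (a, b)" "y = (c, d)" by fastforce
  with assms show ?thesis by (cases b; cases d; simp add: status_code_def; presburger)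
qed

lemma status_step_potential_less:
  "status_step x y \<Longrightarrow> snd x \<noteq> READY_TO_EXECUTE \<Longrightarrow> status_potential (snd y) < status_potential (snd x)"
  by (cases x; cases y; auto simp: status_step_def)

text \<open>Every ABORTING transaction has exactly one owner responsible for making it
  READY_TO_EXECUTE again: the dependency set it waits in, a thread that is about to resume it
  after its blocker finished, or the thread whose validation aborted it.\<close>

datatype owner = OwnDep nat | OwnResume nat | OwnAbort nat

fun owns :: "('l, 'v) shared \<Rightarrow> ('l, 'v, 's) pcs \<Rightarrow> nat \<Rightarrow> owner \<Rightarrow> bool" where
  "owns \<sigma> pcs k (OwnDep b) \<longleftrightarrow> k \<in> txn_dependency \<sigma> b"
| "owns \<sigma> pcs k (OwnResume t) \<longleftrightarrow> k \<in> resume_list (pcs t)"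
| "owns \<sigma> pcs k (OwnAbort t) \<longleftrightarrow> (\<exists>i. abort_task (pcs t) = Some (k, i))"

text \<open>A READY_TO_EXECUTE transaction k below execution_idx is witnessed by a thread that will
  still lower execution_idx to at most k or try to incarnate k.\<close>

definition exec_idx_witness :: "nat \<Rightarrow> ('l, 'v, 's) pc \<Rightarrow> bool" where
  "exec_idx_witness k p \<longleftrightarrow> p = PTI k \<or> p = PVT k \<or> p = PVE k \<or> p = PDV k \<or> p = PDV2 k
     \<or> (\<exists>b i w L Ds. p = PF2 b i w L Ds \<and> Ds \<noteq> [] \<and> hd Ds \<le> k)
     \<or> (\<exists>b i w m'. p = PF3 b i w m' \<and> m' \<le> k)"

lemmas tstep_splits =
  option.splits task.splits list.splits instr.splits rres.splits if_splits prod.splits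

section \<open>MVMemory reads\<close>

lemma mv_read_Max:
  fixes \<sigma> :: "('l, 'v) shared" and p :: 'l and j :: nat
  defines "K \<equiv> {k. k < j \<and> data \<sigma> p k \<noteq> None}"
  assumes "K \<noteq> {}"
  shows "Max K \<in> K" and "mv_read \<sigma> p j = (case the (data \<sigma> p (Max K)) of
           ESTIMATE \<Rightarrow> READ_ERROR (Max K) | EVal i v \<Rightarrow> OK (Max K, i) v)"
proof -
  have "finite K" unfolding K_def by (rule finite_subset[of _ "{..<j}"]) auto
  then show "Max K \<in> K" using assms(2) by (rule Max_in)
  show "mv_read \<sigma> p j = (case the (data \<sigma> p (Max K)) of
           ESTIMATE \<Rightarrow> READ_ERROR (Max K) | EVal i v \<Rightarrow> OK (Max K, i) v)"
    unfolding mv_read_def Let_def K_def[symmetric] using assms(2) by simp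
qed

lemma mv_read_NOT_FOUND:
  "{k. k < j \<and> data \<sigma> p k \<noteq> None} = {} \<Longrightarrow> mv_read \<sigma> p j = NOT_FOUND"
  unfolding mv_read_def Let_def by simp

lemma mv_read_READ_ERROR:
  assumes "mv_read \<sigma> p j = READ_ERROR b"
  shows "b < j \<and> data \<sigma> p b = Some ESTIMATE"
proof -
  define K where "K = {k. k < j \<and> data \<sigma> p k \<noteq> None}"
  have ne: "K \<noteq> {}"
  proof
    assume "K = {}"
    then have "mv_read \<sigma> p j = NOT_FOUND" unfolding K_def by (rule mv_read_NOT_FOUND)
    with assms show False by simp
  qed
  note max = mv_read_Max[of j \<sigma> p, folded K_def, OF ne]
  have "the (data \<sigma> p (Max K)) = ESTIMATE \<and> b = Max K"
    using assms max(2) by (cases "the (data \<sigma> p (Max K))") auto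
  moreover have "data \<sigma> p (Max K) \<noteq> None" "Max K < j" using max(1) unfolding K_def by auto
  ultimately show ?thesis by auto
qed

lemma mv_read_cong_below:
  assumes same: "\<And>p k. k < j \<Longrightarrow> data \<sigma> p k = data \<sigma>' p k"
  shows "mv_read \<sigma> p j = mv_read \<sigma>' p j"
proof -
  define K where "K = {k. k < j \<and> data \<sigma> p k \<noteq> None}"
  have K': "{k. k < j \<and> data \<sigma>' p k \<noteq> None} = K" unfolding K_def using same by auto
  show ?thesis
  proof (cases "K = {}")
    case True
    moreover have "{k. k < j \<and> data \<sigma>' p k \<noteq> None} = {}" using K' True by simp
    ultimately show ?thesis unfolding K_def by (simp add: mv_read_NOT_FOUND)
  next
    case False
    note max = mv_read_Max[of j \<sigma> p, folded K_def, OF False]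
      mv_read_Max(2)[of j \<sigma>' p, unfolded K', OF False]
    have "data \<sigma> p (Max K) = data \<sigma>' p (Max K)" using max(1) same unfolding K_def by blast
    then show ?thesis using max(2,3) by simp
  qed
qed

section \<open>Single steps of a thread\<close>

text \<open>pc_rank measures the distance to the top of the run loop: every step of a thread that does
  not run VM.execute and changes no status decreases it.\<close>

fun pc_rank :: "('l, 'v, 's) pc \<Rightarrow> nat \<times> nat" where
  "pc_rank (PLoop None) = (0,0)"
| "pc_rank PJoined = (0,0)"
| "pc_rank PDec = (1,0)"
| "pc_rank (PVT _) = (2,0)"
| "pc_rank (PVE _) = (3,0)"
| "pc_rank (PDV2 _) = (4,0)"
| "pc_rank (PDV _) = (5,0)"
| "pc_rank (PS _ _) = (6,0)"
| "pc_rank (PC1 _ _ L) = (7, length L)"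
| "pc_rank (PC0 _ _) = (8,0)"
| "pc_rank (PVA _ _) = (9,0)"
| "pc_rank (PV1 _ _ RS) = (10, length RS)"
| "pc_rank (PV0 _ _) = (11,0)"
| "pc_rank (PLoop (Some (ValTask _ _))) = (12,0)"
| "pc_rank PF7 = (2,0)"
| "pc_rank (PF6 _) = (3,0)"
| "pc_rank (PF5 _ _ _) = (13,0)"
| "pc_rank (PF4 _ _ _) = (14,0)"
| "pc_rank (PF3 _ _ _ _) = (15,0)"
| "pc_rank (PF2 _ _ _ L _) = (16, length L)"
| "pc_rank (PF1 _ _ _) = (17,0)"
| "pc_rank (PF0 _ _ _) = (18,0)"
| "pc_rank (PRR _ _ _ _) = (19,0)"
| "pc_rank (PRL _ _ _ _ _) = (20,0)"
| "pc_rank (PRD _ _ _ _ _ todo) = (21, length todo)"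
| "pc_rank (PRW _ _ _ _ _ todo) = (22, length todo)"
| "pc_rank (PExec _ _ _ _ _ _) = (23,0)"
| "pc_rank (PDep _ _ _) = (23,0)"
| "pc_rank (PLoop (Some (ExecTask _ _))) = (24,0)"
| "pc_rank PCD5 = (1,0)"
| "pc_rank (PCD4 _) = (2,0)"
| "pc_rank (PCD3 _) = (3,0)"
| "pc_rank (PCD2 _ _) = (4,0)"
| "pc_rank (PCD1 _) = (5,0)"
| "pc_rank PCD0 = (6,0)"
| "pc_rank (PTI _) = (2,0)"
| "pc_rank (PVB3 _) = (25,0)"
| "pc_rank PVB2 = (26,0)"
| "pc_rank PEB2 = (3,0)"
| "pc_rank PVB1 = (27,0)"
| "pc_rank PEB1 = (4,0)"
| "pc_rank PVB0 = (28,0)"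
| "pc_rank PEB0 = (7,0)"
| "pc_rank (PNT1 _) = (29,0)"
| "pc_rank PNT0 = (30,0)"

definition rank_less :: "((nat \<times> nat) \<times> (nat \<times> nat)) set" where
  "rank_less = less_than <*lex*> less_than"

lemma wf_rank_less: "wf rank_less" unfolding rank_less_def by auto

fun in_vm :: "('l, 'v, 's) pc \<Rightarrow> bool" where
  "in_vm (PExec _ _ _ _ _ _) = True" | "in_vm (PDep _ _ _) = True" | "in_vm _ = False"

lemma pc_rank_decreases:
  assumes "tstep n vstep txn init \<sigma> p = (\<sigma>', p')" "txn_status \<sigma>' = txn_status \<sigma>" "\<not> in_vm p"
    "p \<noteq> PLoop None" "p \<noteq> PJoined"
  shows "p' = PLoop None \<or> p' = PJoined \<or> (pc_rank p', pc_rank p) \<in> rank_less"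
  using assms
proof (cases p)
  case (PTI k)
  show ?thesis
  proof (cases "k < n \<and> snd (txn_status \<sigma> k) = READY_TO_EXECUTE")
    case True
    then have "snd (txn_status \<sigma>' k) = EXECUTING"
      using assms(1) PTI by (auto simp: upd_status_def)
    then show ?thesis using assms(2) True by simp
  next
    case False
    then show ?thesis using assms(1) PTI by (auto simp: rank_less_def)
  qed
next
  case (PVT k)
  show ?thesis
  proof (cases "k < n \<and> snd (txn_status \<sigma> k) = READY_TO_EXECUTE")
    case True
    then have "snd (txn_status \<sigma>' k) = EXECUTING"
      using assms(1) PVT by (auto simp: upd_status_def)
    then show ?thesis using assms(2) True by simp
  next
    case False
    then show ?thesis using assms(1) PVT by (auto simp: rank_less_def)
  qed
qed (use assms(1,3,4,5) in \<open>auto simp: rank_less_def Let_def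
      split: option.splits task.splits list.splits instr.splits rres.splits if_splits prod.splits\<close>)

lemma exec_task_advance:
  assumes "tstep n vstep txn init \<sigma> p = (\<sigma>', p')" "exec_task p = Some (j, i)" "\<not> in_vm p"
    "\<not> done_marker \<sigma>"
  shows "(exec_task p' = Some (j, i) \<and> (pc_rank p', pc_rank p) \<in> rank_less)
      \<or> txn_status \<sigma>' j \<noteq> (i, EXECUTING)"
  using assms
    by (cases p) (auto simp: rank_less_def upd_status_def upd_data_def Let_def split: tstep_splits)

lemma abort_task_advance:
  assumes "tstep n vstep txn init \<sigma> p = (\<sigma>', p')" "abort_task p = Some (j, i)"
  shows "(abort_task p' = Some (j, i) \<and> (pc_rank p', pc_rank p) \<in> rank_less)
      \<or> snd (txn_status \<sigma>' j) = READY_TO_EXECUTE"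
  using assms
    by (cases p) (auto simp: rank_less_def upd_status_def upd_data_def Let_def split: tstep_splits)

lemma resume_advance:
  assumes "tstep n vstep txn init \<sigma> p = (\<sigma>', p')" "p = PF2 b i w L Ds" "j \<in> set L"
  shows "((\<exists>b i w L Ds. p' = PF2 b i w L Ds \<and> j \<in> set L) \<and> (pc_rank p', pc_rank p) \<in> rank_less)
     \<or> snd (txn_status \<sigma>' j) = READY_TO_EXECUTE"
  using assms by (cases L) (auto simp: rank_less_def upd_status_def)

lemma exec_idx_witness_advance:
  assumes "tstep n vstep txn init \<sigma> p = (\<sigma>', p')" "exec_idx_witness j p"
    "txn_status \<sigma>' j = txn_status \<sigma> j"
    "snd (txn_status \<sigma> j) = READY_TO_EXECUTE" "j < n"
  shows "execution_idx \<sigma>' \<le> j \<or> (exec_idx_witness j p' \<and> (pc_rank p', pc_rank p) \<in> rank_less)"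
  using assms(2)[unfolded exec_idx_witness_def]
proof (elim disjE exE conjE)
  assume a: "p = PTI j"
  have "snd (txn_status \<sigma>' j) = EXECUTING" using assms(1,4,5) a by (auto simp: upd_status_def)
  then show ?thesis using assms(3,4) by simp
next
  assume a: "p = PVT j"
  have "snd (txn_status \<sigma>' j) = EXECUTING" using assms(1,4,5) a by (auto simp: upd_status_def)
  then show ?thesis using assms(3,4) by simp
next
  assume "p = PVE j" then show ?thesis using assms
    by (auto simp: exec_idx_witness_def rank_less_def split: if_splits)
next
  assume "p = PDV j" then show ?thesis using assms
    by (auto simp: exec_idx_witness_def rank_less_def)
next
  assume "p = PDV2 j" then show ?thesis using assms
    by (auto simp: exec_idx_witness_def rank_less_def)
next
  fix b i w L Ds assume pu: "p = PF2 b i w L Ds" "Ds \<noteq> []" "hd Ds \<le> j"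
  then show ?thesis using assms(1)
    by (cases L) (auto simp: exec_idx_witness_def rank_less_def upd_status_def)
next
  fix b i w m' assume "p = PF3 b i w m'" "m' \<le> j"
  then show ?thesis using assms(1) by auto
qed

lemma incarnate_entry:
  assumes "tstep n vstep txn init \<sigma> p = (\<sigma>', p')"
  shows "(p' = PTI k \<longrightarrow> p = PEB2 \<and> k = execution_idx \<sigma> \<and> execution_idx \<sigma>' = execution_idx \<sigma> + 1)
    \<and> (p' = PVT k \<longrightarrow> p = PVE k \<and> k < execution_idx \<sigma>)"
  using assms by (cases p) (auto simp: upd_status_def upd_data_def Let_def split: tstep_splits)

fun after_status_change :: "('l, 'v, 's) pc \<Rightarrow> bool" where
  "after_status_change (PF1 _ _ _) = True"
| "after_status_change (PF2 _ _ _ _ _) = True"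
| "after_status_change (PF3 _ _ _ _) = True"
| "after_status_change (PF4 _ _ _) = True"
| "after_status_change (PF5 _ _ _) = True"
| "after_status_change (PF6 _) = True"
| "after_status_change PF7 = True"
| "after_status_change (PC0 _ _) = True"
| "after_status_change (PC1 _ _ _) = True"
| "after_status_change (PS _ _) = True"
| "after_status_change (PDV _) = True"
| "after_status_change (PDV2 _) = True"
| "after_status_change _ = False"

lemma after_status_change_entry:
  assumes "tstep n vstep txn init \<sigma> p = (\<sigma>', p')" "\<not> after_status_change p" "after_status_change p'"
  shows "(\<exists>k i w. p = PF0 k i w \<and> txn_status \<sigma>' k = (i, EXECUTED))
    \<or> (\<exists>k i. p = PVA k i \<and> txn_status \<sigma> k = (i, EXECUTED) \<and> txn_status \<sigma>' k = (i, ABORTING))"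
  using assms by (cases p) (auto simp: upd_status_def Let_def split: tstep_splits)

lemma validation_idx_change:
  assumes "tstep n vstep txn init \<sigma> p = (\<sigma>', p')" "validation_idx \<sigma>' \<noteq> validation_idx \<sigma>"
  shows "(p = PVB2 \<and> validation_idx \<sigma>' = validation_idx \<sigma> + 1) \<or> after_status_change p"
  using assms by (cases p) (auto simp: upd_status_def upd_data_def Let_def split: tstep_splits)

lemma execution_idx_change:
  assumes "tstep n vstep txn init \<sigma> p = (\<sigma>', p')" "execution_idx \<sigma>' \<noteq> execution_idx \<sigma>"
  shows "(p = PEB2 \<and> execution_idx \<sigma>' = execution_idx \<sigma> + 1) \<or> after_status_change p"
  using assms by (cases p) (auto simp: upd_status_def upd_data_def Let_def split: tstep_splits)

lemma decrease_cnt_change: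
  assumes "tstep n vstep txn init \<sigma> p = (\<sigma>', p')" "decrease_cnt \<sigma>' \<noteq> decrease_cnt \<sigma>"
  shows "after_status_change p"
  using assms by (cases p) (auto simp: upd_status_def upd_data_def Let_def split: tstep_splits)

lemma holds_task_entry:
  assumes "tstep n vstep txn init \<sigma> p = (\<sigma>', p')" "\<not> holds_task p" "holds_task p'"
  shows "p = PVB1 \<or> p = PEB1"
  using assms by (cases p) (auto simp: Let_def split: tstep_splits)

lemma exec_branch_entry:
  assumes "tstep n vstep txn init \<sigma> p = (\<sigma>', p')" "p \<noteq> PEB1" "p \<noteq> PEB2" "p' = PEB1 \<or> p' = PEB2"
  shows "p = PEB0 \<and> execution_idx \<sigma> < n"
  using assms by (cases p) (auto simp: upd_status_def Let_def split: tstep_splits)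

lemma val_branch_entry:
  assumes "tstep n vstep txn init \<sigma> p = (\<sigma>', p')" "p \<noteq> PVB1" "p \<noteq> PVB2" "p' = PVB1 \<or> p' = PVB2"
  shows "p = PVB0 \<and> validation_idx \<sigma> < n"
  using assms by (cases p) (auto simp: upd_status_def Let_def split: tstep_splits)

section \<open>Invariants\<close>

definition inv_idle :: "nat \<Rightarrow> ('l, 'v, 's) pcs \<Rightarrow> bool" where
  "inv_idle m pcs \<longleftrightarrow> (\<forall>t. m \<le> t \<longrightarrow> pcs t = PLoop None)"

definition inv_joined :: "('l, 'v) shared \<Rightarrow> ('l, 'v, 's) pcs \<Rightarrow> bool" where
  "inv_joined \<sigma> pcs \<longleftrightarrow> (\<forall>t. pcs t = PJoined \<longrightarrow> done_marker \<sigma>)"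

definition inv_exec :: "nat \<Rightarrow> ('l, 'v) shared \<Rightarrow> ('l, 'v, 's) pcs \<Rightarrow> bool" where
  "inv_exec n \<sigma> pcs \<longleftrightarrow>
     (\<forall>t k i. exec_task (pcs t) = Some (k, i) \<longrightarrow> txn_status \<sigma> k = (i, EXECUTING) \<and> k < n)"

definition inv_exec_unique :: "('l, 'v, 's) pcs \<Rightarrow> bool" where
  "inv_exec_unique pcs \<longleftrightarrow>
     (\<forall>t t' k i i'. exec_task (pcs t) = Some (k, i) \<longrightarrow> exec_task (pcs t') = Some (k, i') \<longrightarrow> t = t')"

definition inv_wait_free :: "('s \<Rightarrow> ('l, 'v, 's) instr) \<Rightarrow> ('l, 'v, 's) pcs \<Rightarrow> bool" where
  "inv_wait_free vstep pcs \<longleftrightarrow>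
     (\<forall>t k i st wb wl rs. pcs t = PExec k i st wb wl rs \<longrightarrow> wait_free vstep st)"

definition inv_dep_lower :: "('l, 'v, 's) pcs \<Rightarrow> bool" where
  "inv_dep_lower pcs \<longleftrightarrow> (\<forall>t k i b. pcs t = PDep k i b \<longrightarrow> b < k)"

definition inv_estimate :: "('l, 'v) shared \<Rightarrow> bool" where
  "inv_estimate \<sigma> \<longleftrightarrow>
     (\<forall>p k. data \<sigma> p k = Some ESTIMATE \<longrightarrow> snd (txn_status \<sigma> k) \<noteq> EXECUTED)"

definition inv_abort :: "nat \<Rightarrow> ('l, 'v) shared \<Rightarrow> ('l, 'v, 's) pcs \<Rightarrow> bool" where
  "inv_abort n \<sigma> pcs \<longleftrightarrow>
     (\<forall>t k i. abort_task (pcs t) = Some (k, i) \<longrightarrow> txn_status \<sigma> k = (i, ABORTING) \<and> k < n)"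

definition inv_validation :: "nat \<Rightarrow> ('l, 'v) shared \<Rightarrow> ('l, 'v, 's) pcs \<Rightarrow> bool" where
  "inv_validation n \<sigma> pcs \<longleftrightarrow>
     (\<forall>t k i. validation_task (pcs t) = Some (k, i) \<longrightarrow>
        k < n \<and> status_code (i, EXECUTED) \<le> status_code (txn_status \<sigma> k))"

definition inv_finish :: "nat \<Rightarrow> ('l, 'v) shared \<Rightarrow> ('l, 'v, 's) pcs \<Rightarrow> bool" where
  "inv_finish n \<sigma> pcs \<longleftrightarrow>
     (\<forall>t k i. finish_task (pcs t) = Some (k, i) \<longrightarrow>
        k < n \<and> status_code (i, EXECUTED) \<le> status_code (txn_status \<sigma> k))"

definition inv_dep_sets :: "nat \<Rightarrow> ('l, 'v) shared \<Rightarrow> bool" where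
  "inv_dep_sets n \<sigma> \<longleftrightarrow>
     (\<forall>b k. k \<in> txn_dependency \<sigma> b \<longrightarrow> b < k \<and> k < n \<and> snd (txn_status \<sigma> k) = ABORTING)
     \<and> (\<forall>b. finite (txn_dependency \<sigma> b))"

definition inv_resume :: "nat \<Rightarrow> ('l, 'v) shared \<Rightarrow> ('l, 'v, 's) pcs \<Rightarrow> bool" where
  "inv_resume n \<sigma> pcs \<longleftrightarrow>
     (\<forall>t b i w L Ds. pcs t = PF2 b i w L Ds \<longrightarrow> distinct L \<and> sorted Ds \<and> set L \<subseteq> set Ds
        \<and> (\<forall>d \<in> set L. d < n \<and> snd (txn_status \<sigma> d) = ABORTING))"

definition inv_owner_unique :: "('l, 'v) shared \<Rightarrow> ('l, 'v, 's) pcs \<Rightarrow> bool" where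
  "inv_owner_unique \<sigma> pcs \<longleftrightarrow> (\<forall>k x y. owns \<sigma> pcs k x \<longrightarrow> owns \<sigma> pcs k y \<longrightarrow> x = y)"

definition inv_beyond_block :: "nat \<Rightarrow> ('l, 'v) shared \<Rightarrow> bool" where
  "inv_beyond_block n \<sigma> \<longleftrightarrow> (\<forall>k. n \<le> k \<longrightarrow> txn_status \<sigma> k = (0, READY_TO_EXECUTE))"

definition inv_record_write :: "('l, 'v) shared \<Rightarrow> ('l, 'v, 's) pcs \<Rightarrow> bool" where
  "inv_record_write \<sigma> pcs \<longleftrightarrow>
     (\<forall>t k i W rs prev todo. pcs t = PRW k i W rs prev todo \<longrightarrow>
        prev = last_written \<sigma> k \<and> (\<exists>pre. W = pre @ todo)
        \<and> (\<forall>p. data \<sigma> p k \<noteq> None \<longrightarrow> p \<in> set prev \<or> p \<in> fst ` set W)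
        \<and> (\<forall>p. data \<sigma> p k = Some ESTIMATE \<longrightarrow> p \<notin> fst ` set W \<or> p \<in> fst ` set todo))"

definition inv_record_delete :: "('l, 'v) shared \<Rightarrow> ('l, 'v, 's) pcs \<Rightarrow> bool" where
  "inv_record_delete \<sigma> pcs \<longleftrightarrow>
     (\<forall>t k i W rs prev todo. pcs t = PRD k i W rs prev todo \<longrightarrow>
        (\<forall>p. data \<sigma> p k \<noteq> None \<longrightarrow> p \<in> fst ` set W \<or> p \<in> set todo)
        \<and> (\<forall>p. data \<sigma> p k = Some ESTIMATE \<longrightarrow> p \<in> set todo))"

definition inv_record_locations :: "('l, 'v) shared \<Rightarrow> ('l, 'v, 's) pcs \<Rightarrow> bool" where
  "inv_record_locations \<sigma> pcs \<longleftrightarrow>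
     (\<forall>t k i W rs prev. pcs t = PRL k i W rs prev \<longrightarrow>
        (\<forall>p. data \<sigma> p k \<noteq> None \<longrightarrow> p \<in> fst ` set W) \<and> (\<forall>p. data \<sigma> p k \<noteq> Some ESTIMATE))"

definition inv_record_reads :: "('l, 'v) shared \<Rightarrow> ('l, 'v, 's) pcs \<Rightarrow> bool" where
  "inv_record_reads \<sigma> pcs \<longleftrightarrow>
     (\<forall>t k i rs w. pcs t = PRR k i rs w \<longrightarrow> (\<forall>p. data \<sigma> p k \<noteq> Some ESTIMATE))"

definition inv_finish_start :: "('l, 'v) shared \<Rightarrow> ('l, 'v, 's) pcs \<Rightarrow> bool" where
  "inv_finish_start \<sigma> pcs \<longleftrightarrow>
     (\<forall>t k i w. pcs t = PF0 k i w \<longrightarrow> (\<forall>p. data \<sigma> p k \<noteq> Some ESTIMATE))"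

definition inv_written_locations :: "('l, 'v) shared \<Rightarrow> ('l, 'v, 's) pcs \<Rightarrow> bool" where
  "inv_written_locations \<sigma> pcs \<longleftrightarrow>
     (\<forall>k. (\<forall>t. recording_txn (pcs t) \<noteq> Some k) \<longrightarrow>
        (\<forall>p. data \<sigma> p k \<noteq> None \<longrightarrow> p \<in> set (last_written \<sigma> k)))"

definition inv_convert :: "('l, 'v) shared \<Rightarrow> ('l, 'v, 's) pcs \<Rightarrow> bool" where
  "inv_convert \<sigma> pcs \<longleftrightarrow> (\<forall>t k i L. pcs t = PC1 k i L \<longrightarrow> set L \<subseteq> set (last_written \<sigma> k))"

definition safety_inv ::
    "nat \<Rightarrow> nat \<Rightarrow> ('s \<Rightarrow> ('l, 'v, 's) instr) \<Rightarrow> ('l, 'v) shared \<Rightarrow> ('l, 'v, 's) pcs \<Rightarrow> bool" where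
  "safety_inv n m vstep \<sigma> pcs \<longleftrightarrow>
     inv_idle m pcs \<and> inv_joined \<sigma> pcs \<and> inv_exec n \<sigma> pcs \<and> inv_exec_unique pcs
     \<and> inv_wait_free vstep pcs \<and> inv_dep_lower pcs \<and> inv_estimate \<sigma> \<and> inv_abort n \<sigma> pcs
     \<and> inv_validation n \<sigma> pcs \<and> inv_finish n \<sigma> pcs \<and> inv_dep_sets n \<sigma> \<and> inv_resume n \<sigma> pcs
     \<and> inv_owner_unique \<sigma> pcs \<and> inv_beyond_block n \<sigma> \<and> inv_record_write \<sigma> pcs
     \<and> inv_record_delete \<sigma> pcs \<and> inv_record_locations \<sigma> pcs \<and> inv_record_reads \<sigma> pcs
     \<and> inv_finish_start \<sigma> pcs \<and> inv_written_locations \<sigma> pcs \<and> inv_convert \<sigma> pcs"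

text \<open>The progress invariants are only claimed while done_marker is unset: afterwards a thread
  may join while still holding a task.\<close>

definition inv_executing_owned :: "nat \<Rightarrow> ('l, 'v) shared \<Rightarrow> ('l, 'v, 's) pcs \<Rightarrow> bool" where
  "inv_executing_owned n \<sigma> pcs \<longleftrightarrow>
     (\<forall>k i. k < n \<longrightarrow> txn_status \<sigma> k = (i, EXECUTING) \<longrightarrow> (\<exists>t. exec_task (pcs t) = Some (k, i)))"

definition inv_aborting_owned :: "nat \<Rightarrow> ('l, 'v) shared \<Rightarrow> ('l, 'v, 's) pcs \<Rightarrow> bool" where
  "inv_aborting_owned n \<sigma> pcs \<longleftrightarrow>
     (\<forall>k. k < n \<longrightarrow> snd (txn_status \<sigma> k) = ABORTING \<longrightarrow> (\<exists>x. owns \<sigma> pcs k x))"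

definition inv_dep_resumer :: "('l, 'v) shared \<Rightarrow> ('l, 'v, 's) pcs \<Rightarrow> bool" where
  "inv_dep_resumer \<sigma> pcs \<longleftrightarrow>
     (\<forall>b k. k \<in> txn_dependency \<sigma> b \<longrightarrow> snd (txn_status \<sigma> b) = EXECUTED \<longrightarrow>
        (\<exists>t i w. pcs t = PF1 b i w))"

definition inv_ready_witnessed :: "nat \<Rightarrow> ('l, 'v) shared \<Rightarrow> ('l, 'v, 's) pcs \<Rightarrow> bool" where
  "inv_ready_witnessed n \<sigma> pcs \<longleftrightarrow>
     (\<forall>k. k < n \<longrightarrow> snd (txn_status \<sigma> k) = READY_TO_EXECUTE \<longrightarrow>
        execution_idx \<sigma> \<le> k \<or> (\<exists>t. exec_idx_witness k (pcs t)))"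

definition inv_active_count :: "nat \<Rightarrow> ('l, 'v) shared \<Rightarrow> ('l, 'v, 's) pcs \<Rightarrow> bool" where
  "inv_active_count m \<sigma> pcs \<longleftrightarrow> num_active_tasks \<sigma> = card {t. t < m \<and> holds_task (pcs t)}"

definition progress_inv :: "nat \<Rightarrow> nat \<Rightarrow> ('l, 'v) shared \<Rightarrow> ('l, 'v, 's) pcs \<Rightarrow> bool" where
  "progress_inv n m \<sigma> pcs \<longleftrightarrow>
     inv_executing_owned n \<sigma> pcs \<and> inv_aborting_owned n \<sigma> pcs \<and> inv_dep_resumer \<sigma> pcs
     \<and> inv_ready_witnessed n \<sigma> pcs \<and> inv_active_count m \<sigma> pcs"

definition run_inv ::
    "nat \<Rightarrow> nat \<Rightarrow> ('s \<Rightarrow> ('l, 'v, 's) instr) \<Rightarrow> ('l, 'v) shared \<Rightarrow> ('l, 'v, 's) pcs \<Rightarrow> bool" where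
  "run_inv n m vstep \<sigma> pcs \<longleftrightarrow>
     safety_inv n m vstep \<sigma> pcs \<and> (\<not> done_marker \<sigma> \<longrightarrow> progress_inv n m \<sigma> pcs)"

lemmas safety_inv_defs = safety_inv_def inv_idle_def inv_joined_def inv_exec_def
  inv_exec_unique_def inv_wait_free_def inv_dep_lower_def inv_estimate_def inv_abort_def
  inv_validation_def inv_finish_def inv_dep_sets_def inv_resume_def inv_owner_unique_def
  inv_beyond_block_def inv_record_write_def inv_record_delete_def inv_record_locations_def
  inv_record_reads_def inv_finish_start_def inv_written_locations_def inv_convert_def

lemmas progress_inv_defs = progress_inv_def inv_executing_owned_def inv_aborting_owned_def
  inv_dep_resumer_def inv_ready_witnessed_def inv_active_count_def

lemma run_inv_init: "run_inv n m vstep init_shared (\<lambda>_. PLoop None)"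
  unfolding run_inv_def safety_inv_defs progress_inv_defs init_shared_def
  by (auto elim: owns.elims)

section \<open>Preservation of the invariants by one step\<close>

lemma recording_exec_task: "recording_txn p = Some k \<Longrightarrow> \<exists>i. exec_task p = Some (k, i)"
  by (cases p) auto

lemma sorted_hd_le: "sorted Ds \<Longrightarrow> k \<in> set Ds \<Longrightarrow> hd Ds \<le> k"
  by (cases Ds) auto

locale inv_step =
  fixes n m :: nat and vstep :: "'s \<Rightarrow> ('l, 'v, 's) instr" and txn :: "nat \<Rightarrow> 's"
    and init :: "'l \<Rightarrow> 'v" and \<sigma> :: "('l, 'v) shared" and pcs :: "('l, 'v, 's) pcs"
    and u :: nat and \<sigma>' :: "('l, 'v) shared" and p' :: "('l, 'v, 's) pc"
  assumes safe: "safety_inv n m vstep \<sigma> pcs" and u: "u < m"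
    and step: "tstep n vstep txn init \<sigma> (pcs u) = (\<sigma>', p')"
    and wft: "\<forall>j<n. wait_free vstep (txn j)"
begin

lemma exec_task_status: "exec_task (pcs t) = Some (k, i) \<Longrightarrow> txn_status \<sigma> k = (i, EXECUTING) \<and> k < n"
  using safe unfolding safety_inv_def inv_exec_def by blast

lemma abort_task_status: "abort_task (pcs t) = Some (k, i) \<Longrightarrow> txn_status \<sigma> k = (i, ABORTING) \<and> k < n"
  using safe unfolding safety_inv_def inv_abort_def by blast

lemma resume_status: "pcs t = PF2 b i w L Ds \<Longrightarrow> distinct L \<and> sorted Ds \<and> set L \<subseteq> set Ds
        \<and> (\<forall>d \<in> set L. d < n \<and> snd (txn_status \<sigma> d) = ABORTING)"
  using safe unfolding safety_inv_def inv_resume_def by blast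

lemma exec_task_unique: "exec_task (pcs t) = Some (k, i) \<Longrightarrow> exec_task (pcs t') = Some (k, i')
    \<Longrightarrow> t = t'"
  using safe unfolding safety_inv_def inv_exec_unique_def by blast

lemma owner_unique: "owns \<sigma> pcs k x \<Longrightarrow> owns \<sigma> pcs k y \<Longrightarrow> x = y"
  using safe unfolding safety_inv_def inv_owner_unique_def by blast

lemma dep_set_member: "k \<in> txn_dependency \<sigma> b \<Longrightarrow> b < k \<and> k < n \<and> snd (txn_status \<sigma> k) = ABORTING"
  using safe unfolding safety_inv_def inv_dep_sets_def by blast

lemma dep_set_finite: "finite (txn_dependency \<sigma> b)"
  using safe unfolding safety_inv_def inv_dep_sets_def by blast

lemma validation_task_status: "validation_task (pcs t) = Some (k, i) \<Longrightarrow> k < n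
    \<and> status_code (i, EXECUTED) \<le> status_code (txn_status \<sigma> k)"
  using safe unfolding safety_inv_def inv_validation_def by blast

lemma finish_task_status: "finish_task (pcs t) = Some (k, i) \<Longrightarrow> k < n
    \<and> status_code (i, EXECUTED) \<le> status_code (txn_status \<sigma> k)"
  using safe unfolding safety_inv_def inv_finish_def by blast

lemma dep_blocker_lower: "pcs t = PDep k i b \<Longrightarrow> b < k"
  using safe unfolding safety_inv_def inv_dep_lower_def by blast

lemma estimate_not_executed: "data \<sigma> p k = Some ESTIMATE \<Longrightarrow> snd (txn_status \<sigma> k) \<noteq> EXECUTED"
  using safe unfolding safety_inv_def inv_estimate_def by blast

lemma beyond_block_status: "n \<le> k \<Longrightarrow> txn_status \<sigma> k = (0, READY_TO_EXECUTE)"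
  using safe unfolding safety_inv_def inv_beyond_block_def by blast

lemma finish_start_no_estimate: "pcs t = PF0 k i w \<Longrightarrow> data \<sigma> p k \<noteq> Some ESTIMATE"
  using safe unfolding safety_inv_def inv_finish_start_def by blast

lemma record_reads_no_estimate: "pcs t = PRR k i rs w \<Longrightarrow> data \<sigma> p k \<noteq> Some ESTIMATE"
  using safe unfolding safety_inv_def inv_record_reads_def by blast

lemma record_locations_data: "pcs t = PRL k i W rs prev \<Longrightarrow>
        (\<forall>p. data \<sigma> p k \<noteq> None \<longrightarrow> p \<in> fst ` set W) \<and> (\<forall>p. data \<sigma> p k \<noteq> Some ESTIMATE)"
  using safe unfolding safety_inv_def inv_record_locations_def by blast

lemma record_delete_data: "pcs t = PRD k i W rs prev todo \<Longrightarrow>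
        (\<forall>p. data \<sigma> p k \<noteq> None \<longrightarrow> p \<in> fst ` set W \<or> p \<in> set todo)
        \<and> (\<forall>p. data \<sigma> p k = Some ESTIMATE \<longrightarrow> p \<in> set todo)"
  using safe unfolding safety_inv_def inv_record_delete_def by blast

lemma record_write_data: "pcs t = PRW k i W rs prev todo \<Longrightarrow>
        prev = last_written \<sigma> k \<and> (\<exists>pre. W = pre @ todo)
        \<and> (\<forall>p. data \<sigma> p k \<noteq> None \<longrightarrow> p \<in> set prev \<or> p \<in> fst ` set W)
        \<and> (\<forall>p. data \<sigma> p k = Some ESTIMATE \<longrightarrow> p \<notin> fst ` set W \<or> p \<in> fst ` set todo)"
  using safe unfolding safety_inv_def inv_record_write_def by blast

lemma written_locations_data: "(\<forall>t. recording_txn (pcs t) \<noteq> Some k) \<Longrightarrow> data \<sigma> p k \<noteq> None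
    \<Longrightarrow> p \<in> set (last_written \<sigma> k)"
  using safe unfolding safety_inv_def inv_written_locations_def by blast

lemma convert_locations: "pcs t = PC1 k i L \<Longrightarrow> set L \<subseteq> set (last_written \<sigma> k)"
  using safe unfolding safety_inv_def inv_convert_def by blast

lemma owner_aborting: "owns \<sigma> pcs k x \<Longrightarrow> snd (txn_status \<sigma> k) = ABORTING"
proof (cases x)
  case (OwnDep b)
  then show "owns \<sigma> pcs k x \<Longrightarrow> ?thesis" using dep_set_member by auto
next
  case (OwnResume t)
  then show "owns \<sigma> pcs k x \<Longrightarrow> ?thesis"
    by (cases "pcs t") (auto dest: resume_status)
next
  case (OwnAbort t)
  then show "owns \<sigma> pcs k x \<Longrightarrow> ?thesis" using abort_task_status by fastforce
qed

lemma status_change_step: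
  assumes "txn_status \<sigma>' k \<noteq> txn_status \<sigma> k"
  shows "status_step (txn_status \<sigma> k) (txn_status \<sigma>' k)"
  using step assms exec_task_status[of u] abort_task_status[of u] resume_status[of u]
  by (cases "pcs u") (auto simp: upd_status_def upd_data_def status_step_def Let_def
       split: option.splits task.splits list.splits instr.splits rres.splits if_splits prod.splits)

lemma status_code_mono: "status_code (txn_status \<sigma> k) \<le> status_code (txn_status \<sigma>' k)"
  using status_change_step[of k] status_step_code_less by fastforce

lemma status_change_cases:
  assumes "txn_status \<sigma>' k \<noteq> txn_status \<sigma> k"
  shows "(pcs u = PTI k \<or> pcs u = PVT k) \<and> snd (txn_status \<sigma> k) = READY_TO_EXECUTE
    \<or> (\<exists>i. exec_task (pcs u) = Some (k, i))
    \<or> (\<exists>b i w L Ds. pcs u = PF2 b i w (k # L) Ds)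
    \<or> (\<exists>i. pcs u = PVA k i \<and> txn_status \<sigma> k = (i, EXECUTED))
    \<or> (\<exists>i. pcs u = PS k i)"
  using step assms
  by (cases "pcs u") (auto simp: upd_status_def upd_data_def Let_def split: tstep_splits)

lemma data_change_cases:
  assumes "data \<sigma>' p k \<noteq> data \<sigma> p k"
  shows "recording_txn (pcs u) = Some k \<or> (\<exists>i L. pcs u = PC1 k i (p # L))"
  using step assms
  by (cases "pcs u") (auto simp: upd_status_def upd_data_def Let_def split: tstep_splits)

lemma last_written_change:
  assumes "last_written \<sigma>' k \<noteq> last_written \<sigma> k"
  shows "\<exists>i W rs prev. pcs u = PRL k i W rs prev"
  using step assms
  by (cases "pcs u") (auto simp: upd_status_def upd_data_def Let_def split: tstep_splits)

lemma last_read_set_change: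
  assumes "last_read_set \<sigma>' k \<noteq> last_read_set \<sigma> k"
  shows "\<exists>i rs w. pcs u = PRR k i rs w"
  using step assms
  by (cases "pcs u") (auto simp: upd_status_def upd_data_def Let_def split: tstep_splits)

lemma dependency_change_cases:
  assumes "txn_dependency \<sigma>' b \<noteq> txn_dependency \<sigma> b"
  shows "(\<exists>k i. pcs u = PDep k i b \<and> snd (txn_status \<sigma> b) \<noteq> EXECUTED
            \<and> txn_dependency \<sigma>' b = insert k (txn_dependency \<sigma> b))
    \<or> (\<exists>i w. pcs u = PF1 b i w \<and> txn_dependency \<sigma>' b = {})"
  using step assms
  by (cases "pcs u") (auto simp: upd_status_def upd_data_def Let_def split: tstep_splits)

lemma done_marker_mono: "done_marker \<sigma> \<Longrightarrow> done_marker \<sigma>'"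
  using step by (cases "pcs u") (auto simp: upd_status_def upd_data_def Let_def split: tstep_splits)

lemma exec_idx_change_cases:
  assumes "execution_idx \<sigma>' \<noteq> execution_idx \<sigma>"
  shows "(pcs u = PEB2 \<and> execution_idx \<sigma>' = execution_idx \<sigma> + 1 \<and> p' = PTI (execution_idx \<sigma>))
    \<or> (\<exists>b i w m'. pcs u = PF3 b i w m' \<and> execution_idx \<sigma>' = min (execution_idx \<sigma>) m')"
  using step assms
  by (cases "pcs u") (auto simp: upd_status_def upd_data_def Let_def split: tstep_splits)

lemma active_count_change:
  "(holds_task p' = holds_task (pcs u) \<and> num_active_tasks \<sigma>' = num_active_tasks \<sigma>)
   \<or> (\<not> holds_task (pcs u) \<and> holds_task p' \<and> num_active_tasks \<sigma>' = num_active_tasks \<sigma> + 1)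
   \<or> (holds_task (pcs u) \<and> \<not> holds_task p' \<and> num_active_tasks \<sigma>' = num_active_tasks \<sigma> - 1)
   \<or> done_marker \<sigma>"
  using step
  by (cases "pcs u") (auto simp: upd_status_def upd_data_def Let_def split: tstep_splits)

lemma status_unchanged_exec:
  assumes "exec_task (pcs t) = Some (k, i)" "t \<noteq> u"
  shows "txn_status \<sigma>' k = txn_status \<sigma> k"
proof (rule ccontr)
  assume c: "txn_status \<sigma>' k \<noteq> txn_status \<sigma> k"
  have e: "txn_status \<sigma> k = (i, EXECUTING)" using exec_task_status assms by blast
  from status_change_cases[OF c] show False
  proof (elim disjE exE conjE)
    fix i' assume "exec_task (pcs u) = Some (k, i')" then show False using exec_task_unique assms
      by blast
  next
    fix b i' w L Ds assume "pcs u = PF2 b i' w (k # L) Ds" then show False using resume_status e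
      by fastforce
  next
    fix i' assume "pcs u = PS k i'" then show False using abort_task_status[of u k i'] e by simp
  qed (use e in auto)
qed

lemma status_unchanged_owned:
  assumes "owns \<sigma> pcs k x" "x \<noteq> OwnResume u" "x \<noteq> OwnAbort u"
  shows "txn_status \<sigma>' k = txn_status \<sigma> k"
proof (rule ccontr)
  assume c: "txn_status \<sigma>' k \<noteq> txn_status \<sigma> k"
  have e: "snd (txn_status \<sigma> k) = ABORTING" using owner_aborting assms by blast
  from status_change_cases[OF c] show False
  proof (elim disjE exE conjE)
    fix i' assume "exec_task (pcs u) = Some (k, i')" then show False using exec_task_status e
      by fastforce
  next
    fix b i' w L Ds assume "pcs u = PF2 b i' w (k # L) Ds"
    then have "owns \<sigma> pcs k (OwnResume u)" by simp
    then show False using owner_unique assms by blast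
  next
    fix i' assume "pcs u = PS k i'"
    then have "owns \<sigma> pcs k (OwnAbort u)" by simp
    then show False using owner_unique assms by blast
  qed (use e in auto)
qed

lemma exec_task_frame:
  assumes "exec_task (pcs t) = Some (k, i)" "t \<noteq> u"
  shows "data \<sigma>' p k = data \<sigma> p k \<and> last_written \<sigma>' k = last_written \<sigma> k"
proof (intro conjI)
  show "data \<sigma>' p k = data \<sigma> p k"
  proof (rule ccontr)
    assume c: "data \<sigma>' p k \<noteq> data \<sigma> p k"
    from data_change_cases[OF c] show False
    proof
      assume "recording_txn (pcs u) = Some k"
      then obtain i' where "exec_task (pcs u) = Some (k, i')" using recording_exec_task by blast
      then show False using exec_task_unique assms by blast
    next
      assume "\<exists>i L. pcs u = PC1 k i (p # L)"
      then obtain i' L where "pcs u = PC1 k i' (p # L)" by blast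
      then have "txn_status \<sigma> k = (i', ABORTING)" using abort_task_status[of u k i'] by simp
      then show False using exec_task_status assms by simp
    qed
  qed
next
  show "last_written \<sigma>' k = last_written \<sigma> k"
  proof (rule ccontr)
    assume c: "last_written \<sigma>' k \<noteq> last_written \<sigma> k"
    from last_written_change[OF c] obtain i' W rs prev where "pcs u = PRL k i' W rs prev" by blast
    then have "exec_task (pcs u) = Some (k, i')" by simp
    then show False using exec_task_unique assms by blast
  qed
qed

lemma exec_task_persists: "exec_task (pcs u) = Some (k, i) \<Longrightarrow> txn_status \<sigma>' k = txn_status \<sigma> k
    \<Longrightarrow> \<not> done_marker \<sigma>
   \<Longrightarrow> exec_task p' = Some (k, i)"
  using step exec_task_status[of u]
  by (cases "pcs u") (auto simp: upd_status_def upd_data_def Let_def split: tstep_splits)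

lemma inv_idle_step: "inv_idle m (pcs(u := p'))"
  using safe u unfolding safety_inv_def inv_idle_def by auto

lemma inv_joined_step: "inv_joined \<sigma>' (pcs(u := p'))"
  using safe step done_marker_mono unfolding safety_inv_def inv_joined_def
  by (cases "pcs u") (auto simp: upd_status_def upd_data_def Let_def split: tstep_splits)

lemma exec_task_status_self: "exec_task p' = Some (k, i) \<Longrightarrow> txn_status \<sigma>' k = (i, EXECUTING) \<and> k < n"
  using step exec_task_status[of u]
  by (cases "pcs u") (auto simp: upd_status_def upd_data_def Let_def split: tstep_splits)

lemma inv_exec_step: "inv_exec n \<sigma>' (pcs(u := p'))"
  unfolding inv_exec_def
proof (intro allI impI)
  fix t k i assume h: "exec_task ((pcs(u := p')) t) = Some (k, i)"
  show "txn_status \<sigma>' k = (i, EXECUTING) \<and> k < n"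
  proof (cases "t = u")
    case True
    then show ?thesis using h exec_task_status_self by simp
  next
    case False
    then show ?thesis using h status_unchanged_exec[of t k i] exec_task_status[of t k i] by simp
  qed
qed

lemma exec_task_origin: "exec_task p' = Some (k, i) \<Longrightarrow> (\<exists>i'. exec_task (pcs u) = Some (k, i')) \<or> 
   ((pcs u = PTI k \<or> pcs u = PVT k) \<and> snd (txn_status \<sigma> k) = READY_TO_EXECUTE)"
  using step
  by (cases "pcs u") (auto simp: upd_status_def upd_data_def Let_def split: tstep_splits)

lemma inv_exec_unique_step: "inv_exec_unique (pcs(u := p'))"
  unfolding inv_exec_unique_def
proof (intro allI impI)
  fix t t' k i i'
  assume h1: "exec_task ((pcs(u := p')) t) = Some (k, i)"
    and h2: "exec_task ((pcs(u := p')) t') = Some (k, i')"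
  have other: False if "t \<noteq> u" "exec_task (pcs t) = Some (k, i)"
    "exec_task p' = Some (k, i')" for t i i'
  proof -
    from exec_task_origin[OF that(3)] show False
    proof
      assume "\<exists>i'. exec_task (pcs u) = Some (k, i')" then show False using exec_task_unique that
        by blast
    next
      assume "(pcs u = PTI k \<or> pcs u = PVT k) \<and> snd (txn_status \<sigma> k) = READY_TO_EXECUTE"
      then show False using exec_task_status that by fastforce
    qed
  qed
  show "t = t'"
  proof (cases "t = u"; cases "t' = u")
    assume "t = u" "t' \<noteq> u" then show ?thesis using h1 h2 other[of t' i' i] by simp
  next
    assume "t \<noteq> u" "t' = u" then show ?thesis using h1 h2 other[of t i i'] by simp
  next
    assume "t \<noteq> u" "t' \<noteq> u" then show ?thesis using h1 h2 exec_task_unique by simp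
  qed simp
qed

lemma inv_wait_free_step: "inv_wait_free vstep (pcs(u := p'))"
proof -
  have w: "\<And>t k i s wb wl rs. pcs t = PExec k i s wb wl rs \<Longrightarrow> wait_free vstep s"
    using safe unfolding safety_inv_def inv_wait_free_def by blast
  have "p' = PExec k i st0 wb wl rs \<Longrightarrow> wait_free vstep st0" for k i st0 wb wl rs
    using step w[of u] wft exec_task_status[of u]
    by (cases "pcs u") (auto simp: upd_status_def upd_data_def Let_def
        elim: wait_free.cases split: tstep_splits)
  then show ?thesis using w unfolding inv_wait_free_def by auto
qed

lemma inv_dep_lower_step: "inv_dep_lower (pcs(u := p'))"
proof -
  have "p' = PDep k i b \<Longrightarrow> b < k" for k i b
    using step dep_blocker_lower[of u]
    by (cases "pcs u")
      (auto simp: upd_status_def upd_data_def Let_def split: tstep_splits dest: mv_read_READ_ERROR)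
  then show ?thesis using dep_blocker_lower unfolding inv_dep_lower_def by auto
qed

lemma inv_estimate_step: "inv_estimate \<sigma>'"
  unfolding inv_estimate_def
proof (intro allI impI notI)
  fix p k assume e: "data \<sigma>' p k = Some ESTIMATE" and x: "snd (txn_status \<sigma>' k) = EXECUTED"
  show False
    using step e x estimate_not_executed finish_start_no_estimate[of u] abort_task_status[of u]
    by (cases "pcs u") (auto simp: upd_status_def upd_data_def Let_def split: tstep_splits)
qed

lemma inv_abort_step: "inv_abort n \<sigma>' (pcs(u := p'))"
proof -
  have self: "abort_task p' = Some (k, i) \<Longrightarrow> txn_status \<sigma>' k = (i, ABORTING) \<and> k < n" for k i
    using step abort_task_status[of u] validation_task_status[of u]
    by (cases "pcs u") (auto simp: upd_status_def upd_data_def Let_def split: tstep_splits)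
  have oth: "txn_status \<sigma>' k = (i, ABORTING) \<and> k < n" if "t \<noteq> u"
    "abort_task (pcs t) = Some (k, i)" for t k i
  proof -
    have "owns \<sigma> pcs k (OwnAbort t)" using that by simp
    then have "txn_status \<sigma>' k = txn_status \<sigma> k" using status_unchanged_owned that by blast
    then show ?thesis using abort_task_status that by simp
  qed
  show ?thesis unfolding inv_abort_def using self oth by auto
qed

lemma inv_validation_step: "inv_validation n \<sigma>' (pcs(u := p'))"
proof -
  have self: "validation_task p' = Some (k, i) \<Longrightarrow> k < n
      \<and> status_code (i, EXECUTED) \<le> status_code (txn_status \<sigma>' k)" for k i
    using step validation_task_status[of u] finish_task_status[of u] status_code_mono[of k]
    by (cases "pcs u")
      (auto simp: upd_status_def upd_data_def Let_def status_code_def split: tstep_splits)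
  show ?thesis unfolding inv_validation_def
  proof (intro allI impI)
    fix t k i assume h: "validation_task ((pcs(u := p')) t) = Some (k, i)"
    show "k < n \<and> status_code (i, EXECUTED) \<le> status_code (txn_status \<sigma>' k)"
    proof (cases "t = u")
      case True
      then show ?thesis using h self by simp
    next
      case False
      then show ?thesis using h validation_task_status[of t k i] status_code_mono[of k] by simp
    qed
  qed
qed

lemma inv_finish_step: "inv_finish n \<sigma>' (pcs(u := p'))"
proof -
  have self: "finish_task p' = Some (k, i) \<Longrightarrow> k < n
      \<and> status_code (i, EXECUTED) \<le> status_code (txn_status \<sigma>' k)" for k i
    using step finish_task_status[of u] exec_task_status[of u] status_code_mono[of k]
    by (cases "pcs u")
      (auto simp: upd_status_def upd_data_def Let_def status_code_def split: tstep_splits)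
  show ?thesis unfolding inv_finish_def
  proof (intro allI impI)
    fix t k i assume h: "finish_task ((pcs(u := p')) t) = Some (k, i)"
    show "k < n \<and> status_code (i, EXECUTED) \<le> status_code (txn_status \<sigma>' k)"
    proof (cases "t = u")
      case True
      then show ?thesis using h self by simp
    next
      case False
      then show ?thesis using h finish_task_status[of t k i] status_code_mono[of k] by simp
    qed
  qed
qed

lemma inv_beyond_block_step: "inv_beyond_block n \<sigma>'"
  unfolding inv_beyond_block_def
proof (intro allI impI)
  fix k assume k: "n \<le> k"
  have "txn_status \<sigma>' k = txn_status \<sigma> k"
  proof (rule ccontr)
    assume c: "txn_status \<sigma>' k \<noteq> txn_status \<sigma> k"
    from status_change_cases[OF c] show False
    proof (elim disjE exE conjE)
      assume "pcs u = PTI k" then show False using step k c by (auto split: if_splits)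
    next
      assume "pcs u = PVT k" then show False using step k c by (auto split: if_splits)
    next
      fix i' assume "exec_task (pcs u) = Some (k, i')" then show False using exec_task_status k
        by fastforce
    next
      fix b i' w L Ds assume "pcs u = PF2 b i' w (k # L) Ds" then show False using resume_status k
        by fastforce
    next
      fix i' assume "pcs u = PVA k i'" "txn_status \<sigma> k = (i', EXECUTED)"
      then show False using beyond_block_status k by simp
    next
      fix i' assume "pcs u = PS k i'" then show False using abort_task_status[of u k i'] k by simp
    qed
  qed
  then show "txn_status \<sigma>' k = (0, READY_TO_EXECUTE)" using beyond_block_status k by simp
qed

lemma inv_dep_sets_step: "inv_dep_sets n \<sigma>'"
  unfolding inv_dep_sets_def
proof (rule conjI; intro allI impI)
  fix b
  show "finite (txn_dependency \<sigma>' b)"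
  proof (cases "txn_dependency \<sigma>' b = txn_dependency \<sigma> b")
    case True
    then show ?thesis using dep_set_finite by simp
  next
    case False
    then show ?thesis using dependency_change_cases[OF False] dep_set_finite by auto
  qed
next
  fix b k assume k: "k \<in> txn_dependency \<sigma>' b"
  show "b < k \<and> k < n \<and> snd (txn_status \<sigma>' k) = ABORTING"
  proof (cases "k \<in> txn_dependency \<sigma> b")
    case True
    have "txn_status \<sigma>' k = txn_status \<sigma> k"
      using status_unchanged_owned[of k "OwnDep b"] True by simp
    then show ?thesis using dep_set_member[OF True] by simp
  next
    case False
    then have ch: "txn_dependency \<sigma>' b \<noteq> txn_dependency \<sigma> b" using k by auto
    from dependency_change_cases[OF ch] False k obtain i where pu: "pcs u = PDep k i b"
      and nb: "snd (txn_status \<sigma> b) \<noteq> EXECUTED" by auto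
    have "b < k" using dep_blocker_lower[OF pu] .
    moreover have "k < n" using exec_task_status[of u k i] pu by simp
    moreover have "snd (txn_status \<sigma>' k) = ABORTING"
      using step pu nb by (auto simp: upd_status_def)
    ultimately show ?thesis by simp
  qed
qed

lemma inv_resume_step: "inv_resume n \<sigma>' (pcs(u := p'))"
  unfolding inv_resume_def
proof (intro allI impI)
  fix t b i w L Ds assume h: "(pcs(u := p')) t = PF2 b i w L Ds"
  show "distinct L \<and> sorted Ds \<and> set L \<subseteq> set Ds \<and> (\<forall>d\<in>set L. d < n
      \<and> snd (txn_status \<sigma>' d) = ABORTING)"
  proof (cases "t = u")
    case False
    then have pt: "pcs t = PF2 b i w L Ds" using h by simp
    have "\<forall>d\<in>set L. txn_status \<sigma>' d = txn_status \<sigma> d"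
    proof
      fix d assume "d \<in> set L"
      then have "owns \<sigma> pcs d (OwnResume t)" using pt by simp
      then show "txn_status \<sigma>' d = txn_status \<sigma> d" using status_unchanged_owned False by blast
    qed
    then show ?thesis using resume_status[OF pt] by simp
  next
    case True
    then have pu': "p' = PF2 b i w L Ds" using h by simp
    show ?thesis
    proof (cases "pcs u")
      case (PF1 b0 i0 w0)
      then have "b0 = b \<and> L = sorted_list_of_set (txn_dependency \<sigma> b) \<and> Ds = L
        \<and> \<sigma>' = \<sigma>\<lparr>txn_dependency := (txn_dependency \<sigma>)(b := {})\<rparr>"
        using step pu' by (auto simp: Let_def)
      then show ?thesis using dep_set_finite[of b] dep_set_member[of _ b] by auto
    next
      case (PF2 b0 i0 w0 L0 Ds0)
      note pf = resume_status[OF PF2]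
      show ?thesis
      proof (cases L0)
        case Nil
        then show ?thesis using step PF2 pu' by (auto split: if_splits)
      next
        case (Cons d L1)
        then have eq: "L = L1 \<and> Ds = Ds0
            \<and> \<sigma>' = upd_status d (fst (txn_status \<sigma> d) + 1, READY_TO_EXECUTE) \<sigma>"
          using step PF2 pu' by auto
        then show ?thesis using pf Cons by (auto simp: upd_status_def)
      qed
    qed (use step pu' in \<open>auto simp: upd_status_def upd_data_def Let_def split: tstep_splits\<close>)
  qed
qed

lemma owners_unique_if_transfer:
  assumes "\<And>k z. owns \<sigma>' (pcs(u := p')) k z \<Longrightarrow> owns \<sigma> pcs k (f z) \<or> (k = knew \<and> z = znew)"
    and "inj f" and "\<And>z. \<not> owns \<sigma> pcs knew z"
  shows "inv_owner_unique \<sigma>' (pcs(u := p'))"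
  unfolding inv_owner_unique_def
  using assms owner_unique by (metis injD)

lemma inv_owner_unique_dep_step:
  assumes pu: "pcs u = PDep k0 i b" and nb: "snd (txn_status \<sigma> b) \<noteq> EXECUTED"
  shows "inv_owner_unique \<sigma>' (pcs(u := p'))"
proof (rule owners_unique_if_transfer[where f=id and knew=k0 and znew="OwnDep b"])
  have "\<sigma>' = (upd_status k0 (fst (txn_status \<sigma> k0), ABORTING) \<sigma>)
       \<lparr>txn_dependency := (txn_dependency \<sigma>)(b := insert k0 (txn_dependency \<sigma> b))\<rparr>" "p' = PDec"
    using step pu nb by auto
  then show "owns \<sigma> pcs k (id z) \<or> (k = k0 \<and> z = OwnDep b)" if "owns \<sigma>' (pcs(u := p')) k z" for k z
    using that pu by (cases z) (auto simp: upd_status_def split: if_splits)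
  have "snd (txn_status \<sigma> k0) = EXECUTING" using exec_task_status[of u k0 i] pu by simp
  then show "\<not> owns \<sigma> pcs k0 z" for z using owner_aborting[of k0 z] by auto
qed simp

text \<open>Finishing b hands every dependent of b from the dependency set of b to the finishing
  thread.\<close>

lemma inv_owner_unique_finish_step:
  assumes pu: "pcs u = PF1 b i w"
  shows "inv_owner_unique \<sigma>' (pcs(u := p'))"
proof -
  have "\<sigma>' = \<sigma>\<lparr>txn_dependency := (txn_dependency \<sigma>)(b := {})\<rparr>"
    "p' = PF2 b i w (sorted_list_of_set (txn_dependency \<sigma> b))
       (sorted_list_of_set (txn_dependency \<sigma> b))"
    using step pu by (auto simp: Let_def)
  then have tr: "owns \<sigma>' (pcs(u := p')) k z \<Longrightarrow> owns \<sigma> pcs k (if z = OwnResume u then OwnDep b else z)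
      \<and> z \<noteq> OwnDep b" for k z
    using pu dep_set_finite[of b] by (cases z) (auto split: if_splits)
  show ?thesis
    unfolding inv_owner_unique_def using tr owner_unique by (smt (verit))
qed

lemma inv_owner_unique_abort_step:
  assumes pu: "pcs u = PVA k0 i" and ex: "txn_status \<sigma> k0 = (i, EXECUTED)"
  shows "inv_owner_unique \<sigma>' (pcs(u := p'))"
proof (rule owners_unique_if_transfer[where f=id and knew=k0 and znew="OwnAbort u"])
  have "\<sigma>' = upd_status k0 (i, ABORTING) \<sigma>" "p' = PC0 k0 i" using step pu ex by auto
  then show "owns \<sigma> pcs k (id z) \<or> (k = k0
      \<and> z = OwnAbort u)" if "owns \<sigma>' (pcs(u := p')) k z" for k z
    using that pu by (cases z) (auto simp: upd_status_def split: if_splits)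
  show "\<not> owns \<sigma> pcs k0 z" for z using owner_aborting[of k0 z] ex by auto
qed simp

lemma inv_owner_unique_step: "inv_owner_unique \<sigma>' (pcs(u := p'))"
proof -
  consider (dep) k0 i b where "pcs u = PDep k0 i b" "snd (txn_status \<sigma> b) \<noteq> EXECUTED"
    | (finish) b i w where "pcs u = PF1 b i w"
    | (abort) k0 i where "pcs u = PVA k0 i" "txn_status \<sigma> k0 = (i, EXECUTED)"
    | (other) "\<forall>k0 i b. pcs u = PDep k0 i b \<longrightarrow> snd (txn_status \<sigma> b) = EXECUTED"
        "\<forall>b i w. pcs u \<noteq> PF1 b i w"
        "\<forall>k0 i. pcs u = PVA k0 i \<longrightarrow> txn_status \<sigma> k0 \<noteq> (i, EXECUTED)"
    by blast
  then show ?thesis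
  proof cases
    case other
    have dsub: "txn_dependency \<sigma>' b \<subseteq> txn_dependency \<sigma> b" for b
    proof (cases "txn_dependency \<sigma>' b = txn_dependency \<sigma> b")
      case False
      then show ?thesis using dependency_change_cases[OF False] other(1,2) by blast
    qed simp
    have lsub: "resume_list p' \<subseteq> resume_list (pcs u)"
      using step other
        by (cases "pcs u") (auto simp: upd_status_def upd_data_def Let_def split: tstep_splits)
    have vsub: "abort_task p' = Some (k1, i1) \<Longrightarrow> abort_task (pcs u) = Some (k1, i1)" for k1 i1
      using step other
        by (cases "pcs u") (auto simp: upd_status_def upd_data_def Let_def split: tstep_splits)
    have "owns \<sigma>' (pcs(u := p')) k z \<Longrightarrow> owns \<sigma> pcs k z" for k z
      using dsub lsub vsub by (cases z) (auto split: if_splits)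
    then show ?thesis unfolding inv_owner_unique_def using owner_unique by blast
  qed (use inv_owner_unique_dep_step inv_owner_unique_finish_step inv_owner_unique_abort_step
      in blast)+
qed

lemma no_recording_while_executing:
  assumes "exec_task (pcs u) = Some (k, i)" "recording_txn (pcs u) = None"
  shows "\<forall>t. recording_txn (pcs t) \<noteq> Some k"
proof (intro allI notI)
  fix t assume r: "recording_txn (pcs t) = Some k"
  then obtain i' where "exec_task (pcs t) = Some (k, i')" using recording_exec_task by blast
  then have "t = u" using exec_task_unique assms(1) by blast
  then show False using r assms(2) by simp
qed

lemma inv_record_write_step: "inv_record_write \<sigma>' (pcs(u := p'))"
  unfolding inv_record_write_def
proof (intro allI impI)
  fix t k i W rs prev todo assume h: "(pcs(u := p')) t = PRW k i W rs prev todo"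
  show "prev = last_written \<sigma>' k \<and> (\<exists>pre. W = pre @ todo) \<and> (\<forall>p. data \<sigma>' p k \<noteq> None \<longrightarrow> p \<in> set prev
      \<or> p \<in> fst ` set W) \<and>
          (\<forall>p. data \<sigma>' p k = Some ESTIMATE \<longrightarrow> p \<notin> fst ` set W \<or> p \<in> fst ` set todo)"
  proof (cases "t = u")
    case False
    then have pt: "pcs t = PRW k i W rs prev todo" using h by simp
    have "data \<sigma>' p k = data \<sigma> p k \<and> last_written \<sigma>' k = last_written \<sigma> k" for p
      using exec_task_frame[of t k i] pt False by simp
    then show ?thesis using record_write_data[OF pt] by auto
  next
    case True
    then have pu': "p' = PRW k i W rs prev todo" using h by simp
    show ?thesis
    proof (cases "pcs u")
      case (PExec k0 i0 s0 wb wl rs0)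
      then have eq: "k0 = k \<and> \<sigma>' = \<sigma> \<and> prev = last_written \<sigma> k \<and> todo = W"
        using step pu' by (auto simp: Let_def split: tstep_splits)
      have "\<forall>t. recording_txn (pcs t) \<noteq> Some k"
        using no_recording_while_executing[of k i0] PExec eq by simp
      then show ?thesis using eq written_locations_data by auto
    next
      case (PRW k0 i0 W0 rs0 prev0 todo0)
      note old = record_write_data[OF PRW]
      show ?thesis
      proof (cases todo0)
        case Nil
        then show ?thesis using step PRW pu' by simp
      next
        case (Cons a todo1)
        obtain p0 v where a: "a = (p0, v)" by (cases a)
        have eq: "k0 = k \<and> i0 = i \<and> W0 = W \<and> rs0 = rs \<and> prev0 = prev \<and> todo = todo1 \<and>
            \<sigma>' = upd_data p0 k (Some (EVal i v)) \<sigma>"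
          using step PRW pu' Cons a by auto
        from old obtain pre where pre: "W = pre @ (p0, v) # todo1" using eq Cons a by auto
        have "W = (pre @ [(p0, v)]) @ todo1" using pre by simp
        moreover have "p0 \<in> fst ` set W" using pre by force
        ultimately show ?thesis using old eq Cons a by (auto simp: upd_data_def)
      qed
    qed (use step pu' in \<open>auto simp: upd_status_def upd_data_def Let_def split: tstep_splits\<close>)
  qed
qed

lemma inv_record_delete_step: "inv_record_delete \<sigma>' (pcs(u := p'))"
  unfolding inv_record_delete_def
proof (intro allI impI)
  fix t k i W rs prev todo assume h: "(pcs(u := p')) t = PRD k i W rs prev todo"
  show "(\<forall>p. data \<sigma>' p k \<noteq> None \<longrightarrow> p \<in> fst ` set W \<or> p \<in> set todo) \<and>
          (\<forall>p. data \<sigma>' p k = Some ESTIMATE \<longrightarrow> p \<in> set todo)"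
  proof (cases "t = u")
    case False
    then have pt: "pcs t = PRD k i W rs prev todo" using h by simp
    have "data \<sigma>' p k = data \<sigma> p k" for p
      using exec_task_frame[of t k i] pt False by simp
    then show ?thesis using record_delete_data[OF pt] by simp
  next
    case True
    then have pu': "p' = PRD k i W rs prev todo" using h by simp
    show ?thesis
    proof (cases "pcs u")
      case (PRW k0 i0 W0 rs0 prev0 todo0)
      note old = record_write_data[OF PRW]
      show ?thesis
      proof (cases todo0)
        case Nil
        then have eq: "k0 = k \<and> W0 = W \<and> prev0 = prev \<and> todo = filter (\<lambda>p. p \<notin> fst ` set W) prev
            \<and> \<sigma>' = \<sigma>"
          using step PRW pu' by auto
        show ?thesis using old eq Nil by auto
      next
        case (Cons a todo1)
        then show ?thesis using step PRW pu' by (cases a) auto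
      qed
    next
      case (PRD k0 i0 W0 rs0 prev0 todo0)
      note old = record_delete_data[OF PRD]
      show ?thesis
      proof (cases todo0)
        case Nil
        then show ?thesis using step PRD pu' by simp
      next
        case (Cons p0 todo1)
        have eq: "k0 = k \<and> W0 = W \<and> todo = todo1 \<and> \<sigma>' = upd_data p0 k None \<sigma>"
          using step PRD pu' Cons by auto
        show ?thesis using old eq Cons by (auto simp: upd_data_def)
      qed
    qed (use step pu' in \<open>auto simp: upd_status_def upd_data_def Let_def split: tstep_splits\<close>)
  qed
qed

lemma inv_record_locations_step: "inv_record_locations \<sigma>' (pcs(u := p'))"
  unfolding inv_record_locations_def
proof (intro allI impI)
  fix t k i W rs prev assume h: "(pcs(u := p')) t = PRL k i W rs prev"
  show "(\<forall>p. data \<sigma>' p k \<noteq> None \<longrightarrow> p \<in> fst ` set W) \<and> (\<forall>p. data \<sigma>' p k \<noteq> Some ESTIMATE)"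
  proof (cases "t = u")
    case False
    then have pt: "pcs t = PRL k i W rs prev" using h by simp
    have "data \<sigma>' p k = data \<sigma> p k" for p
      using exec_task_frame[of t k i] pt False by simp
    then show ?thesis using record_locations_data[OF pt] by simp
  next
    case True
    then have pu': "p' = PRL k i W rs prev" using h by simp
    show ?thesis
    proof (cases "pcs u")
      case (PRD k0 i0 W0 rs0 prev0 todo0)
      note old = record_delete_data[OF PRD]
      show ?thesis
      proof (cases todo0)
        case Nil
        then have eq: "k0 = k \<and> W0 = W \<and> \<sigma>' = \<sigma>" using step PRD pu' by auto
        show ?thesis using old eq Nil by auto
      next
        case (Cons a todo1)
        then show ?thesis using step PRD pu' by auto
      qed
    qed (use step pu' in \<open>auto simp: upd_status_def upd_data_def Let_def split: tstep_splits\<close>)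
  qed
qed

lemma inv_record_reads_step: "inv_record_reads \<sigma>' (pcs(u := p'))"
  unfolding inv_record_reads_def
proof (intro allI impI)
  fix t k i rs w p assume h: "(pcs(u := p')) t = PRR k i rs w"
  show "data \<sigma>' p k \<noteq> Some ESTIMATE"
  proof (cases "t = u")
    case False
    then have pt: "pcs t = PRR k i rs w" using h by simp
    have "data \<sigma>' p k = data \<sigma> p k"
      using exec_task_frame[of t k i] pt False by simp
    then show ?thesis using record_reads_no_estimate[OF pt] by simp
  next
    case True
    then have pu': "p' = PRR k i rs w" using h by simp
    show ?thesis
    proof (cases "pcs u")
      case (PRL k0 i0 W0 rs0 prev0)
      then show ?thesis using record_locations_data[OF PRL] step pu' by auto
    qed (use step pu' in \<open>auto simp: upd_status_def upd_data_def Let_def split: tstep_splits\<close>)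
  qed
qed

lemma inv_finish_start_step: "inv_finish_start \<sigma>' (pcs(u := p'))"
  unfolding inv_finish_start_def
proof (intro allI impI)
  fix t k i w p assume h: "(pcs(u := p')) t = PF0 k i w"
  show "data \<sigma>' p k \<noteq> Some ESTIMATE"
  proof (cases "t = u")
    case False
    then have pt: "pcs t = PF0 k i w" using h by simp
    have "data \<sigma>' p k = data \<sigma> p k"
      using exec_task_frame[of t k i] pt False by simp
    then show ?thesis using finish_start_no_estimate[OF pt] by simp
  next
    case True
    then have pu': "p' = PF0 k i w" using h by simp
    show ?thesis
    proof (cases "pcs u")
      case (PRR k0 i0 rs0 w0)
      then show ?thesis using record_reads_no_estimate[OF PRR] step pu' by auto
    qed (use step pu' in \<open>auto simp: upd_status_def upd_data_def Let_def split: tstep_splits\<close>)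
  qed
qed

lemma inv_written_locations_step: "inv_written_locations \<sigma>' (pcs(u := p'))"
  unfolding inv_written_locations_def
proof (intro allI impI)
  fix k p assume nr: "\<forall>t. recording_txn ((pcs(u := p')) t) \<noteq> Some k" and d: "data \<sigma>' p k \<noteq> None"
  show "p \<in> set (last_written \<sigma>' k)"
  proof (cases "recording_txn (pcs u) = Some k")
    case True
    have nr': "recording_txn p' \<noteq> Some k" using nr[rule_format, of u] by simp
    show ?thesis
    proof (cases "pcs u")
      case (PRL k0 i0 W0 rs0 prev0)
      then have "k0 = k \<and> \<sigma>' = \<sigma>\<lparr>last_written := (last_written \<sigma>)(k := map fst W0)\<rparr>"
        using step True by auto
      then show ?thesis using record_locations_data[OF PRL] d by auto
    next
      case (PRW k0 i0 W0 rs0 prev0 todo0)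
      then show ?thesis using True nr' step by (cases todo0) auto
    next
      case (PRD k0 i0 W0 rs0 prev0 todo0)
      then show ?thesis using True nr' step by (cases todo0) auto
    qed (use True in auto)
  next
    case False
    have nro: "\<forall>t. recording_txn (pcs t) \<noteq> Some k" using nr False by (metis fun_upd_other)
    have lw: "last_written \<sigma>' k = last_written \<sigma> k"
    proof (rule ccontr)
      assume "last_written \<sigma>' k \<noteq> last_written \<sigma> k"
      from last_written_change[OF this] False show False by auto
    qed
    show ?thesis
    proof (cases "data \<sigma>' p k = data \<sigma> p k")
      case True
      then show ?thesis using written_locations_data[OF nro] d lw by simp
    next
      case c: False
      from data_change_cases[OF c] False obtain i L where "pcs u = PC1 k i (p # L)" by auto
      then show ?thesis using convert_locations[of u k i "p # L"] lw by simp
    qed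
  qed
qed

lemma inv_convert_step: "inv_convert \<sigma>' (pcs(u := p'))"
  unfolding inv_convert_def
proof (intro allI impI)
  fix t k i L assume h: "(pcs(u := p')) t = PC1 k i L"
  show "set L \<subseteq> set (last_written \<sigma>' k)"
  proof (cases "t = u")
    case False
    then have pt: "pcs t = PC1 k i L" using h by simp
    have lw: "last_written \<sigma>' k = last_written \<sigma> k"
    proof (rule ccontr)
      assume "last_written \<sigma>' k \<noteq> last_written \<sigma> k"
      from last_written_change[OF this] obtain i' W rs prev where "pcs u = PRL k i' W rs prev"
        by blast
      then have "txn_status \<sigma> k = (i', EXECUTING)" using exec_task_status[of u k i'] by simp
      moreover have "txn_status \<sigma> k = (i, ABORTING)" using abort_task_status[of t k i] pt by simp
      ultimately show False by simp
    qed
    then show ?thesis using convert_locations[OF pt] by simp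
  next
    case True
    then have pu': "p' = PC1 k i L" using h by simp
    show ?thesis
    proof (cases "pcs u")
      case (PC1 k0 i0 L0)
      then show ?thesis using convert_locations[OF PC1] step pu'
        by (cases L0) (auto simp: upd_data_def)
    qed (use step pu' in \<open>auto simp: upd_status_def upd_data_def Let_def split: tstep_splits\<close>)
  qed
qed

lemma safety_inv_step: "safety_inv n m vstep \<sigma>' (pcs(u := p'))"
  unfolding safety_inv_def
  using inv_idle_step inv_joined_step inv_exec_step inv_exec_unique_step inv_wait_free_step
    inv_dep_lower_step inv_estimate_step inv_abort_step inv_validation_step inv_finish_step
    inv_dep_sets_step inv_resume_step inv_owner_unique_step inv_beyond_block_step
    inv_record_write_step inv_record_delete_step inv_record_locations_step inv_record_reads_step
    inv_finish_start_step inv_written_locations_step inv_convert_step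
  by blast

lemma incarnation_step:
  assumes "snd (txn_status \<sigma> k) = READY_TO_EXECUTE" "snd (txn_status \<sigma>' k) \<noteq> READY_TO_EXECUTE"
  shows "\<exists>i. p' = PLoop (Some (ExecTask k i))"
proof -
  have c: "txn_status \<sigma>' k \<noteq> txn_status \<sigma> k" using assms by auto
  from status_change_cases[OF c] show ?thesis
  proof (elim disjE exE conjE)
    assume "pcs u = PTI k" then show ?thesis using step assms by (auto split: if_splits)
  next
    assume "pcs u = PVT k" then show ?thesis using step assms by (auto split: if_splits)
  next
    fix i assume "exec_task (pcs u) = Some (k, i)" then show ?thesis using exec_task_status assms
      by fastforce
  next
    fix b i w L Ds assume "pcs u = PF2 b i w (k # L) Ds" then show ?thesis
      using resume_status assms
        by fastforce
  next
    fix i assume "pcs u = PVA k i" "txn_status \<sigma> k = (i, EXECUTED)" then show ?thesis using assms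
      by simp
  next
    fix i assume "pcs u = PS k i" then show ?thesis using abort_task_status[of u k i] assms by simp
  qed
qed

lemma inv_executing_owned_step:
  assumes B: "inv_executing_owned n \<sigma> pcs" and nd: "\<not> done_marker \<sigma>"
  shows "inv_executing_owned n \<sigma>' (pcs(u := p'))"
  unfolding inv_executing_owned_def
proof (intro allI impI)
  fix k i assume k: "k < n" and e: "txn_status \<sigma>' k = (i, EXECUTING)"
  show "\<exists>t. exec_task ((pcs(u := p')) t) = Some (k, i)"
  proof (cases "txn_status \<sigma>' k = txn_status \<sigma> k")
    case same: True
    then have "txn_status \<sigma> k = (i, EXECUTING)" using e by simp
    then obtain t where t: "exec_task (pcs t) = Some (k, i)"
      using B k unfolding inv_executing_owned_def by blast
    show ?thesis
    proof (cases "t = u")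
      case True
      then show ?thesis using exec_task_persists t same nd by (metis fun_upd_same)
    next
      case False
      then show ?thesis using t by (metis fun_upd_other)
    qed
  next
    case False
    have "status_step (txn_status \<sigma> k) (txn_status \<sigma>' k)" using status_change_step False by blast
    then have "snd (txn_status \<sigma> k) = READY_TO_EXECUTE" using e by (auto simp: status_step_def)
    then have "p' = PLoop (Some (ExecTask k i))"
      using status_change_cases[OF False] e step exec_task_status[of u k] resume_status[of u]
        abort_task_status[of u]
      by (auto simp: upd_status_def split: if_splits)
    then show ?thesis by (metis exec_task.simps(1) fun_upd_same)
  qed
qed

lemma dep_owner_persists:
  assumes k: "k \<in> txn_dependency \<sigma> b"
  shows "\<exists>x. owns \<sigma>' (pcs(u := p')) k x"
proof (cases "txn_dependency \<sigma>' b = txn_dependency \<sigma> b")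
  case False
  from dependency_change_cases[OF False] show ?thesis
  proof
    assume "\<exists>i w. pcs u = PF1 b i w \<and> txn_dependency \<sigma>' b = {}"
    then obtain i w where "pcs u = PF1 b i w" by blast
    then have "p' = PF2 b i w (sorted_list_of_set (txn_dependency \<sigma> b))
        (sorted_list_of_set (txn_dependency \<sigma> b))"
      using step by (auto simp: Let_def)
    then have "owns \<sigma>' (pcs(u := p')) k (OwnResume u)" using k dep_set_finite[of b] by simp
    then show ?thesis by blast
  qed (use k in \<open>metis insertI2 owns.simps(1)\<close>)
qed (use k in \<open>metis owns.simps(1)\<close>)

lemma resume_owner_persists:
  assumes k: "k \<in> resume_list (pcs t)" and e: "snd (txn_status \<sigma>' k) = ABORTING"
  shows "\<exists>x. owns \<sigma>' (pcs(u := p')) k x"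
proof (cases "t = u")
  case True
  then obtain b i w L' Ds where pu': "pcs u = PF2 b i w L' Ds" and kL: "k \<in> set L'"
    using k by (cases "pcs u") auto
  then obtain d L where pu: "pcs u = PF2 b i w (d # L) Ds" by (cases L') auto
  have "d \<noteq> k"
  proof
    assume "d = k"
    then have "txn_status \<sigma>' k = (fst (txn_status \<sigma> k) + 1, READY_TO_EXECUTE)"
      using step pu by (auto simp: upd_status_def)
    then show False using e by simp
  qed
  then have "p' = PF2 b i w L Ds" "k \<in> set L" using step pu pu' kL by auto
  then have "owns \<sigma>' (pcs(u := p')) k (OwnResume u)" by simp
  then show ?thesis by blast
qed (use k in \<open>metis owns.simps(2) fun_upd_other\<close>)

lemma abort_owner_persists:
  assumes vi: "abort_task (pcs t) = Some (k, i)" and same: "txn_status \<sigma>' k = txn_status \<sigma> k"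
  shows "\<exists>x. owns \<sigma>' (pcs(u := p')) k x"
proof (cases "t = u")
  case True
  then have "abort_task p' = Some (k, i)"
    using step vi same abort_task_status[of u k i]
    by (cases "pcs u") (auto simp: upd_status_def upd_data_def split: tstep_splits)
  then have "owns \<sigma>' (pcs(u := p')) k (OwnAbort u)" by simp
  then show ?thesis by blast
qed (use vi in \<open>metis owns.simps(3) fun_upd_other\<close>)

lemma owner_persists:
  assumes "owns \<sigma> pcs k x" "txn_status \<sigma>' k = txn_status \<sigma> k" "snd (txn_status \<sigma>' k) = ABORTING"
  shows "\<exists>x. owns \<sigma>' (pcs(u := p')) k x"
  using assms dep_owner_persists resume_owner_persists abort_owner_persists by (cases x) auto

lemma aborted_has_owner:
  assumes ch: "txn_status \<sigma>' k \<noteq> txn_status \<sigma> k" and e: "snd (txn_status \<sigma>' k) = ABORTING"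
  shows "\<exists>x. owns \<sigma>' (pcs(u := p')) k x"
  using status_change_cases[OF ch]
proof (elim disjE exE conjE)
  fix i assume "pcs u = PVA k i" "txn_status \<sigma> k = (i, EXECUTED)"
  then have "p' = PC0 k i" using step by auto
  then have "owns \<sigma>' (pcs(u := p')) k (OwnAbort u)" by simp
  then show ?thesis by blast
next
  fix i assume pu: "exec_task (pcs u) = Some (k, i)"
  show ?thesis
  proof (cases "pcs u")
    case (PDep k0 i0 b)
    then have "k \<in> txn_dependency \<sigma>' b"
      using pu step ch by (auto simp: upd_status_def split: if_splits)
    then have "owns \<sigma>' (pcs(u := p')) k (OwnDep b)" by simp
    then show ?thesis by blast
  qed (use pu step e ch in \<open>auto simp: upd_status_def upd_data_def Let_def split: tstep_splits\<close>)
qed (use step e ch in \<open>auto simp: upd_status_def split: if_splits\<close>)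

lemma inv_aborting_owned_step:
  assumes B: "inv_aborting_owned n \<sigma> pcs"
  shows "inv_aborting_owned n \<sigma>' (pcs(u := p'))"
  unfolding inv_aborting_owned_def
proof (intro allI impI)
  fix k assume k: "k < n" and e: "snd (txn_status \<sigma>' k) = ABORTING"
  show "\<exists>x. owns \<sigma>' (pcs(u := p')) k x"
  proof (cases "txn_status \<sigma>' k = txn_status \<sigma> k")
    case True
    then obtain x where "owns \<sigma> pcs k x" using B k e unfolding inv_aborting_owned_def by auto
    then show ?thesis using owner_persists True e by blast
  next
    case False
    then show ?thesis using aborted_has_owner e by blast
  qed
qed

lemma executed_by_step:
  assumes ch: "txn_status \<sigma>' b \<noteq> txn_status \<sigma> b" and e: "snd (txn_status \<sigma>' b) = EXECUTED"
  shows "\<exists>i w. p' = PF1 b i w"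
proof -
  have "status_step (txn_status \<sigma> b) (txn_status \<sigma>' b)" using status_change_step ch by blast
  with status_change_cases[OF ch] show ?thesis
  proof (elim disjE exE conjE)
    fix i assume "exec_task (pcs u) = Some (b, i)"
    then show ?thesis
      using step e ch
        by (cases "pcs u") (auto simp: upd_status_def upd_data_def Let_def split: tstep_splits)
  qed (use step e ch in \<open>auto simp: upd_status_def status_step_def split: if_splits\<close>)
qed

lemma ready_by_step:
  assumes ch: "txn_status \<sigma>' k \<noteq> txn_status \<sigma> k" and e: "snd (txn_status \<sigma>' k) = READY_TO_EXECUTE"
  shows "exec_idx_witness k p'"
proof -
  have "status_step (txn_status \<sigma> k) (txn_status \<sigma>' k)" using status_change_step ch by blast
  with status_change_cases[OF ch] show ?thesis
  proof (elim disjE exE conjE)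
    fix i assume "pcs u = PS k i"
    then show ?thesis using step by (auto simp: exec_idx_witness_def)
  next
    fix b i w L Ds assume pu: "pcs u = PF2 b i w (k # L) Ds"
    then have "Ds \<noteq> [] \<and> hd Ds \<le> k" using resume_status[OF pu] sorted_hd_le by fastforce
    then show ?thesis using step pu by (auto simp: exec_idx_witness_def)
  next
    fix i assume "exec_task (pcs u) = Some (k, i)"
    then have "txn_status \<sigma> k = (i, EXECUTING)" using exec_task_status by blast
    then show ?thesis using status_change_step[OF ch] e by (auto simp: status_step_def)
  qed (use status_change_step[OF ch] e in \<open>auto simp: status_step_def\<close>)
qed

lemma inv_dep_resumer_step:
  assumes B: "inv_dep_resumer \<sigma> pcs"
  shows "inv_dep_resumer \<sigma>' (pcs(u := p'))"
  unfolding inv_dep_resumer_def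
proof (intro allI impI)
  fix b k assume k: "k \<in> txn_dependency \<sigma>' b" and e: "snd (txn_status \<sigma>' b) = EXECUTED"
  show "\<exists>t i w. (pcs(u := p')) t = PF1 b i w"
  proof (cases "txn_dependency \<sigma>' b = txn_dependency \<sigma> b")
    case False
    from dependency_change_cases[OF False] show ?thesis
    proof
      assume "\<exists>k' i. pcs u = PDep k' i b \<and> snd (txn_status \<sigma> b) \<noteq> EXECUTED \<and>
         txn_dependency \<sigma>' b = insert k' (txn_dependency \<sigma> b)"
      then obtain k' i where pu: "pcs u = PDep k' i b" and nb: "snd (txn_status \<sigma> b) \<noteq> EXECUTED"
        by blast
      have "b < k'" using dep_blocker_lower[OF pu] .
      then have "txn_status \<sigma>' b = txn_status \<sigma> b" using step pu nb by (auto simp: upd_status_def)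
      then show ?thesis using e nb by simp
    next
      assume "\<exists>i w. pcs u = PF1 b i w \<and> txn_dependency \<sigma>' b = {}"
      then show ?thesis using k by auto
    qed
  next
    case True
    then have k0: "k \<in> txn_dependency \<sigma> b" using k by simp
    show ?thesis
    proof (cases "snd (txn_status \<sigma> b) = EXECUTED")
      case True
      then obtain t i w where t: "pcs t = PF1 b i w" using B k0 unfolding inv_dep_resumer_def
        by blast
      show ?thesis
      proof (cases "t = u")
        case False
        then show ?thesis using t by (metis fun_upd_other)
      next
        case True
        then have "txn_dependency \<sigma>' b = {}" using step t by (auto simp: Let_def)
        then show ?thesis using k by simp
      qed
    next
      case False
      then have "txn_status \<sigma>' b \<noteq> txn_status \<sigma> b" using e by auto
      then show ?thesis using executed_by_step e by (metis fun_upd_same)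
    qed
  qed
qed

lemma inv_ready_witnessed_step:
  assumes B: "inv_ready_witnessed n \<sigma> pcs"
  shows "inv_ready_witnessed n \<sigma>' (pcs(u := p'))"
  unfolding inv_ready_witnessed_def
proof (intro allI impI)
  fix k assume k: "k < n" and e: "snd (txn_status \<sigma>' k) = READY_TO_EXECUTE"
  show "execution_idx \<sigma>' \<le> k \<or> (\<exists>t. exec_idx_witness k ((pcs(u := p')) t))"
  proof (cases "txn_status \<sigma>' k = txn_status \<sigma> k")
    case same: True
    then have e0: "snd (txn_status \<sigma> k) = READY_TO_EXECUTE" using e by simp
    from B k e0 consider "execution_idx \<sigma> \<le> k" | t where "exec_idx_witness k (pcs t)"
      unfolding inv_ready_witnessed_def by blast
    then show ?thesis
    proof cases
      case 1
      then have "execution_idx \<sigma>' \<le> k \<or> p' = PTI k"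
        using exec_idx_change_cases by (cases "execution_idx \<sigma>' = execution_idx \<sigma>") auto
      then show ?thesis unfolding exec_idx_witness_def by (metis fun_upd_same)
    next
      case (2 t)
      show ?thesis
      proof (cases "t = u")
        case False
        then show ?thesis using 2 by (metis fun_upd_other)
      next
        case True
        then have "execution_idx \<sigma>' \<le> k \<or> exec_idx_witness k p'"
          using exec_idx_witness_advance[OF step _ same e0 k] 2 by blast
        then show ?thesis by (metis fun_upd_same)
      qed
    qed
  next
    case False
    then show ?thesis using ready_by_step e by (metis fun_upd_same)
  qed
qed

lemma inv_active_count_step:
  assumes B: "inv_active_count m \<sigma> pcs" and nd: "\<not> done_marker \<sigma>"
  shows "inv_active_count m \<sigma>' (pcs(u := p'))"
proof -
  let ?S = "{t. t < m \<and> holds_task (pcs t)}"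
  let ?S' = "{t. t < m \<and> holds_task ((pcs(u := p')) t)}"
  have fin: "finite ?S" by simp
  from active_count_change nd consider
      (same) "holds_task p' = holds_task (pcs u)" "num_active_tasks \<sigma>' = num_active_tasks \<sigma>"
    | (inc) "\<not> holds_task (pcs u)" "holds_task p'" "num_active_tasks \<sigma>' = num_active_tasks \<sigma> + 1"
    | (dec) "holds_task (pcs u)" "\<not> holds_task p'" "num_active_tasks \<sigma>' = num_active_tasks \<sigma> - 1"
    by blast
  then show ?thesis
  proof cases
    case same
    then have "?S' = ?S" by auto
    then show ?thesis using same B unfolding inv_active_count_def by simp
  next
    case inc
    then have "?S' = insert u ?S" "u \<notin> ?S" using u by auto
    then show ?thesis using inc B fin unfolding inv_active_count_def by simp
  next
    case dec
    then have "?S' = ?S - {u}" "u \<in> ?S" using u by auto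
    then show ?thesis using dec B fin unfolding inv_active_count_def by simp
  qed
qed

lemma progress_inv_step:
  "progress_inv n m \<sigma> pcs \<Longrightarrow> \<not> done_marker \<sigma> \<Longrightarrow> progress_inv n m \<sigma>' (pcs(u := p'))"
  unfolding progress_inv_def
  using inv_executing_owned_step inv_aborting_owned_step inv_dep_resumer_step
    inv_ready_witnessed_step inv_active_count_step by blast

lemma run_inv_step: "run_inv n m vstep \<sigma> pcs \<Longrightarrow> run_inv n m vstep \<sigma>' (pcs(u := p'))"
  unfolding run_inv_def using safety_inv_step progress_inv_step done_marker_mono by blast

end

section \<open>Eventually constant sequences\<close>

lemma const_from_step:
  assumes "\<And>s. s \<ge> T \<Longrightarrow> f (Suc s) = f s"
  shows "s \<ge> T \<Longrightarrow> f s = f T"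
proof (induction s rule: dec_induct)
  case (step x)
  then show ?case using assms[of x] by simp
qed simp

lemma const_from_later:
  fixes f :: "nat \<Rightarrow> 'a"
  assumes "\<forall>s\<ge>T. f s = f T" and "T \<le> T'"
  shows "\<forall>s\<ge>T'. f s = f T'"
proof (intro allI impI)
  fix s assume "T' \<le> s"
  then show "f s = f T'" using assms by (metis le_trans)
qed

lemma mono_bounded_eventually_const:
  fixes f :: "nat \<Rightarrow> nat"
  assumes mono: "\<And>s. s \<ge> T \<Longrightarrow> f s \<le> f (Suc s)" and bd: "\<And>s. s \<ge> T \<Longrightarrow> f s \<le> B"
  shows "\<exists>T'\<ge>T. \<forall>s\<ge>T'. f s = f T'"
proof -
  have m2: "s \<le> s' \<Longrightarrow> T \<le> s \<Longrightarrow> f s \<le> f s'" for s s'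
  proof (induction s' rule: dec_induct)
    case (step x)
    then show ?case using mono[of x] by simp
  qed simp
  let ?A = "f ` {T..}"
  have fin: "finite ?A" by (rule finite_subset[of _ "{..B}"]) (use bd in auto)
  obtain T' where T': "T' \<ge> T" "f T' = Max ?A" using Max_in[OF fin] by fastforce
  have "f s = f T'" if "s \<ge> T'" for s
  proof -
    have "f T' \<le> f s" using m2[of T' s] T'(1) that by simp
    moreover have "f s \<le> Max ?A" using fin that T' by (intro Max_ge) auto
    ultimately show ?thesis using T' by simp
  qed
  then show ?thesis using T' by blast
qed

lemma antimono_eventually_const:
  fixes f :: "nat \<Rightarrow> nat"
  assumes anti: "\<And>s. s \<ge> T \<Longrightarrow> f (Suc s) \<le> f s"
  shows "\<exists>T'\<ge>T. \<forall>s\<ge>T'. f s = f T'"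
proof -
  have below: "f s \<le> f T" if "s \<ge> T" for s
    using that
  proof (induction s rule: dec_induct)
    case (step x)
    then show ?case using anti[of x] by simp
  qed simp
  have "\<exists>T'\<ge>T. \<forall>s\<ge>T'. f T - f s = f T - f T'"
    by (rule mono_bounded_eventually_const[where B="f T"]) (use anti in \<open>auto intro: diff_le_mono2\<close>)
  then obtain T' where T': "T' \<ge> T" "\<forall>s\<ge>T'. f T - f s = f T - f T'" by blast
  have "f s = f T'" if "s \<ge> T'" for s
    using T' below[of s] below[of T'] that by (metis diff_diff_cancel order_trans)
  then show ?thesis using T'(1) by blast
qed

lemma never_again:
  assumes "\<And>s. s \<ge> s0 \<Longrightarrow> \<not> P s \<Longrightarrow> \<not> P (Suc s)" and "\<not> P s0"
  shows "\<forall>s\<ge>s0. \<not> P s"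
proof (intro allI impI)
  fix s assume "s \<ge> s0"
  then show "\<not> P s"
    by (induction s rule: dec_induct) (use assms in blast)+
qed

lemma eventually_all_below:
  fixes T m :: nat
  assumes "\<forall>t<m. \<exists>s0\<ge>T. \<forall>s\<ge>s0. \<not> P s t"
  shows "\<exists>T'\<ge>T. \<forall>s\<ge>T'. \<forall>t<m. \<not> P s t"
proof -
  obtain f where f: "\<forall>t<m. f t \<ge> T \<and> (\<forall>s\<ge>f t. \<not> P s t)" using assms by metis
  have "f t \<le> T + (\<Sum>t<m. f t)" if "t < m" for t
  proof -
    have "f t \<le> (\<Sum>t<m. f t)" using that by (intro member_le_sum) auto
    then show ?thesis by simp
  qed
  then have "\<forall>s\<ge>T + (\<Sum>t<m. f t). \<forall>t<m. \<not> P s t" using f by (meson le_trans)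
  then show ?thesis by (intro exI[of _ "T + (\<Sum>t<m. f t)"]) auto
qed

section \<open>Invariants along a run\<close>

locale blockstm_run =
  fixes n m :: nat and vstep :: "'s \<Rightarrow> ('l, 'v, 's) instr" and txn :: "nat \<Rightarrow> 's"
    and init :: "'l \<Rightarrow> 'v" and \<rho> :: "nat \<Rightarrow> ('l, 'v, 's) gstate" and sched :: "nat \<Rightarrow> nat"
  assumes run: "is_run n vstep txn init m \<rho> sched"
    and fair: "fair m \<rho> sched"
    and wft: "\<forall>j<n. wait_free vstep (txn j)"
begin

abbreviation S :: "nat \<Rightarrow> ('l, 'v) shared" where "S s \<equiv> fst (\<rho> s)"

abbreviation pc :: "nat \<Rightarrow> nat \<Rightarrow> ('l, 'v, 's) pc" where "pc s t \<equiv> snd (\<rho> s) t"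

abbreviation stat :: "nat \<Rightarrow> nat \<Rightarrow> nat \<times> st" where "stat s k \<equiv> txn_status (S s) k"

abbreviation statuses_frozen_from :: "nat \<Rightarrow> bool" where
  "statuses_frozen_from T \<equiv> \<forall>s\<ge>T. txn_status (S s) = txn_status (S T)"

lemma sched_lt: "sched s < m"
  using run unfolding is_run_def by blast

lemma run_step: "tstep n vstep txn init (S s) (pc s (sched s)) = (S (Suc s), pc (Suc s) (sched s))"
  and run_step_other: "t \<noteq> sched s \<Longrightarrow> pc (Suc s) t = pc s t"
proof -
  have r: "\<rho> (Suc s) = gstep n vstep txn init (sched s) (\<rho> s)" using run unfolding is_run_def
    by blast
  obtain a b where ab: "tstep n vstep txn init (S s) (pc s (sched s)) = (a, b)" by fastforce
  have "\<rho> (Suc s) = (a, (snd (\<rho> s))(sched s := b))" using r ab unfolding gstep_def by simp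
  then show "tstep n vstep txn init (S s) (pc s (sched s)) = (S (Suc s), pc (Suc s) (sched s))"
    and "t \<noteq> sched s \<Longrightarrow> pc (Suc s) t = pc s t" using ab by auto
qed

lemma run_pcs_Suc: "snd (\<rho> (Suc s)) = (snd (\<rho> s))(sched s := pc (Suc s) (sched s))"
  using run_step_other by (auto simp: fun_eq_iff)

lemma inv_step_at:
  "run_inv n m vstep (S s) (snd (\<rho> s)) \<Longrightarrow>
   inv_step n m vstep txn init (S s) (snd (\<rho> s)) (sched s) (S (Suc s)) (pc (Suc s) (sched s))"
  unfolding inv_step_def run_inv_def using sched_lt run_step wft by blast

lemma run_inv_all: "run_inv n m vstep (S s) (snd (\<rho> s))"
proof (induction s)
  case 0
  have "\<rho> 0 = init_gstate" using run unfolding is_run_def by blast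
  then show ?case using run_inv_init unfolding init_gstate_def by simp
next
  case (Suc s)
  have "run_inv n m vstep (S (Suc s)) ((snd (\<rho> s))(sched s := pc (Suc s) (sched s)))"
    using inv_step.run_inv_step[OF inv_step_at[OF Suc.IH] Suc.IH] .
  then show ?case using run_pcs_Suc by simp
qed

lemma inv_step_run:
  "inv_step n m vstep txn init (S s) (snd (\<rho> s)) (sched s) (S (Suc s)) (pc (Suc s) (sched s))"
  using inv_step_at run_inv_all by blast

lemma safety_inv_run: "safety_inv n m vstep (S s) (snd (\<rho> s))"
  using run_inv_all unfolding run_inv_def by blast

lemma progress_inv_run: "\<not> done_marker (S s) \<Longrightarrow> progress_inv n m (S s) (snd (\<rho> s))"
  using run_inv_all unfolding run_inv_def by blast

lemma joined_done_run: "pc s t = PJoined \<Longrightarrow> done_marker (S s)"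
  using safety_inv_run[of s] unfolding safety_inv_def inv_joined_def by blast

lemma idle_thread_run: "m \<le> t \<Longrightarrow> pc s t = PLoop None"
  using safety_inv_run[of s] unfolding safety_inv_def inv_idle_def by blast

lemma active_thread_lt: "pc s t \<noteq> PLoop None \<Longrightarrow> t < m"
  using idle_thread_run by (meson not_le)

lemma wait_free_run: "pc s t = PExec k i st wb wl rs \<Longrightarrow> wait_free vstep st"
  using safety_inv_run[of s] unfolding safety_inv_def inv_wait_free_def by blast

lemma estimate_not_executed_run: "data (S s) p k = Some ESTIMATE \<Longrightarrow> snd (stat s k) \<noteq> EXECUTED"
  using safety_inv_run[of s] unfolding safety_inv_def inv_estimate_def by blast

lemma exec_task_status_run: "exec_task (pc s t) = Some (k, i) \<Longrightarrow> stat s k = (i, EXECUTING) \<and> k < n"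
  using safety_inv_run[of s] unfolding safety_inv_def inv_exec_def by blast

lemma abort_task_status_run: "abort_task (pc s t) = Some (k, i) \<Longrightarrow> stat s k = (i, ABORTING) \<and> k < n"
  using safety_inv_run[of s] unfolding safety_inv_def inv_abort_def by blast

lemma dep_set_member_run:
  "k \<in> txn_dependency (S s) b \<Longrightarrow> b < k \<and> k < n \<and> snd (stat s k) = ABORTING"
  using safety_inv_run[of s] unfolding safety_inv_def inv_dep_sets_def by blast

lemma owner_unique_run:
  "owns (S s) (snd (\<rho> s)) k x \<Longrightarrow> owns (S s) (snd (\<rho> s)) k y \<Longrightarrow> x = y"
  using safety_inv_run[of s] unfolding safety_inv_def inv_owner_unique_def by blast

lemma beyond_block_run: "n \<le> k \<Longrightarrow> stat s k = (0, READY_TO_EXECUTE)"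
  using safety_inv_run[of s] unfolding safety_inv_def inv_beyond_block_def by blast

lemma executing_has_thread:
  "\<not> done_marker (S s) \<Longrightarrow> k < n \<Longrightarrow> stat s k = (i, EXECUTING) \<Longrightarrow> \<exists>t. exec_task (pc s t) = Some (k, i)"
  using progress_inv_run[of s] unfolding progress_inv_def inv_executing_owned_def by blast

lemma aborting_has_owner:
  "\<not> done_marker (S s) \<Longrightarrow> k < n \<Longrightarrow> snd (stat s k) = ABORTING \<Longrightarrow> \<exists>x. owns (S s) (snd (\<rho> s)) k x"
  using progress_inv_run[of s] unfolding progress_inv_def inv_aborting_owned_def by blast

lemma executed_dep_resumer:
  "\<not> done_marker (S s) \<Longrightarrow> k \<in> txn_dependency (S s) b \<Longrightarrow> snd (stat s b) = EXECUTED \<Longrightarrow>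
   \<exists>t i w. pc s t = PF1 b i w"
  using progress_inv_run[of s] unfolding progress_inv_def inv_dep_resumer_def by blast

lemma ready_witness:
  "\<not> done_marker (S s) \<Longrightarrow> k < n \<Longrightarrow> snd (stat s k) = READY_TO_EXECUTE \<Longrightarrow>
   execution_idx (S s) \<le> k \<or> (\<exists>t. exec_idx_witness k (pc s t))"
  using progress_inv_run[of s] unfolding progress_inv_def inv_ready_witnessed_def by blast

lemma active_count_run:
  "\<not> done_marker (S s) \<Longrightarrow> num_active_tasks (S s) = card {t. t < m \<and> holds_task (pc s t)}"
  using progress_inv_run[of s] unfolding progress_inv_def inv_active_count_def by blast

lemma done_marker_mono_run: "s \<le> s' \<Longrightarrow> done_marker (S s) \<Longrightarrow> done_marker (S s')"
proof (induction s' rule: dec_induct)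
  case (step x)
  then show ?case using inv_step.done_marker_mono[OF inv_step_run[of x]] by simp
qed

lemma status_code_mono_run: "status_code (stat s k) \<le> status_code (stat (Suc s) k)"
  using inv_step.status_code_mono[OF inv_step_run[of s]] .

section \<open>Fair scheduling\<close>

lemma scheduled_again:
  assumes "t < m" "pc s t \<noteq> PJoined"
  shows "\<exists>s1\<ge>s. sched s1 = t \<and> (\<forall>s'. s \<le> s' \<longrightarrow> s' \<le> s1 \<longrightarrow> pc s' t = pc s t)"
proof -
  have "\<not> joined (\<rho> s) t" using assms unfolding joined_def by simp
  then obtain s2 where s2: "s2 \<ge> s" "sched s2 = t" using fair assms unfolding fair_def by blast
  define s1 where "s1 = (LEAST x. x \<ge> s \<and> sched x = t)"
  have s1: "s1 \<ge> s \<and> sched s1 = t" unfolding s1_def by (rule LeastI[of _ s2]) (use s2 in auto)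
  have before: "sched x \<noteq> t" if "x \<ge> s" "x < s1" for x
    using that not_less_Least unfolding s1_def by blast
  have "pc s' t = pc s t" if "s \<le> s'" "s' \<le> s1" for s'
    using that
  proof (induction s' rule: dec_induct)
    case (step x)
    then show ?case using before[of x] run_step_other[of t x] by simp
  qed simp
  then show ?thesis using s1 by blast
qed

lemma next_step_of:
  assumes "t < m" "pc s t = p" "p \<noteq> PJoined"
  shows "\<exists>s1\<ge>s. sched s1 = t \<and> pc s1 t = p
     \<and> tstep n vstep txn init (S s1) p = (S (Suc s1), pc (Suc s1) t)
     \<and> (\<forall>s'. s \<le> s' \<longrightarrow> s' \<le> s1 \<longrightarrow> pc s' t = p)"
proof -
  obtain s1 where s1: "s1 \<ge> s" "sched s1 = t" "\<forall>s'. s \<le> s' \<longrightarrow> s' \<le> s1 \<longrightarrow> pc s' t = pc s t"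
    using scheduled_again assms by blast
  then have "pc s1 t = p" using assms by auto
  then show ?thesis using s1 run_step[of s1] assms by auto
qed

lemma takes_step:
  assumes "u < m" "pc s u = p" "p \<noteq> PJoined"
  shows "\<exists>a\<ge>s. pc a u = p \<and> pc (Suc a) u = snd (tstep n vstep txn init (S a) p)
     \<and> S (Suc a) = fst (tstep n vstep txn init (S a) p)"
proof -
  obtain a where "a \<ge> s" "pc a u = p" "tstep n vstep txn init (S a) p = (S (Suc a), pc (Suc a) u)"
    using next_step_of[OF assms] by blast
  then show ?thesis by (intro exI[of _ a]) simp
qed

lemma moves_to:
  assumes "u < m" "pc s u = p" "p \<noteq> PJoined"
    and "\<And>a. a \<ge> s \<Longrightarrow> snd (tstep n vstep txn init (S a) p) = q"
  shows "\<exists>s'>s. pc s' u = q"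
proof -
  obtain a where "a \<ge> s" "pc (Suc a) u = snd (tstep n vstep txn init (S a) p)"
    using takes_step[OF assms(1-3)] by blast
  then show ?thesis using assms(4) by (intro exI[of _ "Suc a"]) auto
qed

lemma wf_progress:
  fixes f :: "('l, 'v, 's) pc \<Rightarrow> 'a" and r :: "('a \<times> 'a) set"
  assumes wf: "wf r" and R0: "R (pc s0 u)"
    and prog: "\<And>s. s \<ge> s0 \<Longrightarrow> \<not> G s \<Longrightarrow> R (pc s u) \<Longrightarrow>
        \<exists>s'>s. G s' \<or> (R (pc s' u) \<and> (f (pc s' u), f (pc s u)) \<in> r)"
  shows "\<exists>s\<ge>s0. G s"
proof -
  have "\<forall>s. f (pc s u) = x \<longrightarrow> s \<ge> s0 \<longrightarrow> R (pc s u) \<longrightarrow> (\<exists>s'\<ge>s0. G s')" for x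
  proof (induction x rule: wf_induct[OF wf])
    case (1 x)
    show ?case
    proof (intro allI impI)
      fix s assume fx: "f (pc s u) = x" and ss: "s \<ge> s0" and rs: "R (pc s u)"
      show "\<exists>s'\<ge>s0. G s'"
      proof (cases "G s")
        case False
        then obtain s' where s': "s' > s" "G s' \<or> (R (pc s' u) \<and> (f (pc s' u), x) \<in> r)"
          using prog ss rs fx by blast
        show ?thesis
        proof (cases "G s'")
          case True
          then show ?thesis using s' ss by (intro exI[of _ s']) auto
        next
          case False
          then show ?thesis using 1 s' ss by auto
        qed
      qed (use ss in blast)
    qed
  qed
  then show ?thesis using R0 by blast
qed

section \<open>Threads return to the top of the loop while statuses are frozen\<close>

text \<open>blockers_unexecuted k s rules out endless retries of an execution of k that keeps reading
  an ESTIMATE written by some b which is EXECUTED again whenever the dependency is checked.\<close>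

abbreviation blockers_unexecuted :: "nat \<Rightarrow> nat \<Rightarrow> bool" where
  "blockers_unexecuted k s \<equiv>
     \<forall>s'\<ge>s. \<forall>l b. mv_read (S s') l k = READ_ERROR b \<longrightarrow> (\<forall>s''\<ge>s'. snd (stat s'' b) \<noteq> EXECUTED)"

abbreviation left_vm :: "nat \<Rightarrow> nat \<Rightarrow> nat \<Rightarrow> nat \<Rightarrow> bool" where
  "left_vm u k i s \<equiv>
     (\<exists>W rs prev. pc s u = PRW k i W rs prev W) \<or> (pc s u = PDec \<and> stat s k = (i, ABORTING))"

lemma blockers_unexecuted_later: "blockers_unexecuted k s \<Longrightarrow> s \<le> s' \<Longrightarrow> blockers_unexecuted k s'"
  by (meson order_trans)

lemma dep_step:
  assumes "u < m" "pc s u = PDep k i b"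
  shows "\<exists>s1\<ge>s. snd (stat s1 b) = EXECUTED \<and> pc (Suc s1) u = PExec k i (txn k) Map.empty [] []
     \<or> snd (stat s1 b) \<noteq> EXECUTED \<and> pc (Suc s1) u = PDec \<and> stat (Suc s1) k = (i, ABORTING)"
proof -
  obtain s1 where s1: "s1 \<ge> s" "pc s1 u = PDep k i b"
      "pc (Suc s1) u = snd (tstep n vstep txn init (S s1) (PDep k i b))"
      "S (Suc s1) = fst (tstep n vstep txn init (S s1) (PDep k i b))"
    using takes_step[OF assms] by auto
  have "stat s1 k = (i, EXECUTING)" using exec_task_status_run[of s1 u k i] s1(2) by simp
  then show ?thesis using s1 by (intro exI[of _ s1]) (auto simp: upd_status_def)
qed

lemma dep_aborts:
  assumes "u < m" "pc s u = PDep k i b" and "\<forall>s'\<ge>s. snd (stat s' b) \<noteq> EXECUTED"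
  shows "\<exists>s'>s. pc s' u = PDec \<and> stat s' k = (i, ABORTING)"
proof -
  obtain s1 where "s1 \<ge> s" and
    "snd (stat s1 b) = EXECUTED \<and> pc (Suc s1) u = PExec k i (txn k) Map.empty [] []
     \<or> snd (stat s1 b) \<noteq> EXECUTED \<and> pc (Suc s1) u = PDec \<and> stat (Suc s1) k = (i, ABORTING)"
    using dep_step[OF assms(1,2)] by blast
  with assms(3) show ?thesis by (intro exI[of _ "Suc s1"]) auto
qed

lemma exec_progress:
  assumes u: "u < m" and "wait_free vstep st" "pc s u = PExec k i st wb wl rs"
    and "blockers_unexecuted k s"
  shows "\<exists>s'>s. left_vm u k i s'"
  using assms(2-)
proof (induction st arbitrary: s wb wl rs rule: wait_free.induct)
  case (wf_done st)
  obtain s1 where s1: "s1 \<ge> s"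
      "pc (Suc s1) u = snd (tstep n vstep txn init (S s1) (PExec k i st wb wl rs))"
    using takes_step[OF u wf_done.prems(1)] by auto
  then have "left_vm u k i (Suc s1)" using wf_done.hyps by (simp add: Let_def)
  then show ?case using s1(1) by (intro exI[of _ "Suc s1"]) auto
next
  case (wf_write st l v st')
  obtain s1 where s1: "s1 \<ge> s"
      "pc (Suc s1) u = snd (tstep n vstep txn init (S s1) (PExec k i st wb wl rs))"
    using takes_step[OF u wf_write.prems(1)] by auto
  then have "pc (Suc s1) u = PExec k i st' (wb(l \<mapsto> v)) (if l \<in> set wl then wl else wl @ [l]) rs"
    using wf_write.hyps by simp
  moreover have "blockers_unexecuted k (Suc s1)"
    by (rule blockers_unexecuted_later[OF wf_write.prems(2) le_SucI[OF s1(1)]])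
  ultimately obtain s' where "s' > Suc s1" "left_vm u k i s'" using wf_write.IH by blast
  then show ?case using s1(1) by (intro exI[of _ s']) auto
next
  case (wf_read st l f)
  obtain s1 where s1: "s1 \<ge> s"
      "pc (Suc s1) u = snd (tstep n vstep txn init (S s1) (PExec k i st wb wl rs))"
    using takes_step[OF u wf_read.prems(1)] by auto
  have later: "blockers_unexecuted k (Suc s1)"
    by (rule blockers_unexecuted_later[OF wf_read.prems(2) le_SucI[OF s1(1)]])
  consider (read) x rs' where "pc (Suc s1) u = PExec k i (f x) wb wl rs'"
    | (blocked) b where "mv_read (S s1) l k = READ_ERROR b" "pc (Suc s1) u = PDep k i b"
    using s1(2) wf_read.hyps by (cases "wb l"; cases "mv_read (S s1) l k") auto
  then show ?case
  proof cases
    case (read x rs')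
    then obtain s' where "s' > Suc s1" "left_vm u k i s'" using wf_read.IH later by blast
    then show ?thesis using s1(1) by (intro exI[of _ s']) auto
  next
    case (blocked b)
    have "\<forall>s'\<ge>Suc s1. snd (stat s' b) \<noteq> EXECUTED" using wf_read.prems(2) s1(1) blocked(1) by auto
    then obtain s' where "s' > Suc s1" "pc s' u = PDec \<and> stat s' k = (i, ABORTING)"
      using dep_aborts[OF u blocked(2)] by blast
    then show ?thesis using s1(1) by (intro exI[of _ s']) auto
  qed
qed

lemma dep_progress:
  assumes u: "u < m" and p0: "pc s u = PDep k i b" and H: "blockers_unexecuted k s"
  shows "\<exists>s'>s. left_vm u k i s'"
proof -
  have "k < n" using exec_task_status_run[of s u k i] p0 by simp
  then have wf: "wait_free vstep (txn k)" using wft by blast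
  obtain s1 where s1: "s1 \<ge> s" and out:
    "pc (Suc s1) u = PExec k i (txn k) Map.empty [] []
     \<or> pc (Suc s1) u = PDec \<and> stat (Suc s1) k = (i, ABORTING)"
    using dep_step[OF u p0] by blast
  from out show ?thesis
  proof
    assume restart: "pc (Suc s1) u = PExec k i (txn k) Map.empty [] []"
    have "blockers_unexecuted k (Suc s1)" by (rule blockers_unexecuted_later[OF H le_SucI[OF s1]])
    from exec_progress[OF u wf restart this]
    obtain s' where "s' > Suc s1" "left_vm u k i s'" by blast
    then show ?thesis using s1 by (intro exI[of _ s']) auto
  next
    assume "pc (Suc s1) u = PDec \<and> stat (Suc s1) k = (i, ABORTING)"
    then show ?thesis using s1 by (intro exI[of _ "Suc s1"]) auto
  qed
qed

lemma blockers_unexecuted_frozen: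
  assumes "statuses_frozen_from T" and "s \<ge> T"
  shows "blockers_unexecuted k s"
proof (intro allI impI)
  fix s' l b s'' assume a: "s \<le> s'" "mv_read (S s') l k = READ_ERROR b" "s' \<le> s''"
  have "data (S s') l b = Some ESTIMATE" using mv_read_READ_ERROR[OF a(2)] by simp
  then have "snd (stat s' b) \<noteq> EXECUTED" by (rule estimate_not_executed_run)
  moreover have "stat s'' b = stat s' b" using assms a by (metis order_trans)
  ultimately show "snd (stat s'' b) \<noteq> EXECUTED" by simp
qed

lemma frozen_step_decreases_rank:
  assumes frozen: "statuses_frozen_from T" and u: "u < m" and "s \<ge> T"
    and "\<not> in_vm (pc s u)" "pc s u \<noteq> PLoop None" "pc s u \<noteq> PJoined"
  shows "\<exists>s'>s. pc s' u = PLoop None \<or> pc s' u = PJoined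
    \<or> (pc_rank (pc s' u), pc_rank (pc s u)) \<in> rank_less"
proof -
  obtain s1 where s1: "s1 \<ge> s"
    "tstep n vstep txn init (S s1) (pc s u) = (S (Suc s1), pc (Suc s1) u)"
    using next_step_of[OF u refl] assms(6) by blast
  have "txn_status (S (Suc s1)) = txn_status (S s1)"
    using frozen s1(1) assms(3) by (metis le_SucI order_trans)
  then show ?thesis
    using pc_rank_decreases[OF s1(2)] assms(4-6) s1(1) by (intro exI[of _ "Suc s1"]) auto
qed

lemma returns_to_loop:
  assumes frozen: "statuses_frozen_from T" and u: "u < m" and s0: "s0 \<ge> T"
  shows "\<exists>s\<ge>s0. pc s u = PLoop None \<or> pc s u = PJoined"
proof (rule wf_progress[where R="\<lambda>_. True" and f=pc_rank and r=rank_less, OF wf_rank_less])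
  show True ..
next
  fix s assume ss: "s \<ge> s0" and ng: "\<not> (pc s u = PLoop None \<or> pc s u = PJoined)"
  have sT: "s \<ge> T" using ss s0 by simp
  then have H: "blockers_unexecuted k s" for k by (rule blockers_unexecuted_frozen[OF frozen])
  show "\<exists>s'>s. (pc s' u = PLoop None \<or> pc s' u = PJoined)
    \<or> True \<and> (pc_rank (pc s' u), pc_rank (pc s u)) \<in> rank_less"
  proof (cases "in_vm (pc s u)")
    case True
    show ?thesis
    proof (cases "pc s u")
      case (PExec k i st wb wl rs)
      then obtain s' where "s' > s" "left_vm u k i s'"
        using exec_progress[OF u wait_free_run[OF PExec] PExec H] by blast
      then show ?thesis using PExec by (auto simp: rank_less_def)
    next
      case (PDep k i b)
      then obtain s' where "s' > s" "left_vm u k i s'" using dep_progress[OF u PDep H] by blast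
      then show ?thesis using PDep by (auto simp: rank_less_def)
    qed (use True in auto)
  next
    case False
    then show ?thesis using frozen_step_decreases_rank[OF frozen u sT False] ng by auto
  qed
qed

section \<open>Frozen statuses force done_marker\<close>

lemma eventually_never_entered:
  assumes frozen: "statuses_frozen_from T"
    and not_loop: "\<And>p. P p \<Longrightarrow> p \<noteq> PLoop None \<and> p \<noteq> PJoined"
    and no_entry: "\<And>s t. s \<ge> T \<Longrightarrow> sched s = t \<Longrightarrow> \<not> P (pc s t) \<Longrightarrow> \<not> P (pc (Suc s) t)"
  shows "\<exists>T'\<ge>T. \<forall>s\<ge>T'. \<forall>t<m. \<not> P (pc s t)"
proof (rule eventually_all_below, intro allI impI)
  fix t assume t: "t < m"
  obtain s1 where s1: "s1 \<ge> T" "pc s1 t = PLoop None \<or> pc s1 t = PJoined"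
    using returns_to_loop[OF frozen t order_refl] by blast
  have "\<forall>s\<ge>s1. \<not> P (pc s t)"
  proof (rule never_again)
    show "\<not> P (pc s1 t)" using s1(2) not_loop by blast
  next
    fix s assume "s \<ge> s1" "\<not> P (pc s t)"
    then show "\<not> P (pc (Suc s) t)"
      using no_entry[of s t] run_step_other[of t s] s1(1) by (cases "sched s = t") auto
  qed
  then show "\<exists>s0\<ge>T. \<forall>s\<ge>s0. \<not> P (pc s t)" using s1(1) by blast
qed

lemma index_const_once_exhausted:
  fixes g :: "('l, 'v) shared \<Rightarrow> nat" and Qa Qb :: "('l, 'v, 's) pc"
  assumes frozen: "statuses_frozen_from T"
    and chg: "\<And>s. s \<ge> T \<Longrightarrow> g (S (Suc s)) \<noteq> g (S s) \<Longrightarrow> pc s (sched s) = Qb"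
    and ent: "\<And>s t. s \<ge> T \<Longrightarrow> pc s t \<noteq> Qa \<Longrightarrow> pc s t \<noteq> Qb \<Longrightarrow> sched s = t \<Longrightarrow>
        pc (Suc s) t = Qa \<or> pc (Suc s) t = Qb \<Longrightarrow> g (S s) < n"
    and q: "Qa \<noteq> PLoop None" "Qa \<noteq> PJoined" "Qb \<noteq> PLoop None" "Qb \<noteq> PJoined"
    and large: "\<And>s. s \<ge> T \<Longrightarrow> n \<le> g (S s)"
  shows "\<exists>T'\<ge>T. \<forall>s\<ge>T'. g (S s) = g (S T')"
proof -
  obtain T' where T': "T' \<ge> T" "\<forall>s\<ge>T'. \<forall>t<m. \<not> (pc s t = Qa \<or> pc s t = Qb)"
  proof -
    have "\<exists>T'\<ge>T. \<forall>s\<ge>T'. \<forall>t<m. \<not> (pc s t = Qa \<or> pc s t = Qb)"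
    proof (rule eventually_never_entered[where P="\<lambda>p. p = Qa \<or> p = Qb", OF frozen])
      fix s t assume s: "s \<ge> T" and t: "sched s = t" and nq: "\<not> (pc s t = Qa \<or> pc s t = Qb)"
      show "\<not> (pc (Suc s) t = Qa \<or> pc (Suc s) t = Qb)"
      proof
        assume entered: "pc (Suc s) t = Qa \<or> pc (Suc s) t = Qb"
        have "g (S s) < n" by (rule ent[OF s _ _ t entered]) (use nq in auto)
        then show False using large[OF s] by simp
      qed
    qed (use q in auto)
    then show thesis using that by blast
  qed
  have step_const: "g (S (Suc s)) = g (S s)" if s: "s \<ge> T'" for s
  proof (rule ccontr)
    assume "g (S (Suc s)) \<noteq> g (S s)"
    moreover have "s \<ge> T" using s T'(1) by simp
    ultimately have "pc s (sched s) = Qb" using chg by blast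
    then show False using T'(2) s sched_lt[of s] by blast
  qed
  have "g (S s) = g (S T')" if "s \<ge> T'" for s
    by (rule const_from_step[where f="\<lambda>s. g (S s)", OF step_const that])
  then show ?thesis using T'(1) by blast
qed

lemma index_eventually_const:
  fixes g :: "('l, 'v) shared \<Rightarrow> nat" and Qa Qb :: "('l, 'v, 's) pc"
  assumes frozen: "statuses_frozen_from T"
    and chg: "\<And>s. s \<ge> T \<Longrightarrow> g (S (Suc s)) \<noteq> g (S s) \<Longrightarrow>
        pc s (sched s) = Qb \<and> g (S (Suc s)) = g (S s) + 1"
    and ent: "\<And>s t. s \<ge> T \<Longrightarrow> pc s t \<noteq> Qa \<Longrightarrow> pc s t \<noteq> Qb \<Longrightarrow> sched s = t \<Longrightarrow>
        pc (Suc s) t = Qa \<or> pc (Suc s) t = Qb \<Longrightarrow> g (S s) < n"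
    and q: "Qa \<noteq> PLoop None" "Qa \<noteq> PJoined" "Qb \<noteq> PLoop None" "Qb \<noteq> PJoined"
  shows "\<exists>T'\<ge>T. \<forall>s\<ge>T'. g (S s) = g (S T')"
proof -
  have mono: "g (S s) \<le> g (S (Suc s))" if "s \<ge> T" for s
    using chg[OF that] by (cases "g (S (Suc s)) = g (S s)") auto
  show ?thesis
  proof (cases "\<exists>s2\<ge>T. n \<le> g (S s2)")
    case False
    then have "\<And>s. s \<ge> T \<Longrightarrow> g (S s) \<le> n" by auto
    from mono_bounded_eventually_const[of T "\<lambda>s. g (S s)", OF mono this] show ?thesis by blast
  next
    case True
    then obtain s2 where s2: "s2 \<ge> T" "n \<le> g (S s2)" by blast
    have large: "n \<le> g (S s)" if "s \<ge> s2" for s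
      using that
    proof (induction s rule: dec_induct)
      case (step x)
      then show ?case using mono[of x] s2(1) by simp
    qed (use s2 in simp)
    have "\<exists>T'\<ge>s2. \<forall>s\<ge>T'. g (S s) = g (S T')"
    proof (rule index_const_once_exhausted[where Qa=Qa and Qb=Qb])
      show "statuses_frozen_from s2" using const_from_later[OF frozen s2(1)] .
      show "pc s (sched s) = Qb" if "s \<ge> s2" "g (S (Suc s)) \<noteq> g (S s)" for s
        using chg[of s] that s2(1) by simp
      show "g (S s) < n" if "s \<ge> s2" "pc s t \<noteq> Qa" "pc s t \<noteq> Qb" "sched s = t"
        "pc (Suc s) t = Qa \<or> pc (Suc s) t = Qb" for s t
        by (rule ent) (use that s2(1) in auto)
    qed (use q large in auto)
    then show ?thesis using s2(1) by (meson order_trans)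
  qed
qed

context
  fixes T :: nat
  assumes not_done: "\<forall>s. \<not> done_marker (S s)" and m0: "0 < m"
    and frozen: "statuses_frozen_from T"
    and exec_idx_frozen: "\<And>s. s \<ge> T \<Longrightarrow> execution_idx (S s) = execution_idx (S T)"
    and val_idx_frozen: "\<And>s. s \<ge> T \<Longrightarrow> validation_idx (S s) = validation_idx (S T)"
    and dcnt_frozen: "\<And>s. s \<ge> T \<Longrightarrow> decrease_cnt (S s) = decrease_cnt (S T)"
begin

lemma frozen_not_joined: "pc s t \<noteq> PJoined"
  using joined_done_run not_done by blast

lemma frozen_not_incrementing_index: "s \<ge> T \<Longrightarrow> pc s t \<noteq> PVB2 \<and> pc s t \<noteq> PEB2"
proof (rule ccontr)
  assume s: "s \<ge> T" and "\<not> (pc s t \<noteq> PVB2 \<and> pc s t \<noteq> PEB2)"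
  then consider "pc s t = PVB2" | "pc s t = PEB2" by blast
  then show False
  proof cases
    case 1
    then have "t < m" using active_thread_lt[of s t] by auto
    then obtain a where "a \<ge> s" "S (Suc a) = fst (tstep n vstep txn init (S a) PVB2)"
      using takes_step 1 by blast
    then show False using val_idx_frozen[of a] val_idx_frozen[of "Suc a"] s by simp
  next
    case 2
    then have "t < m" using active_thread_lt[of s t] by auto
    then obtain a where "a \<ge> s" "S (Suc a) = fst (tstep n vstep txn init (S a) PEB2)"
      using takes_step 2 by blast
    then show False using exec_idx_frozen[of a] exec_idx_frozen[of "Suc a"] s by simp
  qed
qed

lemma frozen_not_claiming_task: "s \<ge> T \<Longrightarrow> pc s t \<noteq> PVB1 \<and> pc s t \<noteq> PEB1"
proof (rule ccontr)
  assume s: "s \<ge> T" and "\<not> (pc s t \<noteq> PVB1 \<and> pc s t \<noteq> PEB1)"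
  then consider "pc s t = PVB1" | "pc s t = PEB1" by blast
  then show False
  proof cases
    case 1
    then have "t < m" using active_thread_lt[of s t] by auto
    then obtain a where "a \<ge> s" "pc (Suc a) t = PVB2"
      using takes_step 1 by fastforce
    then show False using frozen_not_incrementing_index[of "Suc a" t] s by simp
  next
    case 2
    then have "t < m" using active_thread_lt[of s t] by auto
    then obtain a where "a \<ge> s" "pc (Suc a) t = PEB2"
      using takes_step 2 by fastforce
    then show False using frozen_not_incrementing_index[of "Suc a" t] s by simp
  qed
qed

lemma frozen_eventually_no_active_task: "\<exists>T'\<ge>T. \<forall>s\<ge>T'. num_active_tasks (S s) = 0"
proof -
  obtain T' where T': "T' \<ge> T" "\<forall>s\<ge>T'. \<forall>t<m. \<not> holds_task (pc s t)"
  proof -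
    have "\<exists>T'\<ge>T. \<forall>s\<ge>T'. \<forall>t<m. \<not> holds_task (pc s t)"
    proof (rule eventually_never_entered[OF frozen])
      fix s t assume "s \<ge> T" "sched s = t" "\<not> holds_task (pc s t)"
      then show "\<not> holds_task (pc (Suc s) t)"
        using holds_task_entry[OF run_step[of s]] frozen_not_claiming_task[of s t] by auto
    qed auto
    then show thesis using that by blast
  qed
  have "num_active_tasks (S s) = 0" if "s \<ge> T'" for s
  proof -
    have "{t. t < m \<and> holds_task (pc s t)} = {}" using T'(2) that by auto
    then show ?thesis using active_count_run[of s] not_done by simp
  qed
  then show ?thesis using T'(1) by blast
qed

lemma frozen_moves_to:
  assumes "s \<ge> T" "pc s 0 = p" "p \<noteq> PJoined"
    and "\<And>\<sigma>. execution_idx \<sigma> = execution_idx (S T) \<Longrightarrow> validation_idx \<sigma> = validation_idx (S T) \<Longrightarrow>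
           decrease_cnt \<sigma> = decrease_cnt (S T) \<Longrightarrow> \<not> done_marker \<sigma> \<Longrightarrow>
           snd (tstep n vstep txn init \<sigma> p) = q"
  shows "\<exists>s'>s. pc s' 0 = q"
proof (rule moves_to[OF m0 assms(2,3)])
  fix a assume "a \<ge> s"
  then show "snd (tstep n vstep txn init (S a) p) = q"
    using assms(1,4) exec_idx_frozen[of a] val_idx_frozen[of a] dcnt_frozen[of a] not_done by simp
qed

lemma frozen_reaches_check_done:
  assumes "s \<ge> T" "pc s 0 = PLoop None"
  shows "n \<le> execution_idx (S T) \<and> n \<le> validation_idx (S T) \<and> (\<exists>s'>s. pc s' 0 = PCD0)"
proof -
  define E V where "E = execution_idx (S T)" and "V = validation_idx (S T)"
  have "\<exists>s1>s. pc s1 0 = PNT0" by (rule frozen_moves_to[OF assms]) auto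
  then obtain s1 where s1: "s1 > s" "pc s1 0 = PNT0" by blast
  have "\<exists>s2>s1. pc s2 0 = PNT1 V"
    by (rule frozen_moves_to) (use s1 assms(1) in \<open>auto simp: V_def\<close>)
  then obtain s2 where s2: "s2 > s1" "pc s2 0 = PNT1 V" by blast
  have "\<exists>s3>s2. pc s3 0 = (if V < E then PVB0 else PEB0)"
    by (rule frozen_moves_to) (use s1 s2 assms(1) in \<open>auto simp: E_def\<close>)
  then obtain s3 where s3: "s3 > s2" "pc s3 0 = (if V < E then PVB0 else PEB0)" by blast
  have s3T: "s3 \<ge> T" using s1 s2 s3 assms(1) by simp
  show ?thesis
  proof (cases "V < E")
    case True
    have "\<exists>s4>s3. pc s4 0 = (if n \<le> V then PCD0 else PVB1)"
      by (rule frozen_moves_to) (use s3 s3T True in \<open>auto simp: V_def\<close>)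
    then obtain s4 where "s4 > s3" "pc s4 0 = (if n \<le> V then PCD0 else PVB1)" by blast
    then have "n \<le> V" "pc s4 0 = PCD0" "s4 > s"
      using frozen_not_claiming_task[of s4 0] s1(1) s2(1) s3(1) s3T by (auto split: if_splits)
    then show ?thesis using True unfolding E_def V_def by auto
  next
    case False
    have "\<exists>s4>s3. pc s4 0 = (if n \<le> E then PCD0 else PEB1)"
      by (rule frozen_moves_to) (use s3 s3T False in \<open>auto simp: E_def\<close>)
    then obtain s4 where "s4 > s3" "pc s4 0 = (if n \<le> E then PCD0 else PEB1)" by blast
    then have "n \<le> E" "pc s4 0 = PCD0" "s4 > s"
      using frozen_not_claiming_task[of s4 0] s1(1) s2(1) s3(1) s3T by (auto split: if_splits)
    then show ?thesis using False unfolding E_def V_def by auto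
  qed
qed

text \<open>Thread 0 eventually runs check_done with both indices exhausted, no active task and an
  unchanged decrease_cnt, so it sets done_marker.\<close>

lemma frozen_run_impossible: False
proof -
  define E V C where "E = execution_idx (S T)" and "V = validation_idx (S T)"
    and "C = decrease_cnt (S T)"
  obtain T' where T': "T' \<ge> T" "\<forall>s\<ge>T'. num_active_tasks (S s) = 0"
    using frozen_eventually_no_active_task by blast
  obtain s0 where s0: "s0 \<ge> T'" "pc s0 0 = PLoop None"
    using returns_to_loop[OF frozen m0, of T'] T'(1) frozen_not_joined by blast
  then obtain s1 where s1: "s1 > s0" "pc s1 0 = PCD0" and idx: "n \<le> E" "n \<le> V"
    using frozen_reaches_check_done[of s0] T'(1) unfolding E_def V_def by auto
  have s1T: "s1 \<ge> T" using s0(1) s1(1) T'(1) by simp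
  have "\<exists>s2>s1. pc s2 0 = PCD1 C"
    by (rule frozen_moves_to) (use s1 s1T in \<open>auto simp: C_def\<close>)
  then obtain s2 where s2: "s2 > s1" "pc s2 0 = PCD1 C" by blast
  have "\<exists>s3>s2. pc s3 0 = PCD2 C E"
    by (rule frozen_moves_to) (use s1T s2 in \<open>auto simp: E_def\<close>)
  then obtain s3 where s3: "s3 > s2" "pc s3 0 = PCD2 C E" by blast
  have "\<exists>s4>s3. pc s4 0 = PCD3 C"
    by (rule frozen_moves_to) (use s1T s2 s3 idx in \<open>auto simp: V_def\<close>)
  then obtain s4 where s4: "s4 > s3" "pc s4 0 = PCD3 C" by blast
  have "\<exists>s5>s4. pc s5 0 = PCD4 C"
  proof (rule moves_to[OF m0 s4(2)])
    fix a assume "a \<ge> s4"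
    then have "num_active_tasks (S a) = 0" using T'(2) s0(1) s1(1) s2(1) s3(1) s4(1) by simp
    then show "snd (tstep n vstep txn init (S a) (PCD3 C)) = PCD4 C" by simp
  qed simp
  then obtain s5 where s5: "s5 > s4" "pc s5 0 = PCD4 C" by blast
  have "\<exists>s6>s5. pc s6 0 = PCD5"
    by (rule frozen_moves_to) (use s1T s2 s3 s4 s5 in \<open>auto simp: C_def\<close>)
  then obtain s6 where "pc s6 0 = PCD5" by blast
  then obtain a where "S (Suc a) = fst (tstep n vstep txn init (S a) PCD5)"
    using takes_step[OF m0] by blast
  then have "done_marker (S (Suc a))" by simp
  then show False using not_done by blast
qed

end

text \<open>The code segments after_status_change are entered only by changing a status.\<close>

lemma frozen_eventually_calm:
  assumes frozen: "statuses_frozen_from T"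
  shows "\<exists>T1\<ge>T. \<forall>s\<ge>T1. \<not> after_status_change (pc s (sched s))"
proof -
  have "\<exists>T1\<ge>T. \<forall>s\<ge>T1. \<forall>t<m. \<not> after_status_change (pc s t)"
  proof (rule eventually_never_entered[OF frozen])
    fix s t assume s: "s \<ge> T" and t: "sched s = t" and nh: "\<not> after_status_change (pc s t)"
    show "\<not> after_status_change (pc (Suc s) t)"
    proof
      assume "after_status_change (pc (Suc s) t)"
      moreover have "txn_status (S (Suc s)) = txn_status (S s)" using frozen s by (metis le_SucI)
      ultimately show False
        using after_status_change_entry[OF run_step[of s, unfolded t] nh]
          exec_task_status_run[of s t] by fastforce
    qed
  qed auto
  then show ?thesis using sched_lt by blast
qed

lemma frozen_status_sets_done:
  assumes nd: "\<forall>s. \<not> done_marker (S s)" and m0: "0 < m" and frozen: "statuses_frozen_from T"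
  shows False
proof -
  obtain T1 where T1: "T1 \<ge> T" and calm: "\<And>s. s \<ge> T1 \<Longrightarrow> \<not> after_status_change (pc s (sched s))"
    using frozen_eventually_calm[OF frozen] by blast
  have frozen1: "statuses_frozen_from T1" using const_from_later[OF frozen T1(1)] .
  obtain T2 where T2: "T2 \<ge> T1" "\<forall>s\<ge>T2. execution_idx (S s) = execution_idx (S T2)"
  proof -
    have "\<exists>T2\<ge>T1. \<forall>s\<ge>T2. execution_idx (S s) = execution_idx (S T2)"
    proof (rule index_eventually_const[where Qa=PEB1 and Qb=PEB2, OF frozen1])
      fix s assume "s \<ge> T1" "execution_idx (S (Suc s)) \<noteq> execution_idx (S s)"
      then show "pc s (sched s) = PEB2 \<and> execution_idx (S (Suc s)) = execution_idx (S s) + 1"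
        using execution_idx_change[OF run_step[of s]] calm by blast
    next
      fix s t assume "pc s t \<noteq> PEB1" "pc s t \<noteq> PEB2" "sched s = t"
        "pc (Suc s) t = PEB1 \<or> pc (Suc s) t = PEB2"
      then show "execution_idx (S s) < n" using exec_branch_entry[OF run_step[of s]] by blast
    qed auto
    then show thesis using that by blast
  qed
  have frozen2: "statuses_frozen_from T2" using const_from_later[OF frozen1 T2(1)] .
  obtain T3 where T3: "T3 \<ge> T2" "\<forall>s\<ge>T3. validation_idx (S s) = validation_idx (S T3)"
  proof -
    have "\<exists>T3\<ge>T2. \<forall>s\<ge>T3. validation_idx (S s) = validation_idx (S T3)"
    proof (rule index_eventually_const[where Qa=PVB1 and Qb=PVB2, OF frozen2])
      fix s assume "s \<ge> T2" "validation_idx (S (Suc s)) \<noteq> validation_idx (S s)"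
      then show "pc s (sched s) = PVB2 \<and> validation_idx (S (Suc s)) = validation_idx (S s) + 1"
        using validation_idx_change[OF run_step[of s]] calm[of s] T2(1) by auto
    next
      fix s t assume "pc s t \<noteq> PVB1" "pc s t \<noteq> PVB2" "sched s = t"
        "pc (Suc s) t = PVB1 \<or> pc (Suc s) t = PVB2"
      then show "validation_idx (S s) < n" using val_branch_entry[OF run_step[of s]] by blast
    qed auto
    then show thesis using that by blast
  qed
  have "decrease_cnt (S (Suc s)) = decrease_cnt (S s)" if "s \<ge> T3" for s
    using decrease_cnt_change[OF run_step[of s]] calm[of s] that T2(1) T3(1) by fastforce
  then have dcnt3: "decrease_cnt (S s) = decrease_cnt (S T3)" if "s \<ge> T3" for s
    using const_from_step[where f="\<lambda>s. decrease_cnt (S s)"] that by blast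
  have exec3: "execution_idx (S s) = execution_idx (S T3)" if "s \<ge> T3" for s
    using T2(2) T3(1) that by (metis order_trans)
  have val3: "validation_idx (S s) = validation_idx (S T3)" if "s \<ge> T3" for s
    using T3(2) that by blast
  have "statuses_frozen_from T3" using const_from_later[OF frozen2 T3(1)] .
  from frozen_run_impossible[OF nd m0 this exec3 val3 dcnt3] show False .
qed

section \<open>After done_marker every thread joins\<close>

text \<open>Unless a transaction is incarnated again, every status change lowers the sum of the status
  potentials, so the statuses eventually stop changing.\<close>

lemma status_eventually_const:
  assumes noinc: "\<And>s k. s \<ge> T \<Longrightarrow> snd (stat s k) = READY_TO_EXECUTE \<Longrightarrow>
      snd (stat (Suc s) k) = READY_TO_EXECUTE"
  shows "\<exists>T'\<ge>T. statuses_frozen_from T'"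
proof -
  define Phi where "Phi s = (\<Sum>k<n. status_potential (snd (stat s k)))" for s
  have pk: "status_potential (snd (stat (Suc s) k)) \<le> status_potential (snd (stat s k)) \<and>
      (stat (Suc s) k \<noteq> stat s k \<longrightarrow>
        status_potential (snd (stat (Suc s) k)) < status_potential (snd (stat s k)))"
    if "s \<ge> T" for s k
  proof (cases "stat (Suc s) k = stat s k")
    case False
    have step: "status_step (stat s k) (stat (Suc s) k)"
      using inv_step.status_change_step[OF inv_step_run[of s] False] .
    have "snd (stat s k) \<noteq> READY_TO_EXECUTE"
    proof
      assume r: "snd (stat s k) = READY_TO_EXECUTE"
      then have "snd (stat (Suc s) k) = READY_TO_EXECUTE" by (rule noinc[OF that])
      with r step show False by (auto simp: status_step_def)
    qed
    then show ?thesis using status_step_potential_less[OF step] False by simp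
  qed simp
  have "Phi (Suc s) \<le> Phi s" if "s \<ge> T" for s
    unfolding Phi_def by (rule sum_mono) (use pk that in blast)
  then obtain T' where T': "T' \<ge> T" "\<forall>s\<ge>T'. Phi s = Phi T'"
    using antimono_eventually_const by blast
  have same: "txn_status (S (Suc s)) = txn_status (S s)" if s: "s \<ge> T'" for s
  proof
    fix k
    show "stat (Suc s) k = stat s k"
    proof (rule ccontr)
      assume ch: "stat (Suc s) k \<noteq> stat s k"
      have "k < n" using ch beyond_block_run by (metis not_le)
      have sT: "s \<ge> T" using s T'(1) by simp
      have "Phi (Suc s) < Phi s"
        unfolding Phi_def
        by (rule sum_strict_mono_ex1)
          (simp, use pk[OF sT] in blast, use pk[OF sT, of k] ch \<open>k < n\<close> in blast)
      then show False using T'(2) s by (metis le_Suc_eq less_irrefl)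
    qed
  qed
  have "statuses_frozen_from T'"
    using const_from_step[where f="\<lambda>s. txn_status (S s)", OF same] by blast
  then show ?thesis using T'(1) by blast
qed

lemma loop_after_done:
  assumes "pc s t = PLoop x" "done_marker (S s)"
  shows "s' \<ge> s \<Longrightarrow> pc s' t = PLoop x \<or> pc s' t = PJoined"
proof (induction s' rule: dec_induct)
  case (step y)
  have "done_marker (S y)" using done_marker_mono_run[OF step.hyps(1) assms(2)] .
  then show ?case using run_step[of y] run_step_other[of t y] step.IH by (cases "sched y = t") auto
qed (use assms in simp)

abbreviation incarnates :: "nat \<Rightarrow> nat \<Rightarrow> bool" where
  "incarnates u s \<equiv> sched s = u
     \<and> (\<exists>k. snd (stat s k) = READY_TO_EXECUTE \<and> snd (stat (Suc s) k) \<noteq> READY_TO_EXECUTE)"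

text \<open>After done_marker, a thread that incarnates a transaction is left holding the execution task
  at the top of the loop, where it can only join.\<close>

lemma incarnates_once_after_done:
  assumes d: "done_marker (S sd)"
  shows "\<exists>s0\<ge>sd. \<forall>s\<ge>s0. \<not> incarnates u s"
proof (cases "\<exists>s\<ge>sd. incarnates u s")
  case True
  then obtain s k where s: "s \<ge> sd" "sched s = u" "snd (stat s k) = READY_TO_EXECUTE"
      "snd (stat (Suc s) k) \<noteq> READY_TO_EXECUTE"
    by blast
  obtain i where holding: "pc (Suc s) u = PLoop (Some (ExecTask k i))"
    using inv_step.incarnation_step[OF inv_step_run[of s] s(3,4)] s(2) by auto
  have ds: "done_marker (S (Suc s))" using done_marker_mono_run[OF _ d] s(1) by simp
  have "\<not> incarnates u s'" if s': "s' \<ge> Suc s" for s'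
  proof
    assume inc: "incarnates u s'"
    then obtain k' i' where "pc (Suc s') u = PLoop (Some (ExecTask k' i'))"
      using inv_step.incarnation_step[OF inv_step_run[of s']] by blast
    moreover have "pc s' u = PLoop (Some (ExecTask k i)) \<or> pc s' u = PJoined"
      using loop_after_done[OF holding ds s'] .
    moreover have "done_marker (S s')" using done_marker_mono_run[OF s' ds] .
    ultimately show False using run_step[of s'] inc by auto
  qed
  then show ?thesis using s(1) by (intro exI[of _ "Suc s"]) auto
qed blast

lemma joins_after_done:
  assumes d: "done_marker (S sd)" and t: "t < m"
  shows "\<exists>s. joined (\<rho> s) t"
proof -
  obtain T where T: "T \<ge> sd" "\<forall>s\<ge>T. \<forall>u<m. \<not> incarnates u s"
    using eventually_all_below[of m sd "\<lambda>s u. incarnates u s"] incarnates_once_after_done[OF d]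
    by blast
  have "snd (stat (Suc s) k) = READY_TO_EXECUTE"
    if "s \<ge> T" "snd (stat s k) = READY_TO_EXECUTE" for s k
    using T(2) that sched_lt[of s] by blast
  then obtain T' where T': "T' \<ge> T" "statuses_frozen_from T'"
    using status_eventually_const by blast
  obtain s1 where s1: "s1 \<ge> T'" "pc s1 t = PLoop None \<or> pc s1 t = PJoined"
    using returns_to_loop[OF T'(2) t order_refl] by blast
  show ?thesis
  proof (cases "pc s1 t = PJoined")
    case True
    then show ?thesis unfolding joined_def by blast
  next
    case False
    then have "pc s1 t = PLoop None" using s1 by simp
    then obtain a where a: "a \<ge> s1" "pc (Suc a) t = snd (tstep n vstep txn init (S a) (PLoop None))"
      using takes_step[OF t] by blast
    have "done_marker (S a)" using done_marker_mono_run[OF _ d] a(1) s1(1) T'(1) T(1) by simp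
    then have "pc (Suc a) t = PJoined" using a by simp
    then show ?thesis unfolding joined_def by blast
  qed
qed

end

section \<open>Settled prefixes of the block\<close>

fun exec_read_set :: "('l, 'v, 's) pc \<Rightarrow> (nat \<times> nat \<times> 'l rset) option" where
  "exec_read_set (PExec k i _ _ _ rs) = Some (k, i, rs)"
| "exec_read_set (PRW k i _ rs _ _) = Some (k, i, rs)"
| "exec_read_set (PRD k i _ rs _ _) = Some (k, i, rs)"
| "exec_read_set (PRL k i _ rs _) = Some (k, i, rs)"
| "exec_read_set (PRR k i rs _) = Some (k, i, rs)"
| "exec_read_set _ = None"

lemma exec_read_set_task: "exec_read_set p = Some (k, i, rs) \<Longrightarrow> exec_task p = Some (k, i)"
  by (cases p) auto

text \<open>Invariant for transaction j once every transaction below j is settled, j being at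
  incarnation iT and Rok being the (from then on stable) outcome of re-reading an entry:
  incarnations above iT only record reads that validate, then have are never aborted, so the
  incarnation number of j stays at most iT + 1.\<close>

definition reads_inv ::
    "nat \<Rightarrow> nat \<Rightarrow> ('l \<times> version option \<Rightarrow> bool) \<Rightarrow> ('l, 'v) shared \<Rightarrow> ('l, 'v, 's) pcs \<Rightarrow> bool" where
  "reads_inv j iT Rok \<sigma> pcs \<longleftrightarrow>
     (\<forall>t i b. pcs t = PDep j i b \<longrightarrow> i \<le> iT)
   \<and> (\<forall>t i rs. exec_read_set (pcs t) = Some (j, i, rs) \<longrightarrow> iT < i \<longrightarrow> (\<forall>e\<in>set rs. Rok e))
   \<and> (\<forall>t i w. pcs t = PF0 j i w \<longrightarrow> iT < i \<longrightarrow> (\<forall>e\<in>set (last_read_set \<sigma> j). Rok e))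
   \<and> (\<forall>i. txn_status \<sigma> j = (i, EXECUTED) \<longrightarrow> iT < i \<longrightarrow> (\<forall>e\<in>set (last_read_set \<sigma> j). Rok e))
   \<and> (\<forall>t i RS. pcs t = PV1 j i RS \<longrightarrow> txn_status \<sigma> j = (i, EXECUTED) \<longrightarrow> iT < i \<longrightarrow>
        (\<forall>e\<in>set RS. Rok e))
   \<and> (\<forall>t i. pcs t = PVA j i \<longrightarrow> txn_status \<sigma> j = (i, EXECUTED) \<longrightarrow> i \<le> iT)
   \<and> fst (txn_status \<sigma> j) \<le> iT + 1 \<and> (\<forall>i. txn_status \<sigma> j = (i, ABORTING) \<longrightarrow> i \<le> iT)"

lemma reads_invD:
  assumes "reads_inv j iT Rok \<sigma> pcs"
  shows "pcs t = PDep j i b \<Longrightarrow> i \<le> iT"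
    and "exec_read_set (pcs t) = Some (j, i, rs) \<Longrightarrow> iT < i \<Longrightarrow> \<forall>e\<in>set rs. Rok e"
    and "pcs t = PF0 j i w \<Longrightarrow> iT < i \<Longrightarrow> \<forall>e\<in>set (last_read_set \<sigma> j). Rok e"
    and "txn_status \<sigma> j = (i, EXECUTED) \<Longrightarrow> iT < i \<Longrightarrow> \<forall>e\<in>set (last_read_set \<sigma> j). Rok e"
    and "pcs t = PV1 j i RS \<Longrightarrow> txn_status \<sigma> j = (i, EXECUTED) \<Longrightarrow> iT < i \<Longrightarrow> \<forall>e\<in>set RS. Rok e"
    and "pcs t = PVA j i \<Longrightarrow> txn_status \<sigma> j = (i, EXECUTED) \<Longrightarrow> i \<le> iT"
    and "fst (txn_status \<sigma> j) \<le> iT + 1"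
    and "txn_status \<sigma> j = (i, ABORTING) \<Longrightarrow> i \<le> iT"
  using assms unfolding reads_inv_def by blast+

context inv_step
begin

lemma validation_status_unchanged:
  assumes "validation_task (pcs t) = Some (j, i)" "txn_status \<sigma>' j = (i, EXECUTED)"
  shows "txn_status \<sigma> j = (i, EXECUTED)"
proof (rule ccontr)
  assume "txn_status \<sigma> j \<noteq> (i, EXECUTED)"
  then have "txn_status \<sigma>' j \<noteq> txn_status \<sigma> j" using assms(2) by simp
  then have "status_step (txn_status \<sigma> j) (i, EXECUTED)" using status_change_step assms(2) by metis
  then have "txn_status \<sigma> j = (i, EXECUTING)"
    by (cases "txn_status \<sigma> j") (auto simp: status_step_def)
  moreover have "status_code (i, EXECUTED) \<le> status_code (txn_status \<sigma> j)"
    using validation_task_status[OF assms(1)] by simp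
  ultimately show False by (simp add: status_code_def)
qed

context
  fixes j iT Rok
  assumes J: "reads_inv j iT Rok \<sigma> pcs" and H: "\<forall>e. read_ok \<sigma> j e = Rok e"
    and HE: "\<forall>l b. mv_read \<sigma> l j \<noteq> READ_ERROR b"
begin

lemma reads_inv_step_dep: "(pcs(u := p')) t = PDep j i b \<Longrightarrow> i \<le> iT"
proof (cases "t = u")
  case True
  assume "(pcs(u := p')) t = PDep j i b"
  then have "p' = PDep j i b" using True by simp
  then show ?thesis using step HE reads_invD(1)[OF J, of u]
    by (cases "pcs u") (auto simp: upd_status_def upd_data_def Let_def split: tstep_splits)
qed (use reads_invD(1)[OF J] in simp)

lemma reads_inv_step_read_set:
  assumes h: "exec_read_set ((pcs(u := p')) t) = Some (j, i, rs)" "iT < i"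
  shows "\<forall>e\<in>set rs. Rok e"
proof (cases "t = u")
  case True
  have rok_ok: "mv_read \<sigma> l j = OK ver v \<Longrightarrow> Rok (l, Some ver)" for l ver v
    using H[rule_format, of "(l, Some ver)"] by (simp add: read_ok_def)
  have rok_nf: "mv_read \<sigma> l j = NOT_FOUND \<Longrightarrow> Rok (l, None)" for l
    using H[rule_format, of "(l, None)"] by (simp add: read_ok_def)
  have "exec_read_set p' = Some (j, i, rs)" using h True by simp
  then show ?thesis using step h(2) reads_invD(2)[OF J, of u] rok_ok rok_nf
    by (cases "pcs u") (auto simp: upd_status_def upd_data_def Let_def split: tstep_splits)
qed (use h reads_invD(2)[OF J] in simp)

lemma reads_inv_step_finish_start:
  assumes h: "(pcs(u := p')) t = PF0 j i w" "iT < i"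
  shows "\<forall>e\<in>set (last_read_set \<sigma>' j). Rok e"
proof (cases "t = u")
  case True
  then have h': "p' = PF0 j i w" using h by simp
  show ?thesis
  proof (cases "pcs u")
    case (PRR k0 i0 rs0 w0)
    then have "k0 = j \<and> i0 = i \<and> last_read_set \<sigma>' j = rs0" using step h' by auto
    then show ?thesis using reads_invD(2)[OF J, of u i rs0] PRR h(2) by simp
  qed (use step h' in \<open>auto simp: upd_status_def upd_data_def Let_def split: tstep_splits\<close>)
next
  case False
  then have pt: "pcs t = PF0 j i w" using h by simp
  have "last_read_set \<sigma>' j = last_read_set \<sigma> j"
  proof (rule ccontr)
    assume "last_read_set \<sigma>' j \<noteq> last_read_set \<sigma> j"
    then obtain i' rs w' where "pcs u = PRR j i' rs w'" using last_read_set_change by blast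
    then have "exec_task (pcs u) = Some (j, i')" by simp
    moreover have "exec_task (pcs t) = Some (j, i)" using pt by simp
    ultimately show False using exec_task_unique False by blast
  qed
  then show ?thesis using reads_invD(3)[OF J pt h(2)] by simp
qed

lemma reads_inv_step_executed:
  assumes h: "txn_status \<sigma>' j = (i, EXECUTED)" "iT < i"
  shows "\<forall>e\<in>set (last_read_set \<sigma>' j). Rok e"
proof (cases "txn_status \<sigma>' j = txn_status \<sigma> j")
  case True
  have "last_read_set \<sigma>' j = last_read_set \<sigma> j"
  proof (rule ccontr)
    assume "last_read_set \<sigma>' j \<noteq> last_read_set \<sigma> j"
    then obtain i' rs w where "pcs u = PRR j i' rs w" using last_read_set_change by blast
    then have "txn_status \<sigma> j = (i', EXECUTING)" using exec_task_status[of u j i'] by simp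
    then show False using True h by simp
  qed
  then show ?thesis using reads_invD(4)[OF J, of i] True h by simp
next
  case False
  have "status_step (txn_status \<sigma> j) (i, EXECUTED)" using status_change_step[OF False] h by simp
  then have old: "txn_status \<sigma> j = (i, EXECUTING)"
    by (cases "txn_status \<sigma> j") (auto simp: status_step_def)
  from status_change_cases[OF False] obtain w where pu: "pcs u = PF0 j i w"
  proof (elim disjE exE conjE)
    fix i' assume e: "exec_task (pcs u) = Some (j, i')"
    then have "i' = i" using exec_task_status old by fastforce
    then show thesis using e step h that False
      by (cases "pcs u") (auto simp: upd_status_def upd_data_def Let_def split: tstep_splits)
  qed (use old step h False in \<open>auto simp: upd_status_def split: if_splits\<close>)
  have "last_read_set \<sigma>' j = last_read_set \<sigma> j" using step pu by (auto simp: upd_status_def)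
  then show ?thesis using reads_invD(3)[OF J pu h(2)] by simp
qed

lemma reads_inv_step_validating:
  assumes h: "(pcs(u := p')) t = PV1 j i RS" "txn_status \<sigma>' j = (i, EXECUTED)" "iT < i"
  shows "\<forall>e\<in>set RS. Rok e"
proof (cases "t = u")
  case True
  then have h': "p' = PV1 j i RS" using h by simp
  show ?thesis
  proof (cases "pcs u")
    case (PV0 k0 i0)
    then have "k0 = j \<and> i0 = i \<and> RS = last_read_set \<sigma> j \<and> \<sigma>' = \<sigma>" using step h' by auto
    then show ?thesis using reads_invD(4)[OF J, of i] h by simp
  next
    case (PV1 k0 i0 RS0)
    then have "k0 = j \<and> i0 = i \<and> \<sigma>' = \<sigma> \<and> (\<exists>e. RS0 = e # RS)"
      using step h' by (cases RS0) (auto split: if_splits)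
    then show ?thesis using reads_invD(5)[OF J, of u i RS0] PV1 h by auto
  qed (use step h' in \<open>auto simp: upd_status_def upd_data_def Let_def split: tstep_splits\<close>)
next
  case False
  then have pt: "pcs t = PV1 j i RS" using h by simp
  have "txn_status \<sigma> j = (i, EXECUTED)" using validation_status_unchanged[of t j i] pt h by simp
  then show ?thesis using reads_invD(5)[OF J pt] h by simp
qed

lemma reads_inv_step_validation_abort:
  assumes h: "(pcs(u := p')) t = PVA j i" "txn_status \<sigma>' j = (i, EXECUTED)"
  shows "i \<le> iT"
proof (cases "t = u")
  case True
  then have h': "p' = PVA j i" using h by simp
  show ?thesis
  proof (cases "pcs u")
    case (PV1 k0 i0 RS0)
    then obtain e RS1 where e: "RS0 = e # RS1" "k0 = j" "i0 = i" "\<sigma>' = \<sigma>" "\<not> read_ok \<sigma> j e"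
      using step h' by (cases RS0) (auto split: if_splits)
    show ?thesis
    proof (rule ccontr)
      assume "\<not> i \<le> iT"
      then have "Rok e" using reads_invD(5)[OF J, of u i RS0] PV1 e h by simp
      then show False using H[rule_format, of e] e by simp
    qed
  qed (use step h' in \<open>auto simp: upd_status_def upd_data_def Let_def split: tstep_splits\<close>)
next
  case False
  then have pt: "pcs t = PVA j i" using h by simp
  have "txn_status \<sigma> j = (i, EXECUTED)" using validation_status_unchanged[of t j i] pt h by simp
  then show ?thesis using reads_invD(6)[OF J pt] by simp
qed

lemma reads_inv_step_incarnation:
  "fst (txn_status \<sigma>' j) \<le> iT + 1 \<and> (\<forall>i. txn_status \<sigma>' j = (i, ABORTING) \<longrightarrow> i \<le> iT)"
proof (cases "txn_status \<sigma>' j = txn_status \<sigma> j")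
  case True
  then show ?thesis using reads_invD(7,8)[OF J] by simp
next
  case False
  note J' = reads_invD[OF J]
  have step': "status_step (txn_status \<sigma> j) (txn_status \<sigma>' j)" using status_change_step[OF False] .
  show ?thesis
  proof (cases "snd (txn_status \<sigma> j) = ABORTING")
    case True
    then have "txn_status \<sigma>' j = (fst (txn_status \<sigma> j) + 1, READY_TO_EXECUTE)"
      using step' by (auto simp: status_step_def)
    moreover have "fst (txn_status \<sigma> j) \<le> iT" using J'(8)[of "fst (txn_status \<sigma> j)"] True
      by (metis prod.collapse)
    ultimately show ?thesis by simp
  next
    case nA: False
    then have fs: "fst (txn_status \<sigma>' j) = fst (txn_status \<sigma> j)" using step'
      by (auto simp: status_step_def)
    have "i \<le> iT" if ab: "txn_status \<sigma>' j = (i, ABORTING)" for i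
    proof -
      have fi: "fst (txn_status \<sigma> j) = i" using fs ab by simp
      from status_change_cases[OF False] show ?thesis
      proof (elim disjE exE conjE)
        fix i' assume e: "exec_task (pcs u) = Some (j, i')"
        have old: "txn_status \<sigma> j = (i', EXECUTING)" using exec_task_status e by blast
        then have ii: "i' = i" using fi by simp
        show ?thesis
        proof (cases "pcs u")
          case (PDep k0 i0 b)
          then show ?thesis using e ii J'(1)[of u i' b] by simp
        qed (use e step ab old in
            \<open>auto simp: upd_status_def upd_data_def Let_def split: tstep_splits\<close>)
      next
        fix i' assume "pcs u = PVA j i'" "txn_status \<sigma> j = (i', EXECUTED)"
        then show ?thesis using J'(6)[of u i'] fi by simp
      qed (use step ab False nA in \<open>auto simp: upd_status_def split: if_splits\<close>)
    qed
    then show ?thesis using fs J'(7) by simp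
  qed
qed

lemma reads_inv_step: "reads_inv j iT Rok \<sigma>' (pcs(u := p'))"
  unfolding reads_inv_def
  using reads_inv_step_dep reads_inv_step_read_set reads_inv_step_finish_start
    reads_inv_step_executed reads_inv_step_validating reads_inv_step_validation_abort
    reads_inv_step_incarnation by blast

end

end

context blockstm_run
begin

definition settled :: "nat \<Rightarrow> nat \<Rightarrow> bool" where
  "settled j T \<longleftrightarrow> (\<forall>s\<ge>T. \<forall>k<j. stat s k = stat T k \<and> snd (stat T k) = EXECUTED
      \<and> (\<forall>p. data (S s) p k = data (S T) p k))"

lemma settled_at:
  assumes "settled j T" "s \<ge> T" "k < j"
  shows "stat s k = stat T k \<and> snd (stat T k) = EXECUTED \<and> data (S s) p k = data (S T) p k"
  using assms unfolding settled_def by blast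

lemma settled_mv_read:
  assumes "settled j T" "s \<ge> T"
  shows "mv_read (S s) l j = mv_read (S T) l j"
  by (rule mv_read_cong_below) (use settled_at[OF assms] in blast)

lemma settled_read_ok:
  assumes "settled j T" "s \<ge> T"
  shows "read_ok (S s) j e = read_ok (S T) j e"
  unfolding read_ok_def using settled_mv_read[OF assms] by simp

lemma settled_no_read_error:
  assumes st: "settled j T" and s: "s \<ge> T"
  shows "mv_read (S s) l j \<noteq> READ_ERROR b"
proof
  assume "mv_read (S s) l j = READ_ERROR b"
  from mv_read_READ_ERROR[OF this] have b: "b < j" "data (S s) l b = Some ESTIMATE" by auto
  have "snd (stat s b) \<noteq> EXECUTED" using estimate_not_executed_run[OF b(2)] .
  moreover have "stat s b = stat T b" "snd (stat T b) = EXECUTED" using settled_at[OF st s b(1)]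
    by auto
  ultimately show False by simp
qed

lemma blockers_unexecuted_settled: "settled j T \<Longrightarrow> s \<ge> T \<Longrightarrow> blockers_unexecuted j s"
  using settled_no_read_error by (meson order_trans)

lemma reads_inv_run:
  assumes st: "settled j T"
  shows "s \<ge> T \<Longrightarrow> reads_inv j (fst (stat T j)) (read_ok (S T) j) (S s) (snd (\<rho> s))"
proof (induction s rule: dec_induct)
  case base
  let ?iT = "fst (stat T j)"
  have exT: "exec_task (pc T t) = Some (j, i) \<Longrightarrow> i = ?iT" for t i
    using exec_task_status_run[of T t j i] by simp
  show ?case unfolding reads_inv_def
  proof (intro conjI allI impI)
    fix t i b assume "pc T t = PDep j i b"
    then show "i \<le> ?iT" using exT[of t i] by simp
  next
    fix t i rs assume "exec_read_set (pc T t) = Some (j, i, rs)" "?iT < i"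
    then show "\<forall>e\<in>set rs. read_ok (S T) j e" using exT[of t i] exec_read_set_task by fastforce
  next
    fix t i w assume "pc T t = PF0 j i w" "?iT < i"
    then show "\<forall>e\<in>set (last_read_set (S T) j). read_ok (S T) j e" using exT[of t i] by simp
  qed auto
next
  case (step x)
  have H: "\<forall>e. read_ok (S x) j e = read_ok (S T) j e" using settled_read_ok[OF st step.hyps(1)]
    by blast
  have HE: "\<forall>l b. mv_read (S x) l j \<noteq> READ_ERROR b"
    using settled_no_read_error[OF st step.hyps(1)]
      by blast
  have "reads_inv j (fst (stat T j)) (read_ok (S T) j) (S (Suc x))
      ((snd (\<rho> x))(sched x := pc (Suc x) (sched x)))"
    using inv_step.reads_inv_step[OF inv_step_run[of x] step.IH H HE] .
  then show ?case using run_pcs_Suc[of x] by simp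
qed

text \<open>The status code of j is monotone and, by reads_inv, bounded once j's prefix is settled.\<close>

lemma settled_status_eventually_const:
  assumes st: "settled j T"
  shows "\<exists>TA\<ge>T. \<forall>s\<ge>TA. stat s j = stat TA j"
proof -
  let ?iT = "fst (stat T j)"
  have bd: "status_code (stat s j) \<le> 4 * (?iT + 1) + 2" if "s \<ge> T" for s
  proof -
    obtain a b where ab: "stat s j = (a, b)" by fastforce
    have J: "a \<le> ?iT + 1" "b = ABORTING \<Longrightarrow> a \<le> ?iT"
      using reads_invD(7,8)[OF reads_inv_run[OF st that]] ab by auto
    show ?thesis using J ab by (cases b) (auto simp: status_code_def)
  qed
  obtain TA where TA: "TA \<ge> T" "\<forall>s\<ge>TA. status_code (stat s j) = status_code (stat TA j)"
    using mono_bounded_eventually_const[of T "\<lambda>s. status_code (stat s j)",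
        OF status_code_mono_run bd]
    by blast
  then show ?thesis using status_code_inj by blast
qed

lemma settled_not_executing:
  assumes nd: "\<forall>s. \<not> done_marker (S s)" and st: "settled j T"
    and TA: "TA \<ge> T" "\<forall>s\<ge>TA. stat s j = (i, EXECUTING)" and jn: "j < n"
  shows False
proof -
  obtain t where t: "exec_task (pc TA t) = Some (j, i)"
    using executing_has_thread[of TA j i] nd TA jn by auto
  have tm: "t < m" using active_thread_lt[of TA t] t by (cases "pc TA t = PLoop None") auto
  have "\<exists>s\<ge>TA. stat s j \<noteq> (i, EXECUTING)"
  proof (rule wf_progress[where R="\<lambda>p. exec_task p = Some (j, i)" and f=pc_rank and r=rank_less,
        OF wf_rank_less t])
    fix s assume ss: "s \<ge> TA" and r: "exec_task (pc s t) = Some (j, i)"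
    have "s \<ge> T" using ss TA(1) by simp
    then have H: "blockers_unexecuted j s" by (rule blockers_unexecuted_settled[OF st])
    show "\<exists>s'>s. stat s' j \<noteq> (i, EXECUTING)
      \<or> exec_task (pc s' t) = Some (j, i) \<and> (pc_rank (pc s' t), pc_rank (pc s t)) \<in> rank_less"
    proof (cases "in_vm (pc s t)")
      case True
      show ?thesis
      proof (cases "pc s t")
        case (PExec k0 i0 st0 wb wl rs)
        then have "pc s t = PExec j i st0 wb wl rs" using r by auto
        then obtain s' where "s' > s" "left_vm t j i s'"
          using exec_progress[OF tm wait_free_run[OF PExec]] H by blast
        then show ?thesis using PExec by (auto simp: rank_less_def)
      next
        case (PDep k0 i0 b)
        then have "pc s t = PDep j i b" using r by auto
        then obtain s' where "s' > s" "left_vm t j i s'" using dep_progress[OF tm] H by blast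
        then show ?thesis using PDep by (auto simp: rank_less_def)
      qed (use True in auto)
    next
      case False
      have "pc s t \<noteq> PJoined" using r by auto
      then obtain s1 where s1: "s1 \<ge> s"
          "tstep n vstep txn init (S s1) (pc s t) = (S (Suc s1), pc (Suc s1) t)"
        using next_step_of[OF tm refl] by blast
      then show ?thesis
        using exec_task_advance[OF s1(2) r False] nd by (intro exI[of _ "Suc s1"]) auto
    qed
  qed
  then show False using TA(2) by auto
qed

lemma abort_task_progress:
  assumes tm: "t < m" and r0: "abort_task (pc s0 t) = Some (j, i)"
  shows "\<exists>s\<ge>s0. snd (stat s j) = READY_TO_EXECUTE"
proof (rule wf_progress[where R="\<lambda>p. abort_task p = Some (j, i)" and f=pc_rank and r=rank_less,
      OF wf_rank_less r0])
  fix s assume r: "abort_task (pc s t) = Some (j, i)"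
  have "pc s t \<noteq> PJoined" using r by auto
  then obtain s1 where s1: "s1 \<ge> s"
    "tstep n vstep txn init (S s1) (pc s t) = (S (Suc s1), pc (Suc s1) t)"
    using next_step_of[OF tm refl] by blast
  then show "\<exists>s'>s. snd (stat s' j) = READY_TO_EXECUTE
      \<or> abort_task (pc s' t) = Some (j, i) \<and> (pc_rank (pc s' t), pc_rank (pc s t)) \<in> rank_less"
    using abort_task_advance[OF s1(2) r] by (intro exI[of _ "Suc s1"]) auto
qed

lemma resume_progress:
  assumes tm: "t < m" and r0: "j \<in> resume_list (pc s0 t)"
  shows "\<exists>s\<ge>s0. snd (stat s j) = READY_TO_EXECUTE"
proof (rule wf_progress[where R="\<lambda>p. j \<in> resume_list p" and f=pc_rank and r=rank_less,
      OF wf_rank_less r0])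
  fix s assume "j \<in> resume_list (pc s t)"
  then obtain b i w L Ds where r: "pc s t = PF2 b i w L Ds" "j \<in> set L"
    by (cases "pc s t") auto
  have "pc s t \<noteq> PJoined" using r by auto
  then obtain s1 where s1: "s1 \<ge> s"
    "tstep n vstep txn init (S s1) (pc s t) = (S (Suc s1), pc (Suc s1) t)"
    using next_step_of[OF tm refl] by blast
  from resume_advance[OF s1(2) r] show "\<exists>s'>s. snd (stat s' j) = READY_TO_EXECUTE
      \<or> j \<in> resume_list (pc s' t) \<and> (pc_rank (pc s' t), pc_rank (pc s t)) \<in> rank_less"
    using s1(1) by (intro exI[of _ "Suc s1"]) auto
qed

lemma thread_owner_resets:
  assumes "owns (S s0) (snd (\<rho> s0)) j x" and "\<forall>b. x \<noteq> OwnDep b"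
  shows "\<exists>s\<ge>s0. snd (stat s j) = READY_TO_EXECUTE"
proof (cases x)
  case (OwnResume t)
  then have "j \<in> resume_list (pc s0 t)" using assms(1) by simp
  moreover have "t < m" using active_thread_lt[of s0 t] calculation
    by (cases "pc s0 t = PLoop None") auto
  ultimately show ?thesis using resume_progress by blast
next
  case (OwnAbort t)
  then obtain i where v: "abort_task (pc s0 t) = Some (j, i)" using assms(1) by auto
  have "t < m" using active_thread_lt[of s0 t] v by (cases "pc s0 t = PLoop None") auto
  then show ?thesis using abort_task_progress v by blast
qed (use assms(2) in blast)

lemma not_added_while_aborting:
  assumes ab: "\<forall>s\<ge>s0. snd (stat s j) = ABORTING" and "j \<notin> txn_dependency (S s0) b"
  shows "s \<ge> s0 \<Longrightarrow> j \<notin> txn_dependency (S s) b"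
proof (induction s rule: dec_induct)
  case (step y)
  show ?case
  proof
    assume jin: "j \<in> txn_dependency (S (Suc y)) b"
    then have "txn_dependency (S (Suc y)) b \<noteq> txn_dependency (S y) b" using step.IH by auto
    from inv_step.dependency_change_cases[OF inv_step_run[of y] this] jin step.IH
    obtain i where "pc y (sched y) = PDep j i b" by auto
    then have "stat y j = (i, EXECUTING)" using exec_task_status_run[of y "sched y" j i] by simp
    then show False using ab step.hyps(1) by auto
  qed
qed (use assms(2) in simp)

text \<open>An ABORTING transaction j waiting in the dependency set of some b < j is handed to a
  resuming thread once b, which is settled, has been finished; that thread then resets j.\<close>

lemma settled_not_aborting:
  assumes nd: "\<forall>s. \<not> done_marker (S s)" and st: "settled j T"
    and TA: "TA \<ge> T" "\<forall>s\<ge>TA. stat s j = (i, ABORTING)" and jn: "j < n"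
  shows False
proof -
  have ab: "\<forall>s\<ge>TA. snd (stat s j) = ABORTING" using TA(2) by simp
  have never_reset: "\<not> (\<exists>s\<ge>s0. snd (stat s j) = READY_TO_EXECUTE)" if "s0 \<ge> TA" for s0
    using ab that by fastforce
  obtain x where x: "owns (S TA) (snd (\<rho> TA)) j x" using aborting_has_owner[of TA j] nd ab jn
    by auto
  show False
  proof (cases "\<exists>b. x = OwnDep b")
    case False
    then show ?thesis using thread_owner_resets[OF x] never_reset by blast
  next
    case True
    then obtain b where xb: "x = OwnDep b" by blast
    have jb: "j \<in> txn_dependency (S TA) b" using x xb by simp
    have "b < j" using dep_set_member_run[OF jb] by simp
    then have "snd (stat TA b) = EXECUTED" using settled_at[OF st TA(1)] by simp
    then obtain t i' w where pt: "pc TA t = PF1 b i' w" using executed_dep_resumer[OF _ jb] nd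
      by blast
    obtain s1 where s1: "s1 \<ge> TA"
        "tstep n vstep txn init (S s1) (PF1 b i' w) = (S (Suc s1), pc (Suc s1) t)"
      using next_step_of[OF active_thread_lt pt] pt by fastforce
    have "txn_dependency (S (Suc s1)) b = {}" using s1(2)[symmetric] by (auto simp: Let_def)
    moreover have "j \<notin> txn_dependency (S (Suc s1)) b'" if "b' \<noteq> b" for b'
    proof (rule not_added_while_aborting[OF ab])
      show "j \<notin> txn_dependency (S TA) b'" using owner_unique_run[OF x, of "OwnDep b'"] xb that
        by auto
    qed (use s1(1) in simp)
    moreover obtain x' where x': "owns (S (Suc s1)) (snd (\<rho> (Suc s1))) j x'"
      using aborting_has_owner[of "Suc s1" j] nd ab s1(1) jn by auto
    ultimately have "\<forall>b. x' \<noteq> OwnDep b" by (metis empty_iff owns.simps(1))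
    then show False using thread_owner_resets[OF x'] never_reset s1(1) by (meson le_SucI)
  qed
qed

lemma ready_exec_idx_reaches:
  assumes nd: "\<forall>s. \<not> done_marker (S s)" and jn: "j < n"
    and stuck: "\<forall>s\<ge>TA. stat s j = (i, READY_TO_EXECUTE)"
  shows "\<exists>s\<ge>TA. execution_idx (S s) \<le> j"
proof (cases "execution_idx (S TA) \<le> j")
  case False
  then obtain t where t: "exec_idx_witness j (pc TA t)"
    using ready_witness[of TA j] nd jn stuck by auto
  have tm: "t < m" using active_thread_lt[of TA t] t by (auto simp: exec_idx_witness_def)
  show ?thesis
  proof (rule wf_progress[where R="exec_idx_witness j" and f=pc_rank and r=rank_less,
        OF wf_rank_less t])
    fix s assume ss: "s \<ge> TA" and r: "exec_idx_witness j (pc s t)"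
    have "pc s t \<noteq> PJoined" using r by (auto simp: exec_idx_witness_def)
    then obtain s1 where s1: "s1 \<ge> s"
        "tstep n vstep txn init (S s1) (pc s t) = (S (Suc s1), pc (Suc s1) t)"
      using next_step_of[OF tm refl] by blast
    have "txn_status (S (Suc s1)) j = txn_status (S s1) j"
      "snd (txn_status (S s1) j) = READY_TO_EXECUTE"
      using stuck s1(1) ss by (metis le_SucI order_trans, metis order_trans snd_conv)
    then show "\<exists>s'>s. execution_idx (S s') \<le> j
        \<or> exec_idx_witness j (pc s' t) \<and> (pc_rank (pc s' t), pc_rank (pc s t)) \<in> rank_less"
      using exec_idx_witness_advance[OF s1(2) r _ _ jn] s1(1) by (intro exI[of _ "Suc s1"]) auto
  qed
qed blast

text \<open>Raising execution_idx beyond j would make some thread incarnate j.\<close>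

lemma ready_exec_idx_stays:
  assumes stuck: "\<forall>s\<ge>TA. stat s j = (i, READY_TO_EXECUTE)" and jn: "j < n"
    and T1: "T1 \<ge> TA" "execution_idx (S T1) \<le> j"
  shows "s \<ge> T1 \<Longrightarrow> execution_idx (S s) \<le> j"
proof (induction s rule: dec_induct)
  case (step x)
  show ?case
  proof (rule ccontr)
    assume c: "\<not> execution_idx (S (Suc x)) \<le> j"
    then have "execution_idx (S (Suc x)) \<noteq> execution_idx (S x)" using step.IH by auto
    from inv_step.exec_idx_change_cases[OF inv_step_run[of x] this] c step.IH
    have "pc (Suc x) (sched x) = PTI j" by auto
    then obtain s2 where s2: "s2 \<ge> Suc x"
        "tstep n vstep txn init (S s2) (PTI j) = (S (Suc s2), pc (Suc s2) (sched x))"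
      using next_step_of[OF sched_lt] by blast
    have "stat s2 j = (i, READY_TO_EXECUTE)" using stuck s2(1) step.hyps(1) T1(1) by simp
    then have "snd (stat (Suc s2) j) = EXECUTING" using s2(2)[symmetric] jn
      by (auto simp: upd_status_def)
    then show False using stuck s2(1) step.hyps(1) T1(1)
      by (metis le_SucI order_trans snd_conv st.distinct(1))
  qed
qed (use T1 in simp)

lemma incarnation_points_vanish:
  assumes low: "\<forall>s\<ge>T1. execution_idx (S s) \<le> j"
  shows "\<exists>T2\<ge>T1. \<forall>s\<ge>T2. \<forall>t<m. \<not> (\<exists>k\<ge>j. pc s t = PTI k \<or> pc s t = PVT k)"
proof (rule eventually_all_below, intro allI impI)
  fix t assume tm: "t < m"
  define P where "P s \<longleftrightarrow> (\<exists>k\<ge>j. pc s t = PTI k \<or> pc s t = PVT k)" for s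
  obtain s0 where s0: "s0 \<ge> T1" "\<not> P s0"
  proof (cases "P T1")
    case True
    then obtain k where k: "pc T1 t = PTI k \<or> pc T1 t = PVT k" unfolding P_def by blast
    then have "pc T1 t \<noteq> PJoined" by auto
    then obtain s1 where s1: "s1 \<ge> T1"
        "tstep n vstep txn init (S s1) (pc T1 t) = (S (Suc s1), pc (Suc s1) t)"
      using next_step_of[OF tm refl] by blast
    have "\<not> P (Suc s1)" using k s1(2) unfolding P_def by (auto split: if_splits)
    then show thesis using that s1(1) by (meson le_SucI)
  qed (use that in blast)
  have "\<forall>s\<ge>s0. \<not> P s"
  proof (rule never_again[where P=P, OF _ s0(2)])
    fix s assume ss: "s \<ge> s0" and np: "\<not> P s"
    show "\<not> P (Suc s)"
    proof (cases "sched s = t")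
      case False
      then show ?thesis using run_step_other[of t s] np unfolding P_def by simp
    next
      case True
      have "execution_idx (S s) \<le> j" "execution_idx (S (Suc s)) \<le> j"
        using low ss s0(1) by (auto intro: le_SucI)
      then show ?thesis
        using incarnate_entry[OF run_step[of s, unfolded True]] np unfolding P_def by fastforce
    qed
  qed
  then show "\<exists>s0\<ge>T1. \<forall>s\<ge>s0. \<not> (\<exists>k\<ge>j. pc s t = PTI k \<or> pc s t = PVT k)"
    using s0(1) unfolding P_def by blast
qed

text \<open>If j stays READY_TO_EXECUTE, execution_idx eventually stays at most j, after which only
  transactions below j, all EXECUTED, could be incarnated: the statuses freeze, contradiction.\<close>

lemma settled_not_ready:
  assumes nd: "\<forall>s. \<not> done_marker (S s)" and m0: "0 < m" and st: "settled j T"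
    and TA: "TA \<ge> T" "\<forall>s\<ge>TA. stat s j = (i, READY_TO_EXECUTE)" and jn: "j < n"
  shows False
proof -
  obtain T1 where T1: "T1 \<ge> TA" "execution_idx (S T1) \<le> j"
    using ready_exec_idx_reaches[OF nd jn TA(2)] by blast
  have "\<forall>s\<ge>T1. execution_idx (S s) \<le> j" using ready_exec_idx_stays[OF TA(2) jn T1] by blast
  then obtain T2 where T2: "T2 \<ge> T1" "\<forall>s\<ge>T2. \<forall>t<m. \<not> (\<exists>k\<ge>j. pc s t = PTI k \<or> pc s t = PVT k)"
    using incarnation_points_vanish by blast
  have "snd (stat (Suc s) k) = READY_TO_EXECUTE"
    if s: "s \<ge> T2" and r: "snd (stat s k) = READY_TO_EXECUTE" for s k
  proof (rule ccontr)
    assume "snd (stat (Suc s) k) \<noteq> READY_TO_EXECUTE"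
    then have ch: "stat (Suc s) k \<noteq> stat s k" using r by auto
    have "pc s (sched s) = PTI k \<or> pc s (sched s) = PVT k"
      using inv_step.status_change_cases[OF inv_step_run[of s] ch]
    proof (elim disjE exE conjE)
      fix i' assume "exec_task (pc s (sched s)) = Some (k, i')"
      then show ?thesis using exec_task_status_run r by fastforce
    next
      fix b i' w L Ds assume "pc s (sched s) = PF2 b i' w (k # L) Ds"
      then show ?thesis using inv_step.resume_status[OF inv_step_run[of s], of "sched s"] r
        by fastforce
    next
      fix i' assume "pc s (sched s) = PS k i'"
      then show ?thesis using abort_task_status_run[of s "sched s" k i'] r by simp
    qed (use r in auto)
    moreover have "\<not> k < j"
      using settled_at[OF st, of s k] s T2(1) T1(1) TA(1) r by auto
    ultimately show False using T2(2) s sched_lt[of s] by (meson not_le)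
  qed
  then obtain T3 where "statuses_frozen_from T3" using status_eventually_const by blast
  then show False using frozen_status_sets_done[OF nd m0] by blast
qed

lemma settled_Suc:
  assumes st: "settled j T" and TA: "TA \<ge> T" "\<forall>s\<ge>TA. stat s j = (i, EXECUTED)"
  shows "settled (Suc j) TA"
proof -
  have data_j: "data (S s) p j = data (S TA) p j" if "s \<ge> TA" for s p
    using that
  proof (induction s rule: dec_induct)
    case (step x)
    have "data (S (Suc x)) p j = data (S x) p j"
    proof (rule ccontr)
      assume "data (S (Suc x)) p j \<noteq> data (S x) p j"
      from inv_step.data_change_cases[OF inv_step_run[of x] this]
      consider i' where "exec_task (pc x (sched x)) = Some (j, i')"
        | i' L where "pc x (sched x) = PC1 j i' (p # L)"
        using recording_exec_task by blast
      then show False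
      proof cases
        case 1
        then show False using exec_task_status_run TA(2) step.hyps(1) by fastforce
      next
        case 2
        then show False using abort_task_status_run[of x "sched x" j] TA(2) step.hyps(1)
          by fastforce
      qed
    qed
    then show ?case using step.IH by simp
  qed simp
  show ?thesis unfolding settled_def
  proof (intro allI impI)
    fix s k assume s: "s \<ge> TA" and k: "k < Suc j"
    show "stat s k = stat TA k \<and> snd (stat TA k) = EXECUTED
        \<and> (\<forall>p. data (S s) p k = data (S TA) p k)"
    proof (cases "k = j")
      case True
      then show ?thesis using TA(2) s data_j[OF s] by simp
    next
      case False
      then have "k < j" using k by simp
      then show ?thesis using settled_at[OF st, of s k] settled_at[OF st TA(1), of k] s TA(1)
        by auto
    qed
  qed
qed

lemma settled_extend:
  assumes nd: "\<forall>s. \<not> done_marker (S s)" and m0: "0 < m" and st: "settled j T" and jn: "j < n"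
  shows "\<exists>T'. settled (Suc j) T'"
proof -
  obtain TA where TA: "TA \<ge> T" "\<forall>s\<ge>TA. stat s j = stat TA j"
    using settled_status_eventually_const[OF st] by blast
  obtain i c where ic: "stat TA j = (i, c)" by fastforce
  have stuck: "\<forall>s\<ge>TA. stat s j = (i, c)" using TA(2) ic by metis
  show ?thesis
  proof (cases c)
    case READY_TO_EXECUTE
    then have "\<forall>s\<ge>TA. stat s j = (i, READY_TO_EXECUTE)" using stuck by simp
    from settled_not_ready[OF nd m0 st TA(1) this jn] show ?thesis ..
  next
    case EXECUTING
    then have "\<forall>s\<ge>TA. stat s j = (i, EXECUTING)" using stuck by simp
    from settled_not_executing[OF nd st TA(1) this jn] show ?thesis ..
  next
    case ABORTING
    then have "\<forall>s\<ge>TA. stat s j = (i, ABORTING)" using stuck by simp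
    from settled_not_aborting[OF nd st TA(1) this jn] show ?thesis ..
  next
    case EXECUTED
    then have "\<forall>s\<ge>TA. stat s j = (i, EXECUTED)" using stuck by simp
    from settled_Suc[OF st TA(1) this] show ?thesis ..
  qed
qed

lemma eventually_done:
  assumes m0: "0 < m"
  shows "\<exists>s. done_marker (S s)"
proof (rule ccontr)
  assume "\<not> (\<exists>s. done_marker (S s))"
  then have nd: "\<forall>s. \<not> done_marker (S s)" by blast
  have "j \<le> n \<Longrightarrow> \<exists>T. settled j T" for j
  proof (induction j)
    case 0
    show ?case unfolding settled_def by blast
  next
    case (Suc j)
    then show ?case using settled_extend[OF nd m0] by (meson Suc_leD Suc_le_lessD)
  qed
  then obtain T where st: "settled n T" by blast
  have "statuses_frozen_from T"
  proof (intro allI impI ext)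
    fix s k assume s: "s \<ge> T"
    show "stat s k = stat T k"
      using settled_at[OF st s, of k] beyond_block_run[of k] by (cases "k < n") auto
  qed
  then show False using frozen_status_sets_done[OF nd m0] by blast
qed

end

theorem mainTheorem5:
  fixes n m :: nat
    and vstep :: "'s \<Rightarrow> ('l, 'v, 's) instr"
    and txn :: "nat \<Rightarrow> 's"
    and init :: "'l \<Rightarrow> 'v"
    and \<rho> :: "nat \<Rightarrow> ('l, 'v, 's) gstate"
    and sched :: "nat \<Rightarrow> nat"
  assumes "is_run n vstep txn init m \<rho> sched"
    and "fair m \<rho> sched"
    and "\<forall>j < n. wait_free vstep (txn j)"
  shows "\<forall>t < m. \<exists>s. joined (\<rho> s) t"
proof -
  interpret blockstm_run n m vstep txn init \<rho> sched
    using assms by (rule blockstm_run.intro)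
  show ?thesis
  proof (intro allI impI)
    fix t assume "t < m"
    then obtain sd where "done_marker (S sd)" using eventually_done by auto
    then show "\<exists>s. joined (\<rho> s) t" using joins_after_done \<open>t < m\<close> by blast
  qed
qed

end
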